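(* Assume (A1) and (A2). For a connected multigraph $H$ let $Y_H$ be the number of components of $G^*(n,\mathbf d)$ isomorphic to $H$. Then: (i) if $H$ is a tree, $E Y_H=n\lambda_H+o(n)$; (ii) if $H_1,H_2$ are trees, $\mathrm{Cov}(Y_{H_1},Y_{H_2})=n\sigma_{H_1,H_2}+o(n)$; (iii) if $H$ is a connected unicyclic multigraph, $E Y_H\to\lambda_H$; moreover, for any distinct such multigraphs $H_1,\dots,H_k$ and integers $r_1,\dots,r_k\ge0$, $E\prod_{i=1}^k(Y_{H_i})_{r_i}\to\prod_{i=1}^k\lambda_{H_i}^{r_i}$; (iv) if $H$ is connected with $e(H)>v(H)$, then $E Y_H\to0$.
   Context: For each $n\ge1$ a degree sequence $\mathbf d=(d_1,\dots,d_n)$ of non-negative integers is given (depending on $n$), with even sum. $G^*(n,\mathbf d)$ is the configuration-model multigraph on $v_1,\dots,v_n$: $v_i$ receives $d_i$ half-edges and a uniformly random perfect matching of all half-edges is formed, each pair giving an edge (loops and multiple edges allowed; a loop contributes 2 to the degree). $n_k:=|\{i:d_i=k\}|$, $D_n$ with $P(D_n=k)=n_k/n$; limits as $n\to\infty$. (A1) there is a probability distribution $(p_k)_{k\ge0}$ with $n_k/n\to p_k$ for all $k$ and $\mu:=\sum_kkp_k\in(0,\infty)$. (A2) $E D_n\to\mu$. $(x)_r:=x(x-1)\cdots(x-r+1)$. For a multigraph $H$: $v(H)$, $e(H)$, $d_H(u)$, $n_k(H)$ (number of vertices of degree $k$), $\mathrm{aut}(H)$ (number of automorphisms). $\lambda_H:=\frac{\mu^{-e(H)}}{\mathrm{aut}(H)}\prod_{u\in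 V(H)}p_{d_H(u)}d_H(u)!$; $\sigma_{H_1,H_2}:=\delta_{H_1,H_2}\lambda_{H_1}+\lambda_{H_1}\lambda_{H_2}\big(\frac{2e(H_1)e(H_2)}\mu-\sum_{k\ge0}\frac{n_k(H_1)n_k(H_2)}{p_k}\big)$, $\delta_{H_1,H_2}=1$ iff $H_1\cong H_2$; conventions $0/0=0$, $0\cdot\infty=0$. *)

theory Defs
  imports "HOL-Probability.Probability" "HOL-Library.Landau_Symbols"
begin

text \<open>A loop is an edge whose two half-edges have the same owner (so it contributes 2 to
the degree).\<close>

record ('v, 'h) mgraph =
  verts :: "'v set"
  halfs :: "'h set"
  owner :: "'h \<Rightarrow> 'v"
  mate  :: "'h \<Rightarrow> 'h"

definition mg_wf :: "('v, 'h) mgraph \<Rightarrow> bool" where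
  "mg_wf H \<longleftrightarrow> finite (verts H) \<and> finite (halfs H) \<and> owner H ` halfs H \<subseteq> verts H \<and>
     (\<forall>h\<in>halfs H. mate H h \<in> halfs H \<and> mate H h \<noteq> h \<and> mate H (mate H h) = h)"

definition mg_v :: "('v, 'h) mgraph \<Rightarrow> nat" where
  "mg_v H = card (verts H)"

definition mg_e :: "('v, 'h) mgraph \<Rightarrow> nat" where
  "mg_e H = card (halfs H) div 2"

definition mg_deg :: "('v, 'h) mgraph \<Rightarrow> 'v \<Rightarrow> nat" where
  "mg_deg H u = card {h \<in> halfs H. owner H h = u}"

definition mg_nk :: "('v, 'h) mgraph \<Rightarrow> nat \<Rightarrow> nat" where
  "mg_nk H k = card {u \<in> verts H. mg_deg H u = k}"

definition mg_adj :: "('v, 'h) mgraph \<Rightarrow> ('v \<times> 'v) set" where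
  "mg_adj H = {(owner H h, owner H (mate H h)) | h. h \<in> halfs H}"

definition mg_connected :: "('v, 'h) mgraph \<Rightarrow> bool" where
  "mg_connected H \<longleftrightarrow> verts H \<noteq> {} \<and> (\<forall>u\<in>verts H. \<forall>w\<in>verts H. (u, w) \<in> (mg_adj H)\<^sup>*)"

definition mg_components :: "('v, 'h) mgraph \<Rightarrow> 'v set set" where
  "mg_components H = {{w \<in> verts H. (u, w) \<in> (mg_adj H)\<^sup>*} | u. u \<in> verts H}"

definition mg_restrict :: "('v, 'h) mgraph \<Rightarrow> 'v set \<Rightarrow> ('v, 'h) mgraph" where
  "mg_restrict H C = \<lparr>verts = C, halfs = {h \<in> halfs H. owner H h \<in> C},
                      owner = owner H, mate = mate H\<rparr>"

definition mg_iso :: "('v, 'h) mgraph \<Rightarrow> ('w, 'g) mgraph \<Rightarrow> bool" where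
  "mg_iso H1 H2 \<longleftrightarrow> (\<exists>\<phi> \<sigma>. bij_betw \<phi> (verts H1) (verts H2) \<and> bij_betw \<sigma> (halfs H1) (halfs H2) \<and>
     (\<forall>h\<in>halfs H1. owner H2 (\<sigma> h) = \<phi> (owner H1 h) \<and> mate H2 (\<sigma> h) = \<sigma> (mate H1 h)))"

text \<open>Automorphisms of a multigraph (acting on vertices and half-edges; thus e.g. a
loop can be flipped and parallel edges permuted).\<close>
definition mg_aut :: "('v, 'h) mgraph \<Rightarrow> nat" where
  "mg_aut H = card {(\<phi>, \<sigma>). \<phi> \<in> extensional (verts H) \<and> \<sigma> \<in> extensional (halfs H) \<and>
     bij_betw \<phi> (verts H) (verts H) \<and> bij_betw \<sigma> (halfs H) (halfs H) \<and>
     (\<forall>h\<in>halfs H. owner H (\<sigma> h) = \<phi> (owner H h) \<and> mate H (\<sigma> h) = \<sigma> (mate H h))}"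

definition mg_tree :: "('v, 'h) mgraph \<Rightarrow> bool" where
  "mg_tree H \<longleftrightarrow> mg_wf H \<and> mg_connected H \<and> mg_e H + 1 = mg_v H"

definition mg_unicyclic :: "('v, 'h) mgraph \<Rightarrow> bool" where
  "mg_unicyclic H \<longleftrightarrow> mg_wf H \<and> mg_connected H \<and> mg_e H = mg_v H"

text \<open>\<open>d n i\<close> is the degree \<open>d_i\<close> of vertex \<open>v_i\<close> (\<open>i < n\<close>) in the \<open>n\<close>-th degree sequence.\<close>

definition half_edges :: "(nat \<Rightarrow> nat \<Rightarrow> nat) \<Rightarrow> nat \<Rightarrow> (nat \<times> nat) set" where
  "half_edges d n = {(i, j). i < n \<and> j < d n i}"

definition matchings :: "(nat \<Rightarrow> nat \<Rightarrow> nat) \<Rightarrow> nat \<Rightarrow> ((nat \<times> nat) \<Rightarrow> (nat \<times> nat)) set" where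
  "matchings d n = {m. (\<forall>x\<in>half_edges d n. m x \<in> half_edges d n \<and> m x \<noteq> x \<and> m (m x) = x) \<and>
                       (\<forall>x. x \<notin> half_edges d n \<longrightarrow> m x = x)}"

definition Gstar :: "(nat \<Rightarrow> nat \<Rightarrow> nat) \<Rightarrow> nat \<Rightarrow> ((nat \<times> nat) \<Rightarrow> (nat \<times> nat)) \<Rightarrow> (nat, nat \<times> nat) mgraph" where
  "Gstar d n m = \<lparr>verts = {..<n}, halfs = half_edges d n, owner = fst, mate = m\<rparr>"

definition CM :: "(nat \<Rightarrow> nat \<Rightarrow> nat) \<Rightarrow> nat \<Rightarrow> ((nat \<times> nat) \<Rightarrow> (nat \<times> nat)) pmf" where
  "CM d n = pmf_of_set (matchings d n)"

definition Exp :: "(nat \<Rightarrow> nat \<Rightarrow> nat) \<Rightarrow> nat \<Rightarrow> (((nat \<times> nat) \<Rightarrow> (nat \<times> nat)) \<Rightarrow> real) \<Rightarrow> real" where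
  "Exp d n X = measure_pmf.expectation (CM d n) X"

definition Cov :: "(nat \<Rightarrow> nat \<Rightarrow> nat) \<Rightarrow> nat \<Rightarrow> (((nat \<times> nat) \<Rightarrow> (nat \<times> nat)) \<Rightarrow> real)
                    \<Rightarrow> (((nat \<times> nat) \<Rightarrow> (nat \<times> nat)) \<Rightarrow> real) \<Rightarrow> real" where
  "Cov d n X Y = Exp d n (\<lambda>m. X m * Y m) - Exp d n X * Exp d n Y"

definition Ycount :: "('v, 'h) mgraph \<Rightarrow> (nat \<Rightarrow> nat \<Rightarrow> nat) \<Rightarrow> nat \<Rightarrow> ((nat \<times> nat) \<Rightarrow> (nat \<times> nat)) \<Rightarrow> nat" where
  "Ycount H d n m = card {C \<in> mg_components (Gstar d n m). mg_iso (mg_restrict (Gstar d n m) C) H}"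

definition nk :: "(nat \<Rightarrow> nat \<Rightarrow> nat) \<Rightarrow> nat \<Rightarrow> nat \<Rightarrow> nat" where
  "nk d n k = card {i. i < n \<and> d n i = k}"

definition ffall :: "real \<Rightarrow> nat \<Rightarrow> real" where
  "ffall x r = (\<Prod>i<r. x - real i)"

definition lam :: "(nat \<Rightarrow> real) \<Rightarrow> real \<Rightarrow> ('v, 'h) mgraph \<Rightarrow> real" where
  "lam p \<mu> H = \<mu> powi (- int (mg_e H)) / real (mg_aut H) *
     (\<Prod>u\<in>verts H. p (mg_deg H u) * fact (mg_deg H u))"

text \<open>\<open>\<delta>\<close> is isomorphism; the sum over \<open>k\<close> only has nonzero terms for degrees of \<open>H1\<close>;
division by zero is 0 in HOL, which matches the conventions 0/0 = 0 and 0\<cdot>\<infinity> = 0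
(if \<open>p_k = 0\<close> while \<open>n_k(H1) > 0\<close> then \<open>\<lambda>_{H1} = 0\<close>).\<close>
definition sigma :: "(nat \<Rightarrow> real) \<Rightarrow> real \<Rightarrow> ('v, 'h) mgraph \<Rightarrow> ('w, 'g) mgraph \<Rightarrow> real" where
  "sigma p \<mu> H1 H2 = (if mg_iso H1 H2 then lam p \<mu> H1 else 0) +
     lam p \<mu> H1 * lam p \<mu> H2 * (2 * real (mg_e H1) * real (mg_e H2) / \<mu> -
       (\<Sum>k\<in>mg_deg H1 ` verts H1. real (mg_nk H1 k) * real (mg_nk H2 k) / p k))"

end

theory Submission
  imports Defs
begin

text \<open>
  Every quantity in the statement is an expected number of embeddings.  If the graphs \<open>H\<^sub>i\<close>
  are connected and pairwise non-isomorphic and \<open>K\<close> is the disjoint union of \<open>r\<^sub>i\<close> copies of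
  each \<open>H\<^sub>i\<close>, an embedding of \<open>K\<close> into \<open>G*(n, d)\<close> is an ordered choice of distinct components
  isomorphic to the \<open>H\<^sub>i\<close> together with an isomorphism onto each, so
  \<open>\<Prod>\<^sub>i (Y\<^bsub>H\<^sub>i\<^esub>)\<^bsub>r\<^sub>i\<^esub> = #emb(K) / \<Prod>\<^sub>i aut(H\<^sub>i)\<^bsup>r\<^sub>i\<^esup>\<close>.  Placing the vertices and half-edges of \<open>K\<close>
  and then matching the remaining \<open>M - 2 e(K)\<close> of the \<open>M\<close> half-edges gives the exact expectation
  \<open>E #emb(K) = \<Prod>\<^sub>k (n\<^sub>k)\<^bsub>n\<^sub>k(K)\<^esub> \<Prod>\<^sub>u d(u)! (M - 2e(K) - 1)!! / (M - 1)!!\<close>, which is asymptotic to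
  \<open>n\<^bsup>v(K) - e(K)\<^esup> \<Prod>\<^sub>u p\<^bsub>d(u)\<^esub> d(u)! \<mu>\<^bsup>-e(K)\<^esup>\<close>.  This yields (i), (iii) and (iv).  For (ii), the
  covariance of two tree counts is the difference between the exact formula for \<open>H\<^sub>1 \<union> H\<^sub>2\<close> and the
  product of those for \<open>H\<^sub>1\<close> and \<open>H\<^sub>2\<close> (plus \<open>E Y\<^bsub>H\<^sub>1\<^esub>\<close> when \<open>H\<^sub>1 \<cong> H\<^sub>2\<close>); it is of order \<open>n\<close>, and
  expanding the vertex factors \<open>(n\<^sub>k - i)/n\<close> and the edge factors \<open>n/(M - 1 - 2i)\<close> to second
  order produces the two terms of \<open>\<sigma>\<close>.
\<close>

section \<open>Perfect matchings\<close>

definition perfect_matchings :: "'a set \<Rightarrow> ('a \<Rightarrow> 'a) set" where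
  "perfect_matchings A = {m. (\<forall>x\<in>A. m x \<in> A \<and> m x \<noteq> x \<and> m (m x) = x) \<and> (\<forall>x. x \<notin> A \<longrightarrow> m x = x)}"

fun num_pairings :: "nat \<Rightarrow> nat" where
  "num_pairings 0 = 1"
| "num_pairings (Suc 0) = 0"
| "num_pairings (Suc (Suc k)) = Suc k * num_pairings k"

lemma perfect_matchingsD: "m \<in> perfect_matchings A \<Longrightarrow> x \<in> A \<Longrightarrow> m x \<in> A \<and> m x \<noteq> x \<and> m (m x) = x"
  by (auto simp: perfect_matchings_def)

lemma matchings_eq_perfect_matchings: "matchings d n = perfect_matchings (half_edges d n)"
  unfolding matchings_def perfect_matchings_def by simp

lemma finite_perfect_matchings:
  assumes "finite A" shows "finite (perfect_matchings A)"
proof -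
  have "inj_on (\<lambda>m. restrict m A) (perfect_matchings A)"
  proof (rule inj_onI)
    fix m m' assume m: "m \<in> perfect_matchings A" and m': "m' \<in> perfect_matchings A"
      and eq: "restrict m A = restrict m' A"
    show "m = m'"
    proof
      fix x show "m x = m' x"
        using m m' fun_cong[OF eq, of x] by (cases "x \<in> A") (auto simp: perfect_matchings_def)
    qed
  qed
  moreover have "(\<lambda>m. restrict m A) ` perfect_matchings A \<subseteq> A \<rightarrow>\<^sub>E A"
    by (auto simp: perfect_matchings_def)
  moreover have "finite (A \<rightarrow>\<^sub>E A)" using assms by (simp add: finite_PiE)
  ultimately show ?thesis using inj_on_finite by blast
qed

lemma override_on_perfect_matchings:
  assumes "S \<subseteq> A" "\<pi> \<in> perfect_matchings S" "m \<in> perfect_matchings (A - S)"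
  shows "override_on m \<pi> S \<in> perfect_matchings A"
  unfolding perfect_matchings_def
proof (intro CollectI conjI ballI allI impI)
  fix x assume x: "x \<in> A"
  show "override_on m \<pi> S x \<in> A" "override_on m \<pi> S x \<noteq> x"
    "override_on m \<pi> S (override_on m \<pi> S x) = x"
    using assms x perfect_matchingsD[OF assms(2)] perfect_matchingsD[OF assms(3), of x]
    by (cases "x \<in> S"; force)+
qed (use assms in \<open>auto simp: perfect_matchings_def override_on_def\<close>)

lemma override_on_id_perfect_matchings:
  assumes "\<pi> \<in> perfect_matchings S" "m \<in> perfect_matchings A" "\<forall>x\<in>S. m x = \<pi> x"
  shows "override_on m id S \<in> perfect_matchings (A - S)"
  unfolding perfect_matchings_def
proof (intro CollectI conjI ballI allI impI)
  fix x assume x: "x \<in> A - S"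
  have "m x \<notin> S"
    using assms x perfect_matchingsD[OF assms(1), of "m x"] perfect_matchingsD[OF assms(2), of x] by auto
  then show "override_on m id S x \<in> A - S" "override_on m id S x \<noteq> x"
    "override_on m id S (override_on m id S x) = x"
    using x perfect_matchingsD[OF assms(2), of x] by auto
qed (use assms in \<open>auto simp: perfect_matchings_def override_on_def\<close>)

lemma card_perfect_matchings_extending:
  assumes "S \<subseteq> A" and \<pi>: "\<pi> \<in> perfect_matchings S"
  shows "card {m \<in> perfect_matchings A. \<forall>x\<in>S. m x = \<pi> x} = card (perfect_matchings (A - S))"
proof (rule bij_betw_same_card[of "\<lambda>m. override_on m id S"],
       rule bij_betw_byWitness[where f' = "\<lambda>m. override_on m \<pi> S"])
  show "\<forall>m\<in>{m \<in> perfect_matchings A. \<forall>x\<in>S. m x = \<pi> x}. override_on (override_on m id S) \<pi> S = m"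
    by (auto simp: override_on_def)
  show "\<forall>m\<in>perfect_matchings (A - S). override_on (override_on m \<pi> S) id S = m"
    by (auto simp: override_on_def perfect_matchings_def fun_eq_iff)
  show "(\<lambda>m. override_on m id S) ` {m \<in> perfect_matchings A. \<forall>x\<in>S. m x = \<pi> x} \<subseteq> perfect_matchings (A - S)"
    using override_on_id_perfect_matchings[OF \<pi>] by blast
  show "(\<lambda>m. override_on m \<pi> S) ` perfect_matchings (A - S) \<subseteq> {m \<in> perfect_matchings A. \<forall>x\<in>S. m x = \<pi> x}"
    using override_on_perfect_matchings[OF assms] by auto
qed

lemma card_perfect_matchings_pairing:
  assumes "x \<in> A" "y \<in> A" "x \<noteq> y"
  shows "card {m \<in> perfect_matchings A. m x = y} = card (perfect_matchings (A - {x, y}))"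
proof -
  let ?swap = "\<lambda>z. if z = x then y else if z = y then x else z"
  have "{m \<in> perfect_matchings A. m x = y} = {m \<in> perfect_matchings A. \<forall>z\<in>{x, y}. m z = ?swap z}"
    using assms perfect_matchingsD[of _ A x] by auto
  also have "card \<dots> = card (perfect_matchings (A - {x, y}))"
    by (rule card_perfect_matchings_extending) (use assms in \<open>auto simp: perfect_matchings_def\<close>)
  finally show ?thesis .
qed

lemma card_perfect_matchings: "finite A \<Longrightarrow> card (perfect_matchings A) = num_pairings (card A)"
proof (induction "card A" arbitrary: A rule: less_induct)
  case less
  show ?case
  proof (cases "A = {}")
    case True
    then have "perfect_matchings A = {id}" by (auto simp: perfect_matchings_def)
    then show ?thesis using True by simp
  next
    case False
    then obtain x where x: "x \<in> A" by auto
    have split: "perfect_matchings A = (\<Union>y\<in>A - {x}. {m \<in> perfect_matchings A. m x = y})"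
      using x by (auto dest: perfect_matchingsD)
    have "card (perfect_matchings A) = (\<Sum>y\<in>A - {x}. card {m \<in> perfect_matchings A. m x = y})"
      unfolding arg_cong[OF split, of card]
      by (rule card_UN_disjoint) (use less.prems finite_perfect_matchings[OF less.prems] in auto)
    also have "\<dots> = (\<Sum>y\<in>A - {x}. num_pairings (card A - 2))"
    proof (rule sum.cong[OF refl])
      fix y assume y: "y \<in> A - {x}"
      have "card {x, y} = 2" using y by auto
      moreover have "card {x, y} \<le> card A" using less.prems x y by (intro card_mono) auto
      ultimately have card_rest: "card (A - {x, y}) = card A - 2" and "card (A - {x, y}) < card A"
        using less.prems x y by (simp_all add: card_Diff_subset)
      have "card {m \<in> perfect_matchings A. m x = y} = card (perfect_matchings (A - {x, y}))"
        using x y by (intro card_perfect_matchings_pairing) auto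
      also have "\<dots> = num_pairings (card (A - {x, y}))"
        using less.prems \<open>card (A - {x, y}) < card A\<close> by (intro less.hyps) auto
      finally show "card {m \<in> perfect_matchings A. m x = y} = num_pairings (card A - 2)"
        unfolding card_rest .
    qed
    also have "\<dots> = num_pairings (card A)"
      using less.prems x by (cases "card A" rule: num_pairings.cases) auto
    finally show ?thesis .
  qed
qed

lemma num_pairings_odd: "odd k \<Longrightarrow> num_pairings k = 0"
  by (induction k rule: num_pairings.induct) auto

lemma num_pairings_even_pos: "even k \<Longrightarrow> num_pairings k > 0"
  by (induction k rule: num_pairings.induct) auto

lemma even_card_if_perfect_matchings_ne: "finite A \<Longrightarrow> perfect_matchings A \<noteq> {} \<Longrightarrow> even (card A)"
  using card_perfect_matchings[of A] num_pairings_odd[of "card A"] finite_perfect_matchings[of A]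
  by (metis card_0_eq)

lemma num_pairings_unfold:
  "even M \<Longrightarrow> 2 * E \<le> M \<Longrightarrow>
   real (num_pairings M) = real (num_pairings (M - 2 * E)) * (\<Prod>i<E. real M - 1 - 2 * real i)"
proof (induction E)
  case (Suc E)
  then obtain j where j: "M - 2 * E = Suc (Suc j)"
    by (metis add_2_eq_Suc le_Suc_ex Suc_1 diff_le_mono mult_Suc_right add_le_imp_le_diff)
  moreover have "M - 2 * Suc E = j" using j by simp
  ultimately have "real (num_pairings (M - 2 * E)) = real (Suc j) * real (num_pairings (M - 2 * Suc E))"
    by (simp only: num_pairings.simps of_nat_mult)
  moreover have "real (Suc j) = real M - 1 - 2 * real E"
    using j Suc.prems by (simp add: of_nat_diff)
  ultimately have "real (num_pairings (M - 2 * E)) = real (num_pairings (M - 2 * Suc E)) * (real M - 1 - 2 * real E)"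
    by simp
  then show ?case using Suc by (simp add: mult_ac)
qed simp

section \<open>Counting colour-preserving injections\<close>

lemma ffall_0 [simp]: "ffall x 0 = 1"
  by (simp add: ffall_def)

lemma ffall_1 [simp]: "ffall x (Suc 0) = x"
  by (simp add: ffall_def)

lemma ffall_2: "ffall x 2 = x * x - x"
  by (simp add: ffall_def numeral_2_eq_2 algebra_simps)

lemma ffall_Suc: "ffall x (Suc r) = ffall x r * (x - real r)"
  by (simp add: ffall_def)

lemma ffall_of_nat_self: "ffall (real k) k = fact k"
  unfolding ffall_def fact_prod_rev[of k] by (simp add: of_nat_prod of_nat_diff atLeast0LessThan)

definition colour_injections :: "'j set \<Rightarrow> 'a set \<Rightarrow> ('a \<Rightarrow> 'k) \<Rightarrow> ('j \<Rightarrow> 'k) \<Rightarrow> ('j \<Rightarrow> 'a) set" where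
  "colour_injections J A col c = {f \<in> J \<rightarrow>\<^sub>E A. inj_on f J \<and> (\<forall>j\<in>J. col (f j) = c j)}"

lemma finite_colour_injections: "finite J \<Longrightarrow> finite A \<Longrightarrow> finite (colour_injections J A col c)"
  unfolding colour_injections_def by (rule finite_subset[of _ "J \<rightarrow>\<^sub>E A"]) (auto intro: finite_PiE)

lemma colour_injections_insert:
  assumes "j \<notin> J"
  shows "colour_injections (insert j J) A col c = (\<lambda>(g, a). g(j := a)) `
    (SIGMA g:colour_injections J A col c. {a\<in>A. col a = c j} - g ` J)"
proof safe
  fix f assume f: "f \<in> colour_injections (insert j J) A col c"
  have "restrict f J \<in> colour_injections J A col c"
    using f by (auto simp: colour_injections_def inj_on_def)
  moreover have "f j \<in> {a\<in>A. col a = c j} - restrict f J ` J"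
    using f assms by (auto simp: colour_injections_def inj_on_def)
  moreover have "f = (restrict f J)(j := f j)"
    using f assms by (auto simp: colour_injections_def fun_eq_iff)
  ultimately show "f \<in> (\<lambda>(g, a). g(j := a)) ` (SIGMA g:colour_injections J A col c. {a\<in>A. col a = c j} - g ` J)"
    by (intro image_eqI[of _ _ "(restrict f J, f j)"]) auto
next
  fix g a assume "g \<in> colour_injections J A col c" "a \<in> A" "col a = c j" "a \<notin> g ` J"
  then show "g(j := a) \<in> colour_injections (insert j J) A col c"
    using assms unfolding colour_injections_def by (auto simp: inj_on_def PiE_def extensional_def)
qed

lemma inj_on_fun_upd_colour_injections:
  assumes "j \<notin> J"
  shows "inj_on (\<lambda>(g, a). g(j := a)) (SIGMA g:colour_injections J A col c. T g)"
proof (rule inj_onI, clarify)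
  fix g a g' a' assume g: "g \<in> colour_injections J A col c" and g': "g' \<in> colour_injections J A col c"
    and eq: "g(j := a) = g'(j := a')"
  have "g x = g' x" for x
    using g g' fun_cong[OF eq, of x] assms
    by (cases "x = j") (auto simp: colour_injections_def PiE_def extensional_def)
  then show "g = g' \<and> a = a'" using fun_cong[OF eq, of j] by auto
qed

lemma card_free_colour_targets:
  assumes "finite A" "g \<in> colour_injections J A col c"
  shows "card ({a\<in>A. col a = k} - g ` J) = card {a\<in>A. col a = k} - card {j\<in>J. c j = k}"
    and "card {j\<in>J. c j = k} \<le> card {a\<in>A. col a = k}"
proof -
  have inj: "inj_on g {j\<in>J. c j = k}" and sub: "g ` {j\<in>J. c j = k} \<subseteq> {a\<in>A. col a = k}"
    and eq: "{a\<in>A. col a = k} \<inter> g ` J = g ` {j\<in>J. c j = k}"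
    using assms(2) by (auto simp: colour_injections_def inj_on_def)
  have "card ({a\<in>A. col a = k} - g ` J) = card {a\<in>A. col a = k} - card ({a\<in>A. col a = k} \<inter> g ` J)"
    using assms(1) by (intro card_Diff_subset_Int) auto
  then show "card ({a\<in>A. col a = k} - g ` J) = card {a\<in>A. col a = k} - card {j\<in>J. c j = k}"
    using eq inj by (simp add: card_image)
  show "card {j\<in>J. c j = k} \<le> card {a\<in>A. col a = k}"
    using card_mono[OF _ sub] assms(1) inj by (simp add: card_image)
qed

lemma card_colour_injections_insert:
  assumes "finite J" "finite A" "j \<notin> J"
  shows "real (card (colour_injections (insert j J) A col c)) = real (card (colour_injections J A col c)) *
    (real (card {a\<in>A. col a = c j}) - real (card {j'\<in>J. c j' = c j}))"
proof -
  let ?N = "card {a\<in>A. col a = c j}" and ?m = "card {j'\<in>J. c j' = c j}"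
  have "card (colour_injections (insert j J) A col c) =
      (\<Sum>g\<in>colour_injections J A col c. card ({a\<in>A. col a = c j} - g ` J))"
    unfolding colour_injections_insert[OF assms(3)] card_image[OF inj_on_fun_upd_colour_injections[OF assms(3)]]
    by (rule card_SigmaI) (use finite_colour_injections[OF assms(1,2)] assms(2) in auto)
  also have "\<dots> = (\<Sum>g\<in>colour_injections J A col c. ?N - ?m)"
    by (rule sum.cong) (simp_all add: card_free_colour_targets(1)[OF assms(2)])
  also have "\<dots> = card (colour_injections J A col c) * (?N - ?m)"
    by simp
  finally have card_eq: "card (colour_injections (insert j J) A col c) = card (colour_injections J A col c) * (?N - ?m)" .
  show ?thesis
  proof (cases "colour_injections J A col c = {}")
    case False
    then obtain g where g: "g \<in> colour_injections J A col c" by auto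
    show ?thesis using card_eq card_free_colour_targets(2)[OF assms(2) g, of "c j"] by (simp add: of_nat_diff)
  qed (use card_eq in simp)
qed

lemma card_colour_injections_gen:
  assumes "finite J" "finite A" "finite Col" "c ` J \<subseteq> Col"
  shows "real (card (colour_injections J A col c)) =
    (\<Prod>k\<in>Col. ffall (real (card {a\<in>A. col a = k})) (card {j\<in>J. c j = k}))"
  using assms(1,4)
proof (induction J rule: finite_induct)
  case empty
  have "colour_injections {} A col c = {\<lambda>_. undefined}" by (auto simp: colour_injections_def)
  then show ?case by simp
next
  case (insert j J)
  let ?N = "\<lambda>k. real (card {a\<in>A. col a = k})"
  have cj: "c j \<in> Col" using insert.prems by simp
  have cnt: "card {j'\<in>insert j J. c j' = k} =
      (if k = c j then Suc (card {j'\<in>J. c j' = k}) else card {j'\<in>J. c j' = k})" for k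
  proof -
    have "{j'\<in>insert j J. c j' = k} = (if k = c j then insert j {j'\<in>J. c j' = k} else {j'\<in>J. c j' = k})"
      by auto
    then show ?thesis using insert.hyps by (simp split: if_splits)
  qed
  have "(\<Prod>k\<in>Col. ffall (?N k) (card {j'\<in>insert j J. c j' = k}))
      = ffall (?N (c j)) (Suc (card {j'\<in>J. c j' = c j})) *
        (\<Prod>k\<in>Col - {c j}. ffall (?N k) (card {j'\<in>J. c j' = k}))"
    unfolding cnt by (subst prod.remove[OF assms(3) cj]) (auto intro!: prod.cong)
  also have "\<dots> = (\<Prod>k\<in>Col. ffall (?N k) (card {j'\<in>J. c j' = k})) *
      (?N (c j) - real (card {j'\<in>J. c j' = c j}))"
    by (simp add: prod.remove[OF assms(3) cj] ffall_Suc)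
  finally have prod_eq: "(\<Prod>k\<in>Col. ffall (?N k) (card {j'\<in>insert j J. c j' = k})) =
      (\<Prod>k\<in>Col. ffall (?N k) (card {j'\<in>J. c j' = k})) * (?N (c j) - real (card {j'\<in>J. c j' = c j}))" .
  have "c ` J \<subseteq> Col" using insert.prems by simp
  then show ?case
    unfolding card_colour_injections_insert[OF insert.hyps(1) assms(2) insert.hyps(2)] prod_eq
    by (simp only: insert.IH)
qed

lemma card_colour_injections:
  assumes "finite J" "finite A"
  shows "real (card (colour_injections J A col c)) =
    (\<Prod>k\<in>c ` J. ffall (real (card {a\<in>A. col a = k})) (card {j\<in>J. c j = k}))"
  using card_colour_injections_gen[OF assms, of "c ` J" c col] assms by simp

section \<open>Isomorphisms of multigraphs\<close>

lemma mg_wfD: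
  assumes "mg_wf A"
  shows "finite (verts A)" "finite (halfs A)" "\<And>h. h \<in> halfs A \<Longrightarrow> owner A h \<in> verts A"
    "\<And>h. h \<in> halfs A \<Longrightarrow> mate A h \<in> halfs A" "\<And>h. h \<in> halfs A \<Longrightarrow> mate A h \<noteq> h"
    "\<And>h. h \<in> halfs A \<Longrightarrow> mate A (mate A h) = h"
  using assms by (auto simp: mg_wf_def)

definition isos :: "('v, 'h) mgraph \<Rightarrow> ('w, 'g) mgraph \<Rightarrow> (('v \<Rightarrow> 'w) \<times> ('h \<Rightarrow> 'g)) set" where
  "isos A B = {(\<phi>, \<sigma>). \<phi> \<in> extensional (verts A) \<and> \<sigma> \<in> extensional (halfs A) \<and>
     bij_betw \<phi> (verts A) (verts B) \<and> bij_betw \<sigma> (halfs A) (halfs B) \<and>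
     (\<forall>h\<in>halfs A. owner B (\<sigma> h) = \<phi> (owner A h) \<and> mate B (\<sigma> h) = \<sigma> (mate A h))}"

lemma isosD:
  assumes "(\<phi>, \<sigma>) \<in> isos A B"
  shows "\<phi> \<in> extensional (verts A)" "\<sigma> \<in> extensional (halfs A)"
    "bij_betw \<phi> (verts A) (verts B)" "bij_betw \<sigma> (halfs A) (halfs B)"
    "\<And>h. h \<in> halfs A \<Longrightarrow> owner B (\<sigma> h) = \<phi> (owner A h)"
    "\<And>h. h \<in> halfs A \<Longrightarrow> mate B (\<sigma> h) = \<sigma> (mate A h)"
  using assms by (auto simp: isos_def)

lemma mg_aut_eq_card_isos: "mg_aut A = card (isos A A)"
  unfolding mg_aut_def isos_def by simp

lemma mg_iso_iff_isos_ne: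
  assumes wf: "mg_wf A"
  shows "mg_iso A B \<longleftrightarrow> isos A B \<noteq> {}"
proof
  assume "mg_iso A B"
  then obtain \<phi> \<sigma> where *: "bij_betw \<phi> (verts A) (verts B)" "bij_betw \<sigma> (halfs A) (halfs B)"
     "\<forall>h\<in>halfs A. owner B (\<sigma> h) = \<phi> (owner A h) \<and> mate B (\<sigma> h) = \<sigma> (mate A h)"
    unfolding mg_iso_def by blast
  have "(restrict \<phi> (verts A), restrict \<sigma> (halfs A)) \<in> isos A B"
    unfolding isos_def using * mg_wfD[OF wf] by (auto cong: bij_betw_cong)
  then show "isos A B \<noteq> {}" by blast
next
  assume "isos A B \<noteq> {}"
  then obtain \<phi> \<sigma> where "(\<phi>, \<sigma>) \<in> isos A B" by auto
  then show "mg_iso A B" unfolding isos_def mg_iso_def by blast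
qed

lemma finite_isos:
  assumes "finite (verts A)" "finite (halfs A)" "finite (verts B)" "finite (halfs B)"
  shows "finite (isos A B)"
proof -
  have "isos A B \<subseteq> (verts A \<rightarrow>\<^sub>E verts B) \<times> (halfs A \<rightarrow>\<^sub>E halfs B)"
    by (auto simp: isos_def bij_betw_def PiE_def extensional_def)
  moreover have "finite ((verts A \<rightarrow>\<^sub>E verts B) \<times> (halfs A \<rightarrow>\<^sub>E halfs B))"
    using assms by (intro finite_cartesian_product finite_PiE) auto
  ultimately show ?thesis by (rule finite_subset)
qed

lemma isos_comp:
  assumes wfA: "mg_wf A" and i1: "(\<phi>1, \<sigma>1) \<in> isos A B" and i2: "(\<phi>2, \<sigma>2) \<in> isos B C"
  shows "(restrict (\<phi>2 \<circ> \<phi>1) (verts A), restrict (\<sigma>2 \<circ> \<sigma>1) (halfs A)) \<in> isos A C"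
proof -
  have b1: "bij_betw \<phi>1 (verts A) (verts B)" "bij_betw \<sigma>1 (halfs A) (halfs B)"
    and c1: "\<forall>h\<in>halfs A. owner B (\<sigma>1 h) = \<phi>1 (owner A h) \<and> mate B (\<sigma>1 h) = \<sigma>1 (mate A h)"
    using i1 by (auto simp: isos_def)
  have b2: "bij_betw \<phi>2 (verts B) (verts C)" "bij_betw \<sigma>2 (halfs B) (halfs C)"
    and c2: "\<forall>h\<in>halfs B. owner C (\<sigma>2 h) = \<phi>2 (owner B h) \<and> mate C (\<sigma>2 h) = \<sigma>2 (mate B h)"
    using i2 by (auto simp: isos_def)
  have "bij_betw (\<phi>2 \<circ> \<phi>1) (verts A) (verts C)" by (rule bij_betw_trans[OF b1(1) b2(1)])
  then have bv: "bij_betw (restrict (\<phi>2 \<circ> \<phi>1) (verts A)) (verts A) (verts C)"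
    by (rule bij_betw_cong[THEN iffD1, rotated]) simp
  have "bij_betw (\<sigma>2 \<circ> \<sigma>1) (halfs A) (halfs C)" by (rule bij_betw_trans[OF b1(2) b2(2)])
  then have bh: "bij_betw (restrict (\<sigma>2 \<circ> \<sigma>1) (halfs A)) (halfs A) (halfs C)"
    by (rule bij_betw_cong[THEN iffD1, rotated]) simp
  have "\<forall>h\<in>halfs A. owner C (restrict (\<sigma>2 \<circ> \<sigma>1) (halfs A) h) = restrict (\<phi>2 \<circ> \<phi>1) (verts A) (owner A h)
       \<and> mate C (restrict (\<sigma>2 \<circ> \<sigma>1) (halfs A) h) = restrict (\<sigma>2 \<circ> \<sigma>1) (halfs A) (mate A h)"
  proof
    fix h assume h: "h \<in> halfs A"
    have s1: "\<sigma>1 h \<in> halfs B" using b1 h by (auto simp: bij_betw_def)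
    show "owner C (restrict (\<sigma>2 \<circ> \<sigma>1) (halfs A) h) = restrict (\<phi>2 \<circ> \<phi>1) (verts A) (owner A h)
       \<and> mate C (restrict (\<sigma>2 \<circ> \<sigma>1) (halfs A) h) = restrict (\<sigma>2 \<circ> \<sigma>1) (halfs A) (mate A h)"
      using h s1 c1 c2 mg_wfD[OF wfA] by auto
  qed
  then show ?thesis using bv bh unfolding isos_def by auto
qed

lemma isos_inv:
  assumes wfA: "mg_wf A" and wfB: "mg_wf B" and i: "(\<phi>, \<sigma>) \<in> isos A B"
  shows "(restrict (inv_into (verts A) \<phi>) (verts B), restrict (inv_into (halfs A) \<sigma>) (halfs B)) \<in> isos B A"
proof -
  have b: "bij_betw \<phi> (verts A) (verts B)" "bij_betw \<sigma> (halfs A) (halfs B)"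
    and c: "\<forall>h\<in>halfs A. owner B (\<sigma> h) = \<phi> (owner A h) \<and> mate B (\<sigma> h) = \<sigma> (mate A h)"
    using i by (auto simp: isos_def)
  have bv: "bij_betw (restrict (inv_into (verts A) \<phi>) (verts B)) (verts B) (verts A)"
    using bij_betw_inv_into[OF b(1)] by (rule bij_betw_cong[THEN iffD1, rotated]) simp
  have bh: "bij_betw (restrict (inv_into (halfs A) \<sigma>) (halfs B)) (halfs B) (halfs A)"
    using bij_betw_inv_into[OF b(2)] by (rule bij_betw_cong[THEN iffD1, rotated]) simp
  have "owner A (inv_into (halfs A) \<sigma> g) = inv_into (verts A) \<phi> (owner B g) \<and>
        mate A (inv_into (halfs A) \<sigma> g) = inv_into (halfs A) \<sigma> (mate B g)" if g: "g \<in> halfs B" for g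
  proof -
    obtain h where h: "h \<in> halfs A" "g = \<sigma> h" using g b(2) by (auto simp: bij_betw_def)
    have ih: "inv_into (halfs A) \<sigma> g = h" using h b(2) by (auto simp: bij_betw_def)
    have "inv_into (verts A) \<phi> (owner B g) = owner A h"
      using c h mg_wfD(3)[OF wfA h(1)] b(1) by (auto simp: bij_betw_def)
    moreover have "inv_into (halfs A) \<sigma> (mate B g) = mate A h"
      using c h mg_wfD(4)[OF wfA h(1)] b(2) by (auto simp: bij_betw_def)
    ultimately show ?thesis using ih by simp
  qed
  then show ?thesis using bv bh mg_wfD[OF wfB] unfolding isos_def by auto
qed

lemma mg_iso_sym: "mg_wf A \<Longrightarrow> mg_wf B \<Longrightarrow> mg_iso A B \<Longrightarrow> mg_iso B A"
  using isos_inv mg_iso_iff_isos_ne by (metis all_not_in_conv prod.exhaust)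

lemma mg_iso_trans: "mg_wf A \<Longrightarrow> mg_iso A B \<Longrightarrow> mg_iso B C \<Longrightarrow> mg_iso A C"
  unfolding mg_iso_def
proof (elim exE conjE)
  fix \<phi>1 \<sigma>1 \<phi>2 \<sigma>2
  assume wf: "mg_wf A" and b1: "bij_betw \<phi>1 (verts A) (verts B)" "bij_betw \<sigma>1 (halfs A) (halfs B)"
    and c1: "\<forall>h\<in>halfs A. owner B (\<sigma>1 h) = \<phi>1 (owner A h) \<and> mate B (\<sigma>1 h) = \<sigma>1 (mate A h)"
    and b2: "bij_betw \<phi>2 (verts B) (verts C)" "bij_betw \<sigma>2 (halfs B) (halfs C)"
    and c2: "\<forall>h\<in>halfs B. owner C (\<sigma>2 h) = \<phi>2 (owner B h) \<and> mate C (\<sigma>2 h) = \<sigma>2 (mate B h)"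
  have "\<forall>h\<in>halfs A. owner C ((\<sigma>2 \<circ> \<sigma>1) h) = (\<phi>2 \<circ> \<phi>1) (owner A h) \<and> mate C ((\<sigma>2 \<circ> \<sigma>1) h) = (\<sigma>2 \<circ> \<sigma>1) (mate A h)"
  proof
    fix h assume h: "h \<in> halfs A"
    have "\<sigma>1 h \<in> halfs B" using b1(2) h by (auto simp: bij_betw_def)
    then show "owner C ((\<sigma>2 \<circ> \<sigma>1) h) = (\<phi>2 \<circ> \<phi>1) (owner A h) \<and> mate C ((\<sigma>2 \<circ> \<sigma>1) h) = (\<sigma>2 \<circ> \<sigma>1) (mate A h)"
      using c1 c2 h by simp
  qed
  then show "\<exists>\<phi> \<sigma>. bij_betw \<phi> (verts A) (verts C) \<and> bij_betw \<sigma> (halfs A) (halfs C) \<and>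
       (\<forall>h\<in>halfs A. owner C (\<sigma> h) = \<phi> (owner A h) \<and> mate C (\<sigma> h) = \<sigma> (mate A h))"
    using b1 b2 by (meson bij_betw_trans)
qed

lemma restrict_comp_cancel_left:
  assumes "inj_on \<psi> W" "f ` V \<subseteq> W" "g ` V \<subseteq> W" "f \<in> extensional V" "g \<in> extensional V"
    and "restrict (\<psi> \<circ> f) V = restrict (\<psi> \<circ> g) V"
  shows "f = g"
proof
  fix x show "f x = g x"
  proof (cases "x \<in> V")
    case True
    then have "\<psi> (f x) = \<psi> (g x)" using fun_cong[OF assms(6), of x] by simp
    then show ?thesis using inj_onD[OF assms(1)] True assms(2,3) by blast
  qed (use assms(4,5) in \<open>auto simp: extensional_def\<close>)
qed

lemma restrict_comp_cancel_right:
  assumes "\<psi> ` V = W" "f \<in> extensional W" "g \<in> extensional W"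
    and "restrict (f \<circ> \<psi>) V = restrict (g \<circ> \<psi>) V"
  shows "f = g"
proof
  fix x show "f x = g x"
  proof (cases "x \<in> W")
    case True
    then obtain y where "y \<in> V" "x = \<psi> y" using assms(1) by auto
    then show ?thesis using fun_cong[OF assms(4), of y] by simp
  qed (use assms(2,3) in \<open>auto simp: extensional_def\<close>)
qed

lemma card_isos_postcomp_le:
  assumes wfA: "mg_wf A" and wfC: "mg_wf C" and i: "(\<psi>, \<tau>) \<in> isos B C"
  shows "card (isos A B) \<le> card (isos A C)"
proof (rule card_inj_on_le[where f = "\<lambda>(\<phi>, \<sigma>). (restrict (\<psi> \<circ> \<phi>) (verts A), restrict (\<tau> \<circ> \<sigma>) (halfs A))"])
  have inj: "inj_on \<psi> (verts B)" "inj_on \<tau> (halfs B)"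
    using i by (auto simp: isos_def bij_betw_def)
  show "inj_on (\<lambda>(\<phi>, \<sigma>). (restrict (\<psi> \<circ> \<phi>) (verts A), restrict (\<tau> \<circ> \<sigma>) (halfs A))) (isos A B)"
  proof (rule inj_onI, clarify)
    fix \<phi> \<sigma> \<phi>' \<sigma>' assume i1: "(\<phi>, \<sigma>) \<in> isos A B" and i2: "(\<phi>', \<sigma>') \<in> isos A B"
      and e1: "restrict (\<psi> \<circ> \<phi>) (verts A) = restrict (\<psi> \<circ> \<phi>') (verts A)"
      and e2: "restrict (\<tau> \<circ> \<sigma>) (halfs A) = restrict (\<tau> \<circ> \<sigma>') (halfs A)"
    have "\<phi> = \<phi>'"
      using restrict_comp_cancel_left[OF inj(1) _ _ isosD(1)[OF i1] isosD(1)[OF i2] e1]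
        isosD(3)[OF i1] isosD(3)[OF i2] by (simp add: bij_betw_def)
    moreover have "\<sigma> = \<sigma>'"
      using restrict_comp_cancel_left[OF inj(2) _ _ isosD(2)[OF i1] isosD(2)[OF i2] e2]
        isosD(4)[OF i1] isosD(4)[OF i2] by (simp add: bij_betw_def)
    ultimately show "\<phi> = \<phi>' \<and> \<sigma> = \<sigma>'" ..
  qed
  show "(\<lambda>(\<phi>, \<sigma>). (restrict (\<psi> \<circ> \<phi>) (verts A), restrict (\<tau> \<circ> \<sigma>) (halfs A))) ` isos A B \<subseteq> isos A C"
    using isos_comp[OF wfA _ i] by auto
  show "finite (isos A C)" using mg_wfD[OF wfA] mg_wfD[OF wfC] by (intro finite_isos) auto
qed

lemma card_isos_precomp_le:
  assumes wfA: "mg_wf A" and wfC: "mg_wf C" and i: "(\<psi>, \<tau>) \<in> isos A B"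
  shows "card (isos B C) \<le> card (isos A C)"
proof (rule card_inj_on_le[where f = "\<lambda>(\<phi>, \<sigma>). (restrict (\<phi> \<circ> \<psi>) (verts A), restrict (\<sigma> \<circ> \<tau>) (halfs A))"])
  have onto: "\<psi> ` verts A = verts B" "\<tau> ` halfs A = halfs B"
    using i by (auto simp: isos_def bij_betw_def)
  show "inj_on (\<lambda>(\<phi>, \<sigma>). (restrict (\<phi> \<circ> \<psi>) (verts A), restrict (\<sigma> \<circ> \<tau>) (halfs A))) (isos B C)"
  proof (rule inj_onI, clarify)
    fix \<phi> \<sigma> \<phi>' \<sigma>' assume i1: "(\<phi>, \<sigma>) \<in> isos B C" and i2: "(\<phi>', \<sigma>') \<in> isos B C"
      and e1: "restrict (\<phi> \<circ> \<psi>) (verts A) = restrict (\<phi>' \<circ> \<psi>) (verts A)"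
      and e2: "restrict (\<sigma> \<circ> \<tau>) (halfs A) = restrict (\<sigma>' \<circ> \<tau>) (halfs A)"
    show "\<phi> = \<phi>' \<and> \<sigma> = \<sigma>'"
      using restrict_comp_cancel_right[OF onto(1) isosD(1)[OF i1] isosD(1)[OF i2] e1]
        restrict_comp_cancel_right[OF onto(2) isosD(2)[OF i1] isosD(2)[OF i2] e2] ..
  qed
  show "(\<lambda>(\<phi>, \<sigma>). (restrict (\<phi> \<circ> \<psi>) (verts A), restrict (\<sigma> \<circ> \<tau>) (halfs A))) ` isos B C \<subseteq> isos A C"
    using isos_comp[OF wfA i] by auto
  show "finite (isos A C)" using mg_wfD[OF wfA] mg_wfD[OF wfC] by (intro finite_isos) auto
qed

lemma card_isos_eq_mg_aut:
  assumes wfA: "mg_wf A" and wfB: "mg_wf B" and iso: "mg_iso A B"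
  shows "card (isos A B) = mg_aut A"
proof -
  have "isos A B \<noteq> {}" using iso mg_iso_iff_isos_ne[OF wfA, of B] by blast
  then obtain p where "p \<in> isos A B" by blast
  then obtain \<psi> \<tau> where i: "(\<psi>, \<tau>) \<in> isos A B" by (cases p) auto
  have j: "(restrict (inv_into (verts A) \<psi>) (verts B), restrict (inv_into (halfs A) \<tau>) (halfs B)) \<in> isos B A"
    by (rule isos_inv[OF wfA wfB i])
  show ?thesis unfolding mg_aut_eq_card_isos
    using card_isos_postcomp_le[OF wfA wfB i] card_isos_postcomp_le[OF wfA wfA j]
    by simp
qed

lemma mg_aut_eq_if_iso:
  assumes wfA: "mg_wf A" and wfB: "mg_wf B" and iso: "mg_iso A B"
  shows "mg_aut A = mg_aut B"
proof -
  have "isos A B \<noteq> {}" using iso mg_iso_iff_isos_ne[OF wfA, of B] by blast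
  then obtain p where "p \<in> isos A B" by blast
  then obtain \<psi> \<tau> where i: "(\<psi>, \<tau>) \<in> isos A B" by (cases p) auto
  have j: "(restrict (inv_into (verts A) \<psi>) (verts B), restrict (inv_into (halfs A) \<tau>) (halfs B)) \<in> isos B A"
    by (rule isos_inv[OF wfA wfB i])
  have "card (isos B B) \<le> card (isos A B)" by (rule card_isos_precomp_le[OF wfA wfB i])
  moreover have "card (isos A B) \<le> card (isos B B)" by (rule card_isos_precomp_le[OF wfB wfB j])
  ultimately have "card (isos B B) = card (isos A B)" by simp
  then show ?thesis using card_isos_eq_mg_aut[OF wfA wfB iso] by (simp add: mg_aut_eq_card_isos)
qed

lemma mg_aut_pos: "mg_wf A \<Longrightarrow> mg_aut A > 0"
proof -
  assume wf: "mg_wf A"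
  have "(restrict id (verts A), restrict id (halfs A)) \<in> isos A A"
    using mg_wfD[OF wf] by (auto simp: isos_def bij_betw_def inj_on_def)
  moreover have "finite (isos A A)" using mg_wfD[OF wf] by (intro finite_isos) auto
  ultimately show ?thesis unfolding mg_aut_eq_card_isos by (auto simp: card_gt_0_iff)
qed

lemma mg_isoE:
  assumes "mg_wf A" "mg_iso A B"
  obtains \<psi> \<tau> where "(\<psi>, \<tau>) \<in> isos A B"
proof -
  have "isos A B \<noteq> {}" using assms mg_iso_iff_isos_ne[of A B] by blast
  then obtain q where "q \<in> isos A B" by blast
  then show ?thesis using that by (cases q) auto
qed

context
  fixes A :: "('v, 'h) mgraph" and B :: "('w, 'g) mgraph" and \<psi> \<tau>
  assumes wfA: "mg_wf A" and wfB: "mg_wf B" and iso: "(\<psi>, \<tau>) \<in> isos A B"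
begin

lemmas iso_bij_verts = isosD(3)[OF iso] and iso_bij_halfs = isosD(4)[OF iso]
  and iso_owner = isosD(5)[OF iso] and iso_mate = isosD(6)[OF iso]

lemma iso_mg_deg: "u \<in> verts A \<Longrightarrow> mg_deg B (\<psi> u) = mg_deg A u"
proof -
  assume u: "u \<in> verts A"
  have eq: "\<tau> ` {h \<in> halfs A. owner A h = u} = {g \<in> halfs B. owner B g = \<psi> u}"
  proof
    show "\<tau> ` {h \<in> halfs A. owner A h = u} \<subseteq> {g \<in> halfs B. owner B g = \<psi> u}"
      using iso_bij_halfs iso_owner by (auto simp: bij_betw_def)
    show "{g \<in> halfs B. owner B g = \<psi> u} \<subseteq> \<tau> ` {h \<in> halfs A. owner A h = u}"
    proof
      fix g assume g: "g \<in> {g \<in> halfs B. owner B g = \<psi> u}"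
      then obtain h where h: "h \<in> halfs A" "g = \<tau> h" using iso_bij_halfs by (auto simp: bij_betw_def)
      then have "\<psi> (owner A h) = \<psi> u" using iso_owner g by auto
      then have "owner A h = u" using iso_bij_verts mg_wfD(3)[OF wfA h(1)] u by (auto simp: bij_betw_def inj_on_def)
      then show "g \<in> \<tau> ` {h \<in> halfs A. owner A h = u}" using h by auto
    qed
  qed
  have inj: "inj_on \<tau> {h \<in> halfs A. owner A h = u}"
    using iso_bij_halfs by (auto simp: bij_betw_def intro: inj_on_subset)
  have "card (\<tau> ` {h \<in> halfs A. owner A h = u}) = card {h \<in> halfs A. owner A h = u}"
    by (rule card_image[OF inj])
  then show ?thesis unfolding mg_deg_def eq .
qed

lemma iso_prod_mg_deg: "(\<Prod>x\<in>verts B. f (mg_deg B x)) = (\<Prod>u\<in>verts A. f (mg_deg A u))"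
proof -
  have "(\<Prod>u\<in>verts A. f (mg_deg B (\<psi> u))) = (\<Prod>x\<in>verts B. f (mg_deg B x))"
    by (rule prod.reindex_bij_betw[OF iso_bij_verts])
  then show ?thesis using iso_mg_deg by simp
qed

lemma iso_mg_nk: "mg_nk B k = mg_nk A k"
proof -
  have "{x \<in> verts B. mg_deg B x = k} = \<psi> ` {u \<in> verts A. mg_deg A u = k}"
  proof
    show "{x \<in> verts B. mg_deg B x = k} \<subseteq> \<psi> ` {u \<in> verts A. mg_deg A u = k}"
    proof
      fix x assume x: "x \<in> {x \<in> verts B. mg_deg B x = k}"
      then obtain u where u: "u \<in> verts A" "x = \<psi> u" using iso_bij_verts by (auto simp: bij_betw_def)
      then show "x \<in> \<psi> ` {u \<in> verts A. mg_deg A u = k}" using iso_mg_deg[OF u(1)] x by auto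
    qed
    show "\<psi> ` {u \<in> verts A. mg_deg A u = k} \<subseteq> {x \<in> verts B. mg_deg B x = k}"
      using iso_bij_verts iso_mg_deg by (auto simp: bij_betw_def)
  qed
  moreover have "inj_on \<psi> {u \<in> verts A. mg_deg A u = k}"
    using iso_bij_verts by (auto simp: bij_betw_def intro: inj_on_subset)
  ultimately show ?thesis unfolding mg_nk_def by (simp add: card_image)
qed

lemma iso_mg_deg_image: "mg_deg B ` verts B = mg_deg A ` verts A"
  using iso_bij_verts iso_mg_deg by (force simp: bij_betw_def)

lemma iso_mg_e: "mg_e B = mg_e A"
  using bij_betw_same_card[OF iso_bij_halfs] by (simp add: mg_e_def)

lemma iso_mg_connected: "mg_connected A \<Longrightarrow> mg_connected B"
proof -
  assume c: "mg_connected A"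
  have adj: "(\<psi> u, \<psi> w) \<in> mg_adj B" if uw: "(u, w) \<in> mg_adj A" for u w
  proof -
    obtain h where h: "h \<in> halfs A" "u = owner A h" "w = owner A (mate A h)"
      using uw unfolding mg_adj_def by blast
    have "\<tau> h \<in> halfs B" using h iso_bij_halfs by (auto simp: bij_betw_def)
    moreover have "owner B (\<tau> h) = \<psi> u" using iso_owner h by auto
    moreover have "owner B (mate B (\<tau> h)) = \<psi> w" using iso_mate[OF h(1)] iso_owner[OF mg_wfD(4)[OF wfA h(1)]] h by auto
    ultimately show ?thesis unfolding mg_adj_def by (intro CollectI exI[of _ "\<tau> h"]) auto
  qed
  have rt: "(\<psi> u, \<psi> w) \<in> (mg_adj B)\<^sup>*" if "(u, w) \<in> (mg_adj A)\<^sup>*" for u w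
    using that
  proof (induction rule: rtrancl_induct)
    case base then show ?case by simp
  next
    case (step y z) then show ?case using adj by (meson rtrancl.rtrancl_into_rtrancl)
  qed
  show "mg_connected B" unfolding mg_connected_def
  proof (intro conjI ballI)
    show "verts B \<noteq> {}" using c iso_bij_verts by (auto simp: mg_connected_def bij_betw_def)
    fix x y assume xy: "x \<in> verts B" "y \<in> verts B"
    have im: "\<psi> ` verts A = verts B" using iso_bij_verts by (simp add: bij_betw_def)
    obtain u where "u \<in> verts A" "x = \<psi> u" using xy(1) im by blast
    moreover obtain w where "w \<in> verts A" "y = \<psi> w" using xy(2) im by blast
    ultimately
    show "(x, y) \<in> (mg_adj B)\<^sup>*" using c rt by (auto simp: mg_connected_def)
  qed
qed

lemma iso_lam: "lam p \<mu> B = lam p \<mu> A"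
proof -
  have "mg_iso A B" using iso mg_iso_iff_isos_ne[OF wfA] by blast
  then have "mg_aut A = mg_aut B" by (rule mg_aut_eq_if_iso[OF wfA wfB])
  moreover have "(\<Prod>x\<in>verts B. p (mg_deg B x) * fact (mg_deg B x)) = (\<Prod>u\<in>verts A. p (mg_deg A u) * fact (mg_deg A u))"
    by (rule iso_prod_mg_deg)
  ultimately show ?thesis unfolding lam_def using iso_mg_e by simp
qed

end

definition mg_relabel :: "('v \<Rightarrow> 'w) \<Rightarrow> ('h \<Rightarrow> 'g) \<Rightarrow> ('g \<Rightarrow> 'h) \<Rightarrow> ('v, 'h) mgraph \<Rightarrow> ('w, 'g) mgraph" where
  "mg_relabel f g gi H = \<lparr>verts = f ` verts H, halfs = g ` halfs H,
     owner = (\<lambda>x. f (owner H (gi x))), mate = (\<lambda>x. g (mate H (gi x)))\<rparr>"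

lemma mg_relabel_iso:
  assumes wf: "mg_wf H" and f: "inj f" and gi: "\<And>h. gi (g h) = h"
  shows "mg_wf (mg_relabel f g gi H)" "(restrict f (verts H), restrict g (halfs H)) \<in> isos H (mg_relabel f g gi H)"
proof -
  have ginj: "inj g" using gi by (metis injI)
  show "mg_wf (mg_relabel f g gi H)"
    unfolding mg_wf_def mg_relabel_def using mg_wfD[OF wf] gi ginj by (auto simp: inj_eq)
  have "bij_betw f (verts H) (f ` verts H)" by (rule bij_betw_imageI[OF inj_on_subset[OF f subset_UNIV] refl])
  then have b1: "bij_betw (restrict f (verts H)) (verts H) (f ` verts H)"
    by (rule bij_betw_cong[THEN iffD1, rotated]) simp
  have "bij_betw g (halfs H) (g ` halfs H)" by (rule bij_betw_imageI[OF inj_on_subset[OF ginj subset_UNIV] refl])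
  then have b2: "bij_betw (restrict g (halfs H)) (halfs H) (g ` halfs H)"
    by (rule bij_betw_cong[THEN iffD1, rotated]) simp
  show "(restrict f (verts H), restrict g (halfs H)) \<in> isos H (mg_relabel f g gi H)"
    unfolding isos_def
  proof (intro CollectI case_prodI conjI ballI)
    show "restrict f (verts H) \<in> extensional (verts H)" by simp
    show "restrict g (halfs H) \<in> extensional (halfs H)" by simp
    show "bij_betw (restrict f (verts H)) (verts H) (verts (mg_relabel f g gi H))" using b1 by (simp add: mg_relabel_def)
    show "bij_betw (restrict g (halfs H)) (halfs H) (halfs (mg_relabel f g gi H))" using b2 by (simp add: mg_relabel_def)
    fix h assume h: "h \<in> halfs H"
    show "owner (mg_relabel f g gi H) (restrict g (halfs H) h) = restrict f (verts H) (owner H h)"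
      using h mg_wfD(3)[OF wf h] gi by (simp add: mg_relabel_def)
    show "mate (mg_relabel f g gi H) (restrict g (halfs H) h) = restrict g (halfs H) (mate H h)"
      using h mg_wfD(4)[OF wf h] gi by (simp add: mg_relabel_def)
  qed
qed

section \<open>The configuration multigraph\<close>

lemma half_edges_Sigma: "half_edges d n = Sigma {..<n} (\<lambda>i. {..<d n i})"
  by (auto simp: half_edges_def)

lemma finite_half_edges[simp]: "finite (half_edges d n)"
  by (simp add: half_edges_Sigma)

lemma card_half_edges: "card (half_edges d n) = (\<Sum>i<n. d n i)"
  by (simp add: half_edges_Sigma card_SigmaI)

lemma card_half_edges_of_vertex: "i < n \<Longrightarrow> card {g \<in> half_edges d n. fst g = i} = d n i"
proof -
  assume "i < n"
  then have "{g \<in> half_edges d n. fst g = i} = {i} \<times> {..<d n i}" by (auto simp: half_edges_def)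
  then show ?thesis by simp
qed

lemma Exp_eq_average:
  assumes ev: "even (\<Sum>i<n. d n i)"
  shows "Exp d n f = (\<Sum>m\<in>perfect_matchings (half_edges d n). f m) / real (card (perfect_matchings (half_edges d n)))"
proof -
  have ne: "perfect_matchings (half_edges d n) \<noteq> {}"
    using card_perfect_matchings[of "half_edges d n"] num_pairings_even_pos[OF ev] card_half_edges[of d n] by auto
  show ?thesis unfolding Exp_def CM_def matchings_eq_perfect_matchings
    by (rule integral_pmf_of_set[OF ne finite_perfect_matchings[OF finite_half_edges]])
qed

lemma Exp_cong:
  assumes ev: "even (\<Sum>i<n. d n i)" and eq: "\<And>m. m \<in> perfect_matchings (half_edges d n) \<Longrightarrow> f m = g m"
  shows "Exp d n f = Exp d n g"
  unfolding Exp_eq_average[where d = d and n = n, OF ev] using eq by simp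

lemma Exp_add:
  assumes ev: "even (\<Sum>i<n. d n i)"
  shows "Exp d n (\<lambda>m. f m + g m) = Exp d n f + Exp d n g"
  unfolding Exp_eq_average[where d = d and n = n, OF ev] by (simp add: sum.distrib add_divide_distrib)

lemma Gstar_simps[simp]: "verts (Gstar d n m) = {..<n}" "halfs (Gstar d n m) = half_edges d n"
  "owner (Gstar d n m) = fst" "mate (Gstar d n m) = m"
  by (simp_all add: Gstar_def)

lemma fst_half_edge_less: "g \<in> half_edges d n \<Longrightarrow> fst g < n"
  by (auto simp: half_edges_def)

lemma mg_adj_Gstar: "mg_adj (Gstar d n m) = {(fst g, fst (m g)) | g. g \<in> half_edges d n}"
  by (simp add: mg_adj_def)

lemma mg_adj_GstarI: "g \<in> half_edges d n \<Longrightarrow> (fst g, fst (m g)) \<in> mg_adj (Gstar d n m)"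
  unfolding mg_adj_Gstar by blast

lemma mg_adj_GstarE: "(x, y) \<in> mg_adj (Gstar d n m) \<Longrightarrow> \<exists>g\<in>half_edges d n. x = fst g \<and> y = fst (m g)"
  unfolding mg_adj_Gstar by blast

lemma sym_mg_adj_Gstar:
  assumes m: "m \<in> perfect_matchings (half_edges d n)"
  shows "sym (mg_adj (Gstar d n m))"
proof (rule symI)
  fix x y assume "(x, y) \<in> mg_adj (Gstar d n m)"
  then obtain g where g: "g \<in> half_edges d n" "x = fst g" "y = fst (m g)" by (blast dest: mg_adj_GstarE)
  then have "m g \<in> half_edges d n" "m (m g) = g" using perfect_matchingsD[OF m g(1)] by auto
  then show "(y, x) \<in> mg_adj (Gstar d n m)" using g mg_adj_GstarI[of "m g" d n m] by simp
qed

definition component_of :: "(nat \<Rightarrow> nat \<Rightarrow> nat) \<Rightarrow> nat \<Rightarrow> ((nat \<times> nat) \<Rightarrow> (nat \<times> nat)) \<Rightarrow> nat \<Rightarrow> nat set" where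
  "component_of d n m u = {w \<in> {..<n}. (u, w) \<in> (mg_adj (Gstar d n m))\<^sup>*}"

lemma mg_components_Gstar: "mg_components (Gstar d n m) = {component_of d n m u | u. u < n}"
  by (auto simp: mg_components_def component_of_def)

lemma rtrancl_mg_adj_Gstar_sym:
  assumes m: "m \<in> perfect_matchings (half_edges d n)" and "(x, y) \<in> (mg_adj (Gstar d n m))\<^sup>*"
  shows "(y, x) \<in> (mg_adj (Gstar d n m))\<^sup>*"
  using sym_rtrancl[OF sym_mg_adj_Gstar[OF m]] assms(2) by (auto simp: sym_def)

lemma component_of_eq:
  assumes m: "m \<in> perfect_matchings (half_edges d n)" and w: "w \<in> component_of d n m u"
  shows "component_of d n m w = component_of d n m u"
proof -
  have uw: "(u, w) \<in> (mg_adj (Gstar d n m))\<^sup>*" using w by (simp add: component_of_def)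
  have wu: "(w, u) \<in> (mg_adj (Gstar d n m))\<^sup>*" by (rule rtrancl_mg_adj_Gstar_sym[OF m uw])
  show ?thesis unfolding component_of_def using uw wu by (auto intro: rtrancl_trans)
qed

lemma Gstar_components_disjoint:
  assumes m: "m \<in> perfect_matchings (half_edges d n)" and C: "C \<in> mg_components (Gstar d n m)"
    and C': "C' \<in> mg_components (Gstar d n m)" and ne: "C \<inter> C' \<noteq> {}"
  shows "C = C'"
proof -
  obtain u u' where u: "C = component_of d n m u" and u': "C' = component_of d n m u'"
    using C C' by (auto simp: mg_components_Gstar)
  obtain w where "w \<in> C" "w \<in> C'" using ne by auto
  then show ?thesis using component_of_eq[OF m, of w u] component_of_eq[OF m, of w u'] u u' by simp
qed

lemma Gstar_component_subset: "C \<in> mg_components (Gstar d n m) \<Longrightarrow> C \<subseteq> {..<n}"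
  by (auto simp: mg_components_Gstar component_of_def)

lemma Gstar_component_closed:
  assumes m: "m \<in> perfect_matchings (half_edges d n)" and C: "C \<in> mg_components (Gstar d n m)"
    and g: "g \<in> half_edges d n" and gC: "fst g \<in> C"
  shows "fst (m g) \<in> C"
proof -
  obtain u where u: "C = component_of d n m u" using C by (auto simp: mg_components_Gstar)
  have "(fst g, fst (m g)) \<in> mg_adj (Gstar d n m)" using g by (rule mg_adj_GstarI)
  moreover have "(u, fst g) \<in> (mg_adj (Gstar d n m))\<^sup>*" using gC u by (simp add: component_of_def)
  moreover have "fst (m g) < n" using perfect_matchingsD[OF m g] fst_half_edge_less[of "m g"] by auto
  ultimately show ?thesis using u by (auto simp: component_of_def)
qed

lemma finite_Gstar_components: "finite (mg_components (Gstar d n m))"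
  unfolding mg_components_Gstar by simp

lemma mg_restrict_Gstar_simps[simp]:
  "verts (mg_restrict (Gstar d n m) C) = C"
  "halfs (mg_restrict (Gstar d n m) C) = {g \<in> half_edges d n. fst g \<in> C}"
  "owner (mg_restrict (Gstar d n m) C) = fst"
  "mate (mg_restrict (Gstar d n m) C) = m"
  by (simp_all add: mg_restrict_def)

lemma mg_wf_Gstar_component:
  assumes m: "m \<in> perfect_matchings (half_edges d n)" and C: "C \<in> mg_components (Gstar d n m)"
  shows "mg_wf (mg_restrict (Gstar d n m) C)"
  unfolding mg_wf_def using Gstar_component_subset[OF C] Gstar_component_closed[OF m C] perfect_matchingsD[OF m]
  by (auto intro: finite_subset)

lemma Ycount_iso:
  assumes wfA: "mg_wf A" and wfB: "mg_wf B" and iso: "mg_iso A B" and m: "m \<in> perfect_matchings (half_edges d n)"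
  shows "Ycount A d n m = Ycount B d n m"
proof -
  have "mg_iso (mg_restrict (Gstar d n m) C) A \<longleftrightarrow> mg_iso (mg_restrict (Gstar d n m) C) B"
    if C: "C \<in> mg_components (Gstar d n m)" for C
  proof -
    have wfC: "mg_wf (mg_restrict (Gstar d n m) C)" by (rule mg_wf_Gstar_component[OF m C])
    have iso': "mg_iso B A" by (rule mg_iso_sym[OF wfA wfB iso])
    show ?thesis using mg_iso_trans[OF wfC _ iso] mg_iso_trans[OF wfC _ iso'] by blast
  qed
  then have "{C \<in> mg_components (Gstar d n m). mg_iso (mg_restrict (Gstar d n m) C) A}
       = {C \<in> mg_components (Gstar d n m). mg_iso (mg_restrict (Gstar d n m) C) B}" by blast
  then show ?thesis by (simp add: Ycount_def)
qed

section \<open>Embeddings into the configuration multigraph\<close>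

text \<open>For a fixed
placement, the compatible matchings are the perfect matchings of the remaining half-edges, which
is where the expectation of the number of embeddings comes from.\<close>

definition placements :: "('v, 'h) mgraph \<Rightarrow> (nat \<Rightarrow> nat \<Rightarrow> nat) \<Rightarrow> nat \<Rightarrow> (('v \<Rightarrow> nat) \<times> ('h \<Rightarrow> nat \<times> nat)) set" where
  "placements K d n = {(\<phi>, \<sigma>). \<phi> \<in> colour_injections (verts K) {..<n} (d n) (mg_deg K) \<and>
      \<sigma> \<in> colour_injections (halfs K) (half_edges d n) fst (\<lambda>h. \<phi> (owner K h))}"

definition embeddings :: "('v, 'h) mgraph \<Rightarrow> (nat \<Rightarrow> nat \<Rightarrow> nat) \<Rightarrow> nat \<Rightarrow> ((nat \<times> nat) \<Rightarrow> (nat \<times> nat))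
    \<Rightarrow> (('v \<Rightarrow> nat) \<times> ('h \<Rightarrow> nat \<times> nat)) set" where
  "embeddings K d n m = {(\<phi>, \<sigma>) \<in> placements K d n. \<forall>h\<in>halfs K. m (\<sigma> h) = \<sigma> (mate K h)}"

lemma finite_placements: "finite (verts K) \<Longrightarrow> finite (halfs K) \<Longrightarrow> finite (placements K d n)"
proof -
  assume f: "finite (verts K)" "finite (halfs K)"
  have "placements K d n \<subseteq> colour_injections (verts K) {..<n} (d n) (mg_deg K) \<times> (halfs K \<rightarrow>\<^sub>E half_edges d n)"
    by (auto simp: placements_def colour_injections_def)
  moreover have "finite (colour_injections (verts K) {..<n} (d n) (mg_deg K) \<times> (halfs K \<rightarrow>\<^sub>E half_edges d n))"
    using f by (intro finite_cartesian_product finite_colour_injections finite_PiE) auto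
  ultimately show ?thesis by (rule finite_subset)
qed

lemma mg_deg_eq_0: "finite (halfs K) \<Longrightarrow> u \<notin> owner K ` halfs K \<Longrightarrow> mg_deg K u = 0"
  by (auto simp: mg_deg_def)

lemma card_half_edge_placements:
  assumes wf: "mg_wf K" and phi: "\<phi> \<in> colour_injections (verts K) {..<n} (d n) (mg_deg K)"
  shows "real (card (colour_injections (halfs K) (half_edges d n) fst (\<lambda>h. \<phi> (owner K h))))
       = (\<Prod>u\<in>verts K. fact (mg_deg K u))"
proof -
  have fV: "finite (verts K)" and fH: "finite (halfs K)" and oV: "owner K ` halfs K \<subseteq> verts K"
    using wf by (auto simp: mg_wf_def)
  have injphi: "inj_on \<phi> (verts K)" and phin: "\<forall>u\<in>verts K. \<phi> u < n"
    and phid: "\<forall>u\<in>verts K. d n (\<phi> u) = mg_deg K u"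
    using phi by (auto simp: colour_injections_def)
  have "real (card (colour_injections (halfs K) (half_edges d n) fst (\<lambda>h. \<phi> (owner K h))))
     = (\<Prod>k\<in>(\<lambda>h. \<phi> (owner K h)) ` halfs K. ffall (real (card {a \<in> half_edges d n. fst a = k}))
          (card {h \<in> halfs K. \<phi> (owner K h) = k}))"
    by (rule card_colour_injections) (use fH in auto)
  also have "(\<lambda>h. \<phi> (owner K h)) ` halfs K = \<phi> ` (owner K ` halfs K)" by auto
  also have "(\<Prod>k\<in>\<phi> ` (owner K ` halfs K). ffall (real (card {a \<in> half_edges d n. fst a = k}))
          (card {h \<in> halfs K. \<phi> (owner K h) = k}))
     = (\<Prod>u\<in>owner K ` halfs K. ffall (real (card {a \<in> half_edges d n. fst a = \<phi> u}))
          (card {h \<in> halfs K. \<phi> (owner K h) = \<phi> u}))"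
    by (rule prod.reindex_cong[where l = \<phi>]) (use injphi oV inj_on_subset in auto)
  also have "\<dots> = (\<Prod>u\<in>owner K ` halfs K. fact (mg_deg K u))"
  proof (rule prod.cong[OF refl])
    fix u assume u: "u \<in> owner K ` halfs K"
    then have uV: "u \<in> verts K" using oV by auto
    have "card {a \<in> half_edges d n. fst a = \<phi> u} = mg_deg K u"
      using card_half_edges_of_vertex[of "\<phi> u" n d] phin phid uV by simp
    moreover have "{h \<in> halfs K. \<phi> (owner K h) = \<phi> u} = {h \<in> halfs K. owner K h = u}"
      using injphi uV oV by (auto simp: inj_on_def)
    ultimately show "ffall (real (card {a \<in> half_edges d n. fst a = \<phi> u}))
          (card {h \<in> halfs K. \<phi> (owner K h) = \<phi> u}) = fact (mg_deg K u)"
      by (simp add: mg_deg_def ffall_of_nat_self)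
  qed
  also have "\<dots> = (\<Prod>u\<in>verts K. fact (mg_deg K u))"
    using fV oV mg_deg_eq_0[OF fH] by (intro prod.mono_neutral_left) auto
  finally show ?thesis .
qed

lemma card_placements:
  assumes wf: "mg_wf K"
  shows "real (card (placements K d n)) =
     (\<Prod>k\<in>mg_deg K ` verts K. ffall (real (nk d n k)) (mg_nk K k)) * (\<Prod>u\<in>verts K. fact (mg_deg K u))"
proof -
  have fV: "finite (verts K)" and fH: "finite (halfs K)"
    using wf by (auto simp: mg_wf_def)
  have P: "placements K d n = Sigma (colour_injections (verts K) {..<n} (d n) (mg_deg K))
      (\<lambda>\<phi>. colour_injections (halfs K) (half_edges d n) fst (\<lambda>h. \<phi> (owner K h)))"
    by (auto simp: placements_def)
  have "card (placements K d n) = (\<Sum>\<phi>\<in>colour_injections (verts K) {..<n} (d n) (mg_deg K).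
      card (colour_injections (halfs K) (half_edges d n) fst (\<lambda>h. \<phi> (owner K h))))"
    unfolding P by (rule card_SigmaI) (auto intro!: finite_colour_injections fV fH)
  then have "real (card (placements K d n)) = (\<Sum>\<phi>\<in>colour_injections (verts K) {..<n} (d n) (mg_deg K).
      real (card (colour_injections (halfs K) (half_edges d n) fst (\<lambda>h. \<phi> (owner K h)))))"
    by simp
  also have "\<dots> = (\<Sum>\<phi>\<in>colour_injections (verts K) {..<n} (d n) (mg_deg K). (\<Prod>u\<in>verts K. fact (mg_deg K u)))"
    by (rule sum.cong[OF refl]) (rule card_half_edge_placements[OF wf])
  also have "\<dots> = real (card (colour_injections (verts K) {..<n} (d n) (mg_deg K))) * (\<Prod>u\<in>verts K. fact (mg_deg K u))"
    by simp
  also have "real (card (colour_injections (verts K) {..<n} (d n) (mg_deg K)))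
     = (\<Prod>k\<in>mg_deg K ` verts K. ffall (real (card {a\<in>{..<n}. d n a = k})) (card {j\<in>verts K. mg_deg K j = k}))"
    by (rule card_colour_injections) (use fV in auto)
  also have "\<dots> = (\<Prod>k\<in>mg_deg K ` verts K. ffall (real (nk d n k)) (mg_nk K k))"
    by (rule prod.cong[OF refl]) (simp add: nk_def mg_nk_def lessThan_def conj_commute)
  finally show ?thesis .
qed

lemma mg_wf_mate_perfect_matching:
  assumes wf: "mg_wf K"
  shows "(\<lambda>h. if h \<in> halfs K then mate K h else h) \<in> perfect_matchings (halfs K)"
  using wf by (auto simp: mg_wf_def perfect_matchings_def)

lemma card_halfs_eq_2_mg_e: "mg_wf K \<Longrightarrow> card (halfs K) = 2 * mg_e K"
proof -
  assume wf: "mg_wf K"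
  have "even (card (halfs K))"
    using even_card_if_perfect_matchings_ne[of "halfs K"] mg_wf_mate_perfect_matching[OF wf] wf by (auto simp: mg_wf_def)
  then show ?thesis by (simp add: mg_e_def)
qed

lemma card_matchings_compatible:
  assumes wf: "mg_wf K" and e: "(\<phi>, \<sigma>) \<in> placements K d n"
  shows "card {m \<in> perfect_matchings (half_edges d n). \<forall>h\<in>halfs K. m (\<sigma> h) = \<sigma> (mate K h)}
       = num_pairings (card (half_edges d n) - card (halfs K))"
proof -
  let ?X = "half_edges d n"
  define S where "S = \<sigma> ` halfs K"
  define \<pi> where "\<pi> x = (if x \<in> S then \<sigma> (mate K (inv_into (halfs K) \<sigma> x)) else x)" for x
  have fH: "finite (halfs K)" and mH: "\<forall>h\<in>halfs K. mate K h \<in> halfs K \<and> mate K h \<noteq> h \<and> mate K (mate K h) = h"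
    using wf by (auto simp: mg_wf_def)
  have injs: "inj_on \<sigma> (halfs K)" and sX: "\<sigma> ` halfs K \<subseteq> ?X"
    using e by (auto simp: placements_def colour_injections_def)
  have pis: "\<pi> (\<sigma> h) = \<sigma> (mate K h)" if "h \<in> halfs K" for h
    using that injs by (simp add: \<pi>_def S_def)
  have "\<pi> \<in> perfect_matchings S"
    unfolding perfect_matchings_def
  proof (intro CollectI conjI ballI allI impI)
    fix x assume "x \<in> S"
    then obtain h where h: "h \<in> halfs K" "x = \<sigma> h" by (auto simp: S_def)
    show "\<pi> x \<in> S" using h pis mH by (auto simp: S_def)
    show "\<pi> x \<noteq> x" using h pis mH injs by (metis inj_onD)
    show "\<pi> (\<pi> x) = x" using h pis mH by simp
  next
    fix x assume "x \<notin> S" then show "\<pi> x = x" by (simp add: \<pi>_def)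
  qed
  have eq: "{m \<in> perfect_matchings ?X. \<forall>h\<in>halfs K. m (\<sigma> h) = \<sigma> (mate K h)} = {m \<in> perfect_matchings ?X. \<forall>x\<in>S. m x = \<pi> x}"
    using pis by (auto simp: S_def)
  have "card {m \<in> perfect_matchings ?X. \<forall>x\<in>S. m x = \<pi> x} = card (perfect_matchings (?X - S))"
    by (rule card_perfect_matchings_extending) (use sX \<open>\<pi> \<in> perfect_matchings S\<close> in \<open>auto simp: S_def\<close>)
  also have "\<dots> = num_pairings (card (?X - S))" by (simp add: card_perfect_matchings)
  also have "card (?X - S) = card ?X - card (halfs K)"
    using sX injs fH by (simp add: card_Diff_subset S_def card_image)
  finally show ?thesis using eq by simp
qed

lemma sum_card_embeddings:
  fixes K :: "('v, 'h) mgraph"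
  assumes wf: "mg_wf K"
  shows "(\<Sum>m\<in>perfect_matchings (half_edges d n). card (embeddings K d n m))
       = card (placements K d n) * num_pairings (card (half_edges d n) - card (halfs K))"
proof -
  let ?X = "half_edges d n"
  define Q where "Q \<sigma> m \<longleftrightarrow> (\<forall>h\<in>halfs K. m (\<sigma> h) = \<sigma> (mate K h))" for \<sigma> :: "_ \<Rightarrow> nat \<times> nat" and m :: "nat \<times> nat \<Rightarrow> nat \<times> nat"
  define P where "P e m \<longleftrightarrow> Q (snd e) m" for e :: "('v \<Rightarrow> nat) \<times> ('h \<Rightarrow> nat \<times> nat)" and m
  have fP: "finite (placements K d n)" using wf by (intro finite_placements) (auto simp: mg_wf_def)
  have fI: "finite (perfect_matchings ?X)" by (simp add: finite_perfect_matchings)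
  have "embeddings K d n m = {e \<in> placements K d n. P e m}" for m
    by (auto simp: embeddings_def P_def Q_def)
  then have "(\<Sum>m\<in>perfect_matchings ?X. card (embeddings K d n m)) = (\<Sum>m\<in>perfect_matchings ?X. \<Sum>e\<in>placements K d n. if P e m then 1 else 0)"
    using fP by (simp add: sum.inter_filter[symmetric])
  also have "\<dots> = (\<Sum>e\<in>placements K d n. \<Sum>m\<in>perfect_matchings ?X. if P e m then 1 else 0)"
    by (rule sum.swap)
  also have "\<dots> = (\<Sum>e\<in>placements K d n. card {m \<in> perfect_matchings ?X. P e m})"
    using fI by (simp add: sum.inter_filter[symmetric])
  also have "\<dots> = (\<Sum>e\<in>placements K d n. num_pairings (card ?X - card (halfs K)))"
  proof (rule sum.cong[OF refl])
    fix e assume e: "e \<in> placements K d n"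
    obtain \<phi> \<sigma> where [simp]: "e = (\<phi>, \<sigma>)" by (cases e)
    show "card {m \<in> perfect_matchings ?X. P e m} = num_pairings (card ?X - card (halfs K))"
      using card_matchings_compatible[OF wf, of \<phi> \<sigma>] e by (simp add: P_def Q_def)
  qed
  finally show ?thesis by simp
qed

lemma Exp_card_embeddings:
  assumes wf: "mg_wf K" and ev: "even (\<Sum>i<n. d n i)"
  shows "Exp d n (\<lambda>m. real (card (embeddings K d n m)))
       = real (card (placements K d n)) * real (num_pairings ((\<Sum>i<n. d n i) - 2 * mg_e K)) / real (num_pairings (\<Sum>i<n. d n i))"
proof -
  have "(\<Sum>m\<in>perfect_matchings (half_edges d n). real (card (embeddings K d n m)))
      = real (card (placements K d n) * num_pairings (card (half_edges d n) - card (halfs K)))"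
    using sum_card_embeddings[OF wf, of d n] by (simp flip: of_nat_sum)
  then show ?thesis
    unfolding Exp_eq_average[where d = d and n = n, OF ev]
    by (simp add: card_perfect_matchings card_half_edges card_halfs_eq_2_mg_e[OF wf])
qed

lemma embeddingsD:
  assumes e: "(\<phi>, \<sigma>) \<in> embeddings H d n m"
  shows "\<phi> \<in> verts H \<rightarrow>\<^sub>E {..<n}" "inj_on \<phi> (verts H)" "\<And>u. u \<in> verts H \<Longrightarrow> d n (\<phi> u) = mg_deg H u"
    "\<sigma> \<in> halfs H \<rightarrow>\<^sub>E half_edges d n" "inj_on \<sigma> (halfs H)" "\<And>h. h \<in> halfs H \<Longrightarrow> fst (\<sigma> h) = \<phi> (owner H h)"
    "\<And>h. h \<in> halfs H \<Longrightarrow> m (\<sigma> h) = \<sigma> (mate H h)"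
  using e by (auto simp: embeddings_def placements_def colour_injections_def)

lemma embedding_half_edges_of_vertex:
  assumes wf: "mg_wf H" and e: "(\<phi>, \<sigma>) \<in> embeddings H d n m" and u: "u \<in> verts H"
  shows "\<sigma> ` {h \<in> halfs H. owner H h = u} = {g \<in> half_edges d n. fst g = \<phi> u}"
proof (rule card_subset_eq)
  show "finite {g \<in> half_edges d n. fst g = \<phi> u}" by simp
  show "\<sigma> ` {h \<in> halfs H. owner H h = u} \<subseteq> {g \<in> half_edges d n. fst g = \<phi> u}"
    using embeddingsD[OF e] by auto
  have "card (\<sigma> ` {h \<in> halfs H. owner H h = u}) = card {h \<in> halfs H. owner H h = u}"
    using embeddingsD(5)[OF e] by (intro card_image) (auto intro: inj_on_subset)
  also have "\<dots> = d n (\<phi> u)" using embeddingsD(3)[OF e u] by (simp add: mg_deg_def)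
  also have "\<dots> = card {g \<in> half_edges d n. fst g = \<phi> u}"
  proof -
    have "\<phi> u < n" using embeddingsD(1)[OF e] u by (auto simp: PiE_iff)
    then show ?thesis using card_half_edges_of_vertex[of "\<phi> u" n d] by simp
  qed
  finally show "card (\<sigma> ` {h \<in> halfs H. owner H h = u}) = card {g \<in> half_edges d n. fst g = \<phi> u}" .
qed

lemma embedding_half_edges_image:
  assumes wf: "mg_wf H" and e: "(\<phi>, \<sigma>) \<in> embeddings H d n m"
  shows "\<sigma> ` halfs H = {g \<in> half_edges d n. fst g \<in> \<phi> ` verts H}"
proof
  show "\<sigma> ` halfs H \<subseteq> {g \<in> half_edges d n. fst g \<in> \<phi> ` verts H}"
    using embeddingsD[OF e] mg_wfD(3)[OF wf] by auto
  show "{g \<in> half_edges d n. fst g \<in> \<phi> ` verts H} \<subseteq> \<sigma> ` halfs H"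
  proof
    fix g assume "g \<in> {g \<in> half_edges d n. fst g \<in> \<phi> ` verts H}"
    then obtain u where u: "u \<in> verts H" "g \<in> half_edges d n" "fst g = \<phi> u" by auto
    then have "g \<in> \<sigma> ` {h \<in> halfs H. owner H h = u}" using embedding_half_edges_of_vertex[OF wf e u(1)] by auto
    then show "g \<in> \<sigma> ` halfs H" by auto
  qed
qed

lemma embedding_mg_adj:
  assumes wf: "mg_wf H" and e: "(\<phi>, \<sigma>) \<in> embeddings H d n m" and uw: "(u, w) \<in> mg_adj H"
  shows "(\<phi> u, \<phi> w) \<in> mg_adj (Gstar d n m)"
proof -
  obtain h where h: "h \<in> halfs H" "u = owner H h" "w = owner H (mate H h)"
    using uw unfolding mg_adj_def by blast
  have "\<sigma> h \<in> half_edges d n" using embeddingsD(4)[OF e] h by auto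
  moreover have "fst (\<sigma> h) = \<phi> u" using embeddingsD(6)[OF e h(1)] h by simp
  moreover have "fst (m (\<sigma> h)) = \<phi> w"
    using embeddingsD(7)[OF e h(1)] embeddingsD(6)[OF e mg_wfD(4)[OF wf h(1)]] h by simp
  ultimately show ?thesis using mg_adj_GstarI[of "\<sigma> h" d n m] by simp
qed

lemma embedding_image_closed:
  assumes wf: "mg_wf H" and e: "(\<phi>, \<sigma>) \<in> embeddings H d n m"
    and x: "x \<in> \<phi> ` verts H" and xy: "(x, y) \<in> mg_adj (Gstar d n m)"
  shows "y \<in> \<phi> ` verts H"
proof -
  obtain g where g: "g \<in> half_edges d n" "x = fst g" "y = fst (m g)" using xy by (blast dest: mg_adj_GstarE)
  then have "g \<in> \<sigma> ` halfs H" using embedding_half_edges_image[OF wf e] x by auto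
  then obtain h where h: "h \<in> halfs H" "g = \<sigma> h" by auto
  have "y = \<phi> (owner H (mate H h))"
    using g h embeddingsD(7)[OF e h(1)] embeddingsD(6)[OF e mg_wfD(4)[OF wf h(1)]] by simp
  then show ?thesis using mg_wfD(3)[OF wf mg_wfD(4)[OF wf h(1)]] by auto
qed

lemma embedding_image_component:
  assumes wf: "mg_wf H" and conn: "mg_connected H" and e: "(\<phi>, \<sigma>) \<in> embeddings H d n m"
  shows "\<phi> ` verts H \<in> mg_components (Gstar d n m)"
proof -
  obtain u0 where u0: "u0 \<in> verts H" using conn by (auto simp: mg_connected_def)
  have less_n: "\<phi> u < n" if "u \<in> verts H" for u using embeddingsD(1)[OF e] that by auto
  have "\<phi> ` verts H \<subseteq> component_of d n m (\<phi> u0)"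
  proof
    fix x assume "x \<in> \<phi> ` verts H"
    then obtain u where u: "u \<in> verts H" "x = \<phi> u" by auto
    have "(u0, u) \<in> (mg_adj H)\<^sup>*" using conn u0 u by (auto simp: mg_connected_def)
    then have "(\<phi> u0, \<phi> u) \<in> (mg_adj (Gstar d n m))\<^sup>*"
      by (induction rule: rtrancl_induct) (auto intro: rtrancl_into_rtrancl embedding_mg_adj[OF wf e])
    then show "x \<in> component_of d n m (\<phi> u0)" using u less_n by (auto simp: component_of_def)
  qed
  moreover have "component_of d n m (\<phi> u0) \<subseteq> \<phi> ` verts H"
  proof
    fix y assume "y \<in> component_of d n m (\<phi> u0)"
    then have "(\<phi> u0, y) \<in> (mg_adj (Gstar d n m))\<^sup>*" by (simp add: component_of_def)
    then show "y \<in> \<phi> ` verts H"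
      by (induction rule: rtrancl_induct) (use u0 embedding_image_closed[OF wf e] in auto)
  qed
  ultimately show ?thesis unfolding mg_components_Gstar using less_n u0 by blast
qed

lemma embedding_isos_image:
  assumes wf: "mg_wf H" and e: "(\<phi>, \<sigma>) \<in> embeddings H d n m"
  shows "(\<phi>, \<sigma>) \<in> isos H (mg_restrict (Gstar d n m) (\<phi> ` verts H))"
  using embeddingsD[OF e] embedding_half_edges_image[OF wf e]
  unfolding isos_def by (auto simp: bij_betw_def PiE_def)

lemma isos_component_embedding:
  assumes wf: "mg_wf H" and Cn: "C \<subseteq> {..<n}"
    and i: "(\<phi>, \<sigma>) \<in> isos H (mg_restrict (Gstar d n m) C)"
  shows "(\<phi>, \<sigma>) \<in> embeddings H d n m" "\<phi> ` verts H = C"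
proof -
  have ext: "\<phi> \<in> extensional (verts H)" "\<sigma> \<in> extensional (halfs H)"
    and bv: "bij_betw \<phi> (verts H) C" and bh: "bij_betw \<sigma> (halfs H) {g \<in> half_edges d n. fst g \<in> C}"
    and c: "\<forall>h\<in>halfs H. fst (\<sigma> h) = \<phi> (owner H h) \<and> m (\<sigma> h) = \<sigma> (mate H h)"
    using i by (auto simp: isos_def)
  show "\<phi> ` verts H = C" using bv by (simp add: bij_betw_def)
  have deg: "d n (\<phi> u) = mg_deg H u" if u: "u \<in> verts H" for u
  proof -
    have pu: "\<phi> u \<in> C" using bv u by (auto simp: bij_betw_def)
    have "\<sigma> ` {h \<in> halfs H. owner H h = u} = {g \<in> half_edges d n. fst g = \<phi> u}"
    proof
      show "\<sigma> ` {h \<in> halfs H. owner H h = u} \<subseteq> {g \<in> half_edges d n. fst g = \<phi> u}"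
        using bh c by (auto simp: bij_betw_def)
      show "{g \<in> half_edges d n. fst g = \<phi> u} \<subseteq> \<sigma> ` {h \<in> halfs H. owner H h = u}"
      proof
        fix g assume g: "g \<in> {g \<in> half_edges d n. fst g = \<phi> u}"
        then have "g \<in> \<sigma> ` halfs H" using bh pu by (auto simp: bij_betw_def)
        then obtain h where h: "h \<in> halfs H" "g = \<sigma> h" by auto
        then have "\<phi> (owner H h) = \<phi> u" using c g by auto
        then have "owner H h = u" using bv mg_wfD(3)[OF wf h(1)] u by (auto simp: bij_betw_def inj_on_def)
        then show "g \<in> \<sigma> ` {h \<in> halfs H. owner H h = u}" using h by auto
      qed
    qed
    then have "card {g \<in> half_edges d n. fst g = \<phi> u} = card {h \<in> halfs H. owner H h = u}"
      using bh by (metis (no_types, lifting) bij_betw_def card_image inj_on_subset mem_Collect_eq subsetI)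
    then show ?thesis using card_half_edges_of_vertex[of "\<phi> u" n d] pu Cn by (auto simp: mg_deg_def)
  qed
  show "(\<phi>, \<sigma>) \<in> embeddings H d n m"
    unfolding embeddings_def placements_def colour_injections_def
    using ext bv bh c deg Cn by (auto simp: bij_betw_def PiE_def Pi_def)
qed

section \<open>Disjoint unions\<close>

definition mg_union :: "'j set \<Rightarrow> ('j \<Rightarrow> ('v, 'h) mgraph) \<Rightarrow> ('j \<times> 'v, 'j \<times> 'h) mgraph" where
  "mg_union J Hf = \<lparr>verts = SIGMA j:J. verts (Hf j), halfs = SIGMA j:J. halfs (Hf j),
     owner = (\<lambda>(j, h). (j, owner (Hf j) h)), mate = (\<lambda>(j, h). (j, mate (Hf j) h))\<rparr>"

lemma mg_union_simps[simp]:
  "verts (mg_union J Hf) = (SIGMA j:J. verts (Hf j))"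
  "halfs (mg_union J Hf) = (SIGMA j:J. halfs (Hf j))"
  "owner (mg_union J Hf) (j, h) = (j, owner (Hf j) h)"
  "mate (mg_union J Hf) (j, h) = (j, mate (Hf j) h)"
  by (simp_all add: mg_union_def)

lemma mg_wf_mg_union:
  assumes "finite J" "\<forall>j\<in>J. mg_wf (Hf j)"
  shows "mg_wf (mg_union J Hf)"
  using assms unfolding mg_wf_def by (auto simp: mg_union_def)

lemma mg_deg_mg_union:
  assumes "j \<in> J"
  shows "mg_deg (mg_union J Hf) (j, u) = mg_deg (Hf j) u"
proof -
  have "{x \<in> halfs (mg_union J Hf). owner (mg_union J Hf) x = (j, u)} = {j} \<times> {h \<in> halfs (Hf j). owner (Hf j) h = u}"
    using assms by auto
  then show ?thesis by (simp add: mg_deg_def card_cartesian_product_singleton)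
qed

definition glue_maps :: "'j set \<Rightarrow> ('j \<Rightarrow> ('v, 'h) mgraph) \<Rightarrow> ('j \<Rightarrow> ('v \<Rightarrow> nat) \<times> ('h \<Rightarrow> nat \<times> nat))
    \<Rightarrow> (('j \<times> 'v \<Rightarrow> nat) \<times> ('j \<times> 'h \<Rightarrow> nat \<times> nat))" where
  "glue_maps J Hf E = (restrict (\<lambda>(j, u). fst (E j) u) (SIGMA j:J. verts (Hf j)),
                   restrict (\<lambda>(j, h). snd (E j) h) (SIGMA j:J. halfs (Hf j)))"

definition component_assignments :: "'j set \<Rightarrow> ('j \<Rightarrow> ('v, 'h) mgraph) \<Rightarrow> (nat \<Rightarrow> nat \<Rightarrow> nat) \<Rightarrow> nat
    \<Rightarrow> ((nat \<times> nat) \<Rightarrow> (nat \<times> nat)) \<Rightarrow> ('j \<Rightarrow> nat set) set" where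
  "component_assignments J Hf d n m = {Ct \<in> J \<rightarrow>\<^sub>E mg_components (Gstar d n m). inj_on Ct J \<and>
      (\<forall>j\<in>J. mg_iso (mg_restrict (Gstar d n m) (Ct j)) (Hf j))}"

definition glued_isos :: "'j set \<Rightarrow> ('j \<Rightarrow> ('v, 'h) mgraph) \<Rightarrow> (nat \<Rightarrow> nat \<Rightarrow> nat) \<Rightarrow> nat
    \<Rightarrow> ((nat \<times> nat) \<Rightarrow> (nat \<times> nat)) \<Rightarrow> ('j \<Rightarrow> nat set) \<Rightarrow> (('j \<times> 'v \<Rightarrow> nat) \<times> ('j \<times> 'h \<Rightarrow> nat \<times> nat)) set" where
  "glued_isos J Hf d n m Ct = glue_maps J Hf ` (PiE J (\<lambda>j. isos (Hf j) (mg_restrict (Gstar d n m) (Ct j))))"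

lemma embeddingsD_pair:
  assumes e: "e \<in> embeddings H d n m"
  shows "fst e \<in> verts H \<rightarrow>\<^sub>E {..<n}" "inj_on (fst e) (verts H)" "\<And>u. u \<in> verts H \<Longrightarrow> d n (fst e u) = mg_deg H u"
    "snd e \<in> halfs H \<rightarrow>\<^sub>E half_edges d n" "inj_on (snd e) (halfs H)" "\<And>h. h \<in> halfs H \<Longrightarrow> fst (snd e h) = fst e (owner H h)"
    "\<And>h. h \<in> halfs H \<Longrightarrow> m (snd e h) = snd e (mate H h)"
  using embeddingsD[of "fst e" "snd e" H d n m] e by auto

lemma glue_maps_restrict_parts:
  assumes "\<phi> \<in> extensional (SIGMA j:J. verts (Hf j))" "\<sigma> \<in> extensional (SIGMA j:J. halfs (Hf j))"
  shows "glue_maps J Hf (\<lambda>j\<in>J. (restrict (\<lambda>u. \<phi> (j, u)) (verts (Hf j)), restrict (\<lambda>h. \<sigma> (j, h)) (halfs (Hf j))))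
    = (\<phi>, \<sigma>)"
proof -
  have "restrict (\<lambda>(j, u). \<phi> (j, u)) (SIGMA j:J. verts (Hf j)) = \<phi>"
    "restrict (\<lambda>(j, h). \<sigma> (j, h)) (SIGMA j:J. halfs (Hf j)) = \<sigma>"
    using assms by (auto simp: fun_eq_iff extensional_def)
  moreover have "restrict (\<lambda>(j, u). fst ((\<lambda>j\<in>J. (restrict (\<lambda>u. \<phi> (j, u)) (verts (Hf j)),
        restrict (\<lambda>h. \<sigma> (j, h)) (halfs (Hf j)))) j) u) (SIGMA j:J. verts (Hf j))
      = restrict (\<lambda>(j, u). \<phi> (j, u)) (SIGMA j:J. verts (Hf j))"
    "restrict (\<lambda>(j, h). snd ((\<lambda>j\<in>J. (restrict (\<lambda>u. \<phi> (j, u)) (verts (Hf j)),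
        restrict (\<lambda>h. \<sigma> (j, h)) (halfs (Hf j)))) j) h) (SIGMA j:J. halfs (Hf j))
      = restrict (\<lambda>(j, h). \<sigma> (j, h)) (SIGMA j:J. halfs (Hf j))"
    by (auto simp: fun_eq_iff)
  ultimately show ?thesis by (simp add: glue_maps_def)
qed

lemma glue_maps_embedding_disjoint:
  assumes wfH: "\<And>j. j \<in> J \<Longrightarrow> mg_wf (Hf j)"
    and Ej: "\<And>j. j \<in> J \<Longrightarrow> E j \<in> embeddings (Hf j) d n m"
    and disj_images: "\<And>j j'. j \<in> J \<Longrightarrow> j' \<in> J \<Longrightarrow> j \<noteq> j' \<Longrightarrow> fst (E j) ` verts (Hf j) \<inter> fst (E j') ` verts (Hf j') = {}"
  shows "glue_maps J Hf E \<in> embeddings (mg_union J Hf) d n m"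
proof -
  have disj: "j = j'" if "j \<in> J" "j' \<in> J" "x \<in> fst (E j) ` verts (Hf j)" "x \<in> fst (E j') ` verts (Hf j')" for j j' x
    using disj_images[OF that(1,2)] that(3,4) by blast
  define \<phi> where "\<phi> = restrict (\<lambda>(j, u). fst (E j) u) (SIGMA j:J. verts (Hf j))"
  define \<sigma> where "\<sigma> = restrict (\<lambda>(j, h). snd (E j) h) (SIGMA j:J. halfs (Hf j))"
  have jE: "glue_maps J Hf E = (\<phi>, \<sigma>)" by (simp add: glue_maps_def \<phi>_def \<sigma>_def)
  have phiv: "\<phi> (j, u) = fst (E j) u" if "j \<in> J" "u \<in> verts (Hf j)" for j u
    using that by (simp add: \<phi>_def)
  have sigv: "\<sigma> (j, h) = snd (E j) h" if "j \<in> J" "h \<in> halfs (Hf j)" for j h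
    using that by (simp add: \<sigma>_def)
  have phiC: "\<phi> (j, u) \<in> fst (E j) ` verts (Hf j)" if "j \<in> J" "u \<in> verts (Hf j)" for j u
    using phiv[OF that] that by auto
  have inphi: "inj_on \<phi> (verts (mg_union J Hf))"
  proof (rule inj_onI, clarsimp)
    fix j u j' u' assume a: "j \<in> J" "u \<in> verts (Hf j)" "j' \<in> J" "u' \<in> verts (Hf j')" "\<phi> (j, u) = \<phi> (j', u')"
    have "j = j'" using disj[OF a(1,3) phiC[OF a(1,2)]] phiC[OF a(3,4)] a(5) by simp
    moreover have "inj_on (fst (E j)) (verts (Hf j))" using embeddingsD_pair(2)[OF Ej[OF a(1)]] by simp
    ultimately show "j = j' \<and> u = u'" using a phiv by (auto simp: inj_on_def)
  qed
  have phiP: "\<phi> \<in> colour_injections (verts (mg_union J Hf)) {..<n} (d n) (mg_deg (mg_union J Hf))"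
    unfolding colour_injections_def
  proof (intro CollectI conjI ballI)
    show "\<phi> \<in> verts (mg_union J Hf) \<rightarrow>\<^sub>E {..<n}"
      using embeddingsD_pair(1)[OF Ej] by (auto simp: \<phi>_def PiE_iff)
    show "inj_on \<phi> (verts (mg_union J Hf))" by (rule inphi)
    fix x assume "x \<in> verts (mg_union J Hf)"
    then obtain j u where x: "x = (j, u)" "j \<in> J" "u \<in> verts (Hf j)" by auto
    show "d n (\<phi> x) = mg_deg (mg_union J Hf) x"
      using embeddingsD_pair(3)[OF Ej[OF x(2)]] x phiv mg_deg_mg_union[OF x(2), of Hf u] by simp
  qed
  have sigP: "\<sigma> \<in> colour_injections (halfs (mg_union J Hf)) (half_edges d n) fst (\<lambda>h. \<phi> (owner (mg_union J Hf) h))"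
    unfolding colour_injections_def
  proof (intro CollectI conjI ballI)
    show "\<sigma> \<in> halfs (mg_union J Hf) \<rightarrow>\<^sub>E half_edges d n"
      using embeddingsD_pair(4)[OF Ej] by (force simp: \<sigma>_def PiE_iff)
    have fstsig: "fst (\<sigma> (j, h)) = \<phi> (j, owner (Hf j) h)" if "j \<in> J" "h \<in> halfs (Hf j)" for j h
      using embeddingsD_pair(6)[OF Ej[OF that(1)]] that sigv phiv mg_wfD(3)[OF wfH[OF that(1)]]
      by simp
    show "inj_on \<sigma> (halfs (mg_union J Hf))"
    proof (rule inj_onI, clarsimp)
      fix j h j' h' assume a: "j \<in> J" "h \<in> halfs (Hf j)" "j' \<in> J" "h' \<in> halfs (Hf j')" "\<sigma> (j, h) = \<sigma> (j', h')"
      have "\<phi> (j, owner (Hf j) h) = \<phi> (j', owner (Hf j') h')" using fstsig[OF a(1,2)] fstsig[OF a(3,4)] a(5) by simp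
      then have "j = j'" using disj[OF a(1,3)] phiC[OF a(1) mg_wfD(3)[OF wfH[OF a(1)] a(2)]]
          phiC[OF a(3) mg_wfD(3)[OF wfH[OF a(3)] a(4)]] by simp
      moreover have "inj_on (snd (E j)) (halfs (Hf j))" using embeddingsD_pair(5)[OF Ej[OF a(1)]] by simp
      ultimately show "j = j' \<and> h = h'" using a sigv by (auto simp: inj_on_def)
    qed
    fix x assume "x \<in> halfs (mg_union J Hf)"
    then obtain j h where x: "x = (j, h)" "j \<in> J" "h \<in> halfs (Hf j)" by auto
    show "fst (\<sigma> x) = \<phi> (owner (mg_union J Hf) x)" using fstsig[OF x(2,3)] x by simp
  qed
  have compat: "\<forall>h\<in>halfs (mg_union J Hf). m (\<sigma> h) = \<sigma> (mate (mg_union J Hf) h)"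
  proof
    fix x assume "x \<in> halfs (mg_union J Hf)"
    then obtain j h where x: "x = (j, h)" "j \<in> J" "h \<in> halfs (Hf j)" by auto
    show "m (\<sigma> x) = \<sigma> (mate (mg_union J Hf) x)"
      using embeddingsD_pair(7)[OF Ej[OF x(2)]] x sigv mg_wfD(4)[OF wfH[OF x(2)] x(3)] by simp
  qed
  show ?thesis unfolding jE embeddings_def placements_def using phiP sigP compat by simp
qed

context
  fixes J :: "'j set" and Hf :: "'j \<Rightarrow> ('v, 'h) mgraph" and d n m
  assumes finJ: "finite J" and wfH: "\<And>j. j \<in> J \<Longrightarrow> mg_wf (Hf j)"
    and connH: "\<And>j. j \<in> J \<Longrightarrow> mg_connected (Hf j)"
    and m: "m \<in> perfect_matchings (half_edges d n)"
begin

lemma embedding_mg_union_part: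
  assumes e: "(\<phi>, \<sigma>) \<in> embeddings (mg_union J Hf) d n m" and j: "j \<in> J"
  shows "(restrict (\<lambda>u. \<phi> (j, u)) (verts (Hf j)), restrict (\<lambda>h. \<sigma> (j, h)) (halfs (Hf j))) \<in> embeddings (Hf j) d n m"
proof -
  note ep = embeddingsD[OF e]
  note w = mg_wfD[OF wfH[OF j]]
  have "restrict (\<lambda>u. \<phi> (j, u)) (verts (Hf j)) \<in> colour_injections (verts (Hf j)) {..<n} (d n) (mg_deg (Hf j))"
    unfolding colour_injections_def using ep(1,2,3) j mg_deg_mg_union[OF j, of Hf]
    by (auto simp: PiE_iff inj_on_def)
  moreover have "restrict (\<lambda>h. \<sigma> (j, h)) (halfs (Hf j)) \<in> colour_injections (halfs (Hf j)) (half_edges d n) fst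
      (\<lambda>h. restrict (\<lambda>u. \<phi> (j, u)) (verts (Hf j)) (owner (Hf j) h))"
    unfolding colour_injections_def using ep(4,5,6) j w(3)
    by (auto simp: PiE_iff inj_on_def)
  moreover have "\<forall>h\<in>halfs (Hf j). m (restrict (\<lambda>h. \<sigma> (j, h)) (halfs (Hf j)) h) =
      restrict (\<lambda>h. \<sigma> (j, h)) (halfs (Hf j)) (mate (Hf j) h)"
    using ep(7) j w(4) by auto
  ultimately show ?thesis unfolding embeddings_def placements_def by auto
qed

lemma glue_maps_embedding:
  assumes Ct: "Ct \<in> component_assignments J Hf d n m"
    and E: "E \<in> PiE J (\<lambda>j. isos (Hf j) (mg_restrict (Gstar d n m) (Ct j)))"
  shows "glue_maps J Hf E \<in> embeddings (mg_union J Hf) d n m"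
proof (rule glue_maps_embedding_disjoint[OF wfH])
  have CtC: "Ct j \<in> mg_components (Gstar d n m)" if "j \<in> J" for j using Ct that by (auto simp: component_assignments_def)
  have Ej: "E j \<in> embeddings (Hf j) d n m" "fst (E j) ` verts (Hf j) = Ct j" if j: "j \<in> J" for j
  proof -
    obtain \<phi> \<sigma> where pe: "E j = (\<phi>, \<sigma>)" by (cases "E j")
    have "(\<phi>, \<sigma>) \<in> isos (Hf j) (mg_restrict (Gstar d n m) (Ct j))" using PiE_mem[OF E j] pe by simp
    from isos_component_embedding[OF wfH[OF j] Gstar_component_subset[OF CtC[OF j]] this]
    show "E j \<in> embeddings (Hf j) d n m" "fst (E j) ` verts (Hf j) = Ct j" using pe by auto
  qed
  then show "E j \<in> embeddings (Hf j) d n m" if "j \<in> J" for j using that by blast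
  fix j j' assume j: "j \<in> J" "j' \<in> J" "j \<noteq> j'"
  then have "Ct j \<noteq> Ct j'" using Ct by (auto simp: component_assignments_def inj_on_def)
  then show "fst (E j) ` verts (Hf j) \<inter> fst (E j') ` verts (Hf j') = {}"
    using Gstar_components_disjoint[OF m CtC[OF j(1)] CtC[OF j(2)]] Ej(2)[OF j(1)] Ej(2)[OF j(2)] by auto
qed

lemma component_assignment_of_embedding:
  assumes e: "(\<phi>, \<sigma>) \<in> embeddings (mg_union J Hf) d n m"
  defines "E \<equiv> \<lambda>j\<in>J. (restrict (\<lambda>u. \<phi> (j, u)) (verts (Hf j)), restrict (\<lambda>h. \<sigma> (j, h)) (halfs (Hf j)))"
  defines "Ct \<equiv> \<lambda>j\<in>J. fst (E j) ` verts (Hf j)"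
  shows "Ct \<in> component_assignments J Hf d n m"
    and "E \<in> PiE J (\<lambda>j. isos (Hf j) (mg_restrict (Gstar d n m) (Ct j)))"
proof -
  have EjC: "fst (E j) ` verts (Hf j) \<in> mg_components (Gstar d n m)"
    and EjI: "E j \<in> isos (Hf j) (mg_restrict (Gstar d n m) (fst (E j) ` verts (Hf j)))" if j: "j \<in> J" for j
  proof -
    obtain a b where ab: "E j = (a, b)" by (cases "E j")
    have "(a, b) \<in> embeddings (Hf j) d n m" using embedding_mg_union_part[OF e j] j ab by (simp add: E_def)
    with embedding_image_component[OF wfH[OF j] connH[OF j]] embedding_isos_image[OF wfH[OF j]]
    show "fst (E j) ` verts (Hf j) \<in> mg_components (Gstar d n m)"
      "E j \<in> isos (Hf j) (mg_restrict (Gstar d n m) (fst (E j) ` verts (Hf j)))" using ab by auto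
  qed
  show "E \<in> PiE J (\<lambda>j. isos (Hf j) (mg_restrict (Gstar d n m) (Ct j)))"
    using EjI by (auto simp: Ct_def PiE_iff E_def)
  show "Ct \<in> component_assignments J Hf d n m"
    unfolding component_assignments_def
  proof (intro CollectI conjI ballI)
    show "Ct \<in> J \<rightarrow>\<^sub>E mg_components (Gstar d n m)" using EjC by (auto simp: Ct_def)
    show "inj_on Ct J"
    proof (rule inj_onI)
      fix j j' assume jj: "j \<in> J" "j' \<in> J" and eq: "Ct j = Ct j'"
      obtain u where u: "u \<in> verts (Hf j)" using connH[OF jj(1)] by (auto simp: mg_connected_def)
      have "\<phi> (j, u) \<in> Ct j'" using eq u jj by (auto simp: Ct_def E_def)
      then obtain u' where u': "u' \<in> verts (Hf j')" "\<phi> (j, u) = \<phi> (j', u')" using jj by (auto simp: Ct_def E_def)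
      then have "(j, u) = (j', u')"
        using embeddingsD(2)[OF e] u jj by (auto simp: inj_on_def)
      then show "j = j'" by simp
    qed
    fix j assume j: "j \<in> J"
    have "mg_iso (Hf j) (mg_restrict (Gstar d n m) (Ct j))"
      using EjI[OF j] j mg_iso_iff_isos_ne[OF wfH[OF j]] by (auto simp: Ct_def)
    then show "mg_iso (mg_restrict (Gstar d n m) (Ct j)) (Hf j)"
      using mg_iso_sym wfH[OF j] mg_wf_Gstar_component[OF m] EjC[OF j] j by (auto simp: Ct_def)
  qed
qed

lemma embeddings_mg_union_eq:
  "embeddings (mg_union J Hf) d n m = (\<Union>Ct\<in>component_assignments J Hf d n m. glued_isos J Hf d n m Ct)"
proof
  show "(\<Union>Ct\<in>component_assignments J Hf d n m. glued_isos J Hf d n m Ct) \<subseteq> embeddings (mg_union J Hf) d n m"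
    using glue_maps_embedding by (auto simp: glued_isos_def)
  show "embeddings (mg_union J Hf) d n m \<subseteq> (\<Union>Ct\<in>component_assignments J Hf d n m. glued_isos J Hf d n m Ct)"
  proof (clarify)
    fix \<phi> \<sigma> assume e: "(\<phi>, \<sigma>) \<in> embeddings (mg_union J Hf) d n m"
    let ?E = "\<lambda>j\<in>J. (restrict (\<lambda>u. \<phi> (j, u)) (verts (Hf j)), restrict (\<lambda>h. \<sigma> (j, h)) (halfs (Hf j)))"
    let ?Ct = "\<lambda>j\<in>J. fst (?E j) ` verts (Hf j)"
    have "glue_maps J Hf ?E = (\<phi>, \<sigma>)"
      using embeddingsD(1,4)[OF e] by (intro glue_maps_restrict_parts) (auto simp: PiE_def)
    then have "(\<phi>, \<sigma>) \<in> glued_isos J Hf d n m ?Ct"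
      unfolding glued_isos_def by (rule image_eqI[OF sym component_assignment_of_embedding(2)[OF e]])
    then show "(\<phi>, \<sigma>) \<in> (\<Union>Ct\<in>component_assignments J Hf d n m. glued_isos J Hf d n m Ct)"
      using component_assignment_of_embedding(1)[OF e] by (rule UN_I[rotated])
  qed
qed

lemma inj_on_glue_maps: "inj_on (glue_maps J Hf) (PiE J (\<lambda>j. isos (Hf j) (mg_restrict (Gstar d n m) (Ct j))))"
proof (rule inj_onI)
  fix E E' assume E: "E \<in> PiE J (\<lambda>j. isos (Hf j) (mg_restrict (Gstar d n m) (Ct j)))"
    and E': "E' \<in> PiE J (\<lambda>j. isos (Hf j) (mg_restrict (Gstar d n m) (Ct j)))"
    and eq: "glue_maps J Hf E = glue_maps J Hf E'"
  show "E = E'"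
  proof
    fix j show "E j = E' j"
    proof (cases "j \<in> J")
      case False then show ?thesis using E E' by (auto simp: PiE_iff extensional_def)
    next
      case True
      have m1: "E j \<in> isos (Hf j) (mg_restrict (Gstar d n m) (Ct j))" using PiE_mem[OF E True] .
      have m2: "E' j \<in> isos (Hf j) (mg_restrict (Gstar d n m) (Ct j))" using PiE_mem[OF E' True] .
      have i1: "fst (E j) \<in> extensional (verts (Hf j))" "snd (E j) \<in> extensional (halfs (Hf j))"
        using m1 by (cases "E j"; auto simp: isos_def)+
      have i2: "fst (E' j) \<in> extensional (verts (Hf j))" "snd (E' j) \<in> extensional (halfs (Hf j))"
        using m2 by (cases "E' j"; auto simp: isos_def)+
      have "fst (E j) = fst (E' j)"
      proof
        fix u show "fst (E j) u = fst (E' j) u"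
        proof (cases "u \<in> verts (Hf j)")
          case True2: True
          then show ?thesis using fun_cong[OF arg_cong[OF eq, of fst], of "(j, u)"] True by (simp add: glue_maps_def)
        next
          case False then show ?thesis using i1 i2 by (auto simp: extensional_def)
        qed
      qed
      moreover have "snd (E j) = snd (E' j)"
      proof
        fix u show "snd (E j) u = snd (E' j) u"
        proof (cases "u \<in> halfs (Hf j)")
          case True2: True
          then show ?thesis using fun_cong[OF arg_cong[OF eq, of snd], of "(j, u)"] True by (simp add: glue_maps_def)
        next
          case False then show ?thesis using i1 i2 by (auto simp: extensional_def)
        qed
      qed
      ultimately show ?thesis by (simp add: prod_eq_iff)
    qed
  qed
qed

lemma glued_isos_disjoint:
  assumes Ct: "Ct \<in> component_assignments J Hf d n m" and Ct': "Ct' \<in> component_assignments J Hf d n m" and ne: "Ct \<noteq> Ct'"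
  shows "glued_isos J Hf d n m Ct \<inter> glued_isos J Hf d n m Ct' = {}"
proof (rule ccontr)
  assume "glued_isos J Hf d n m Ct \<inter> glued_isos J Hf d n m Ct' \<noteq> {}"
  then obtain E E' where E: "E \<in> PiE J (\<lambda>j. isos (Hf j) (mg_restrict (Gstar d n m) (Ct j)))"
    and E': "E' \<in> PiE J (\<lambda>j. isos (Hf j) (mg_restrict (Gstar d n m) (Ct' j)))"
    and eq: "glue_maps J Hf E = glue_maps J Hf E'" unfolding glued_isos_def by blast
  have "Ct = Ct'"
  proof
    fix j show "Ct j = Ct' j"
    proof (cases "j \<in> J")
      case False then show ?thesis using Ct Ct' by (auto simp: component_assignments_def PiE_iff extensional_def)
    next
      case True
      have CtC: "Ct j \<in> mg_components (Gstar d n m)" "Ct' j \<in> mg_components (Gstar d n m)"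
        using Ct Ct' True by (auto simp: component_assignments_def)
      have a: "fst (E j) ` verts (Hf j) = Ct j"
        using isos_component_embedding(2)[OF wfH[OF True] Gstar_component_subset[OF CtC(1)], of "fst (E j)" "snd (E j)"] PiE_mem[OF E True] by simp
      have b: "fst (E' j) ` verts (Hf j) = Ct' j"
        using isos_component_embedding(2)[OF wfH[OF True] Gstar_component_subset[OF CtC(2)], of "fst (E' j)" "snd (E' j)"] PiE_mem[OF E' True] by simp
      have "\<forall>u\<in>verts (Hf j). fst (E j) u = fst (E' j) u"
      proof
        fix u assume u: "u \<in> verts (Hf j)"
        have "fst (glue_maps J Hf E) (j, u) = fst (glue_maps J Hf E') (j, u)" using eq by simp
        then show "fst (E j) u = fst (E' j) u" using u True by (simp add: glue_maps_def)
      qed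
      then show ?thesis using a b by (auto simp: image_def)
    qed
  qed
  then show False using ne by simp
qed

lemma card_embeddings_mg_union: "card (embeddings (mg_union J Hf) d n m) = card (component_assignments J Hf d n m) * (\<Prod>j\<in>J. mg_aut (Hf j))"
proof -
  have finCT: "finite (component_assignments J Hf d n m)"
  proof (rule finite_subset)
    show "component_assignments J Hf d n m \<subseteq> J \<rightarrow>\<^sub>E mg_components (Gstar d n m)" by (auto simp: component_assignments_def)
    show "finite (J \<rightarrow>\<^sub>E mg_components (Gstar d n m))" using finJ finite_Gstar_components by (intro finite_PiE) auto
  qed
  have cardB: "card (glued_isos J Hf d n m Ct) = (\<Prod>j\<in>J. mg_aut (Hf j))" if Ct: "Ct \<in> component_assignments J Hf d n m" for Ct
  proof -
    have "card (glued_isos J Hf d n m Ct) = card (PiE J (\<lambda>j. isos (Hf j) (mg_restrict (Gstar d n m) (Ct j))))"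
      unfolding glued_isos_def by (rule card_image[OF inj_on_glue_maps])
    also have "\<dots> = (\<Prod>j\<in>J. card (isos (Hf j) (mg_restrict (Gstar d n m) (Ct j))))"
      using finJ by (rule card_PiE)
    also have "\<dots> = (\<Prod>j\<in>J. mg_aut (Hf j))"
    proof (rule prod.cong[OF refl])
      fix j assume j: "j \<in> J"
      have CtC: "Ct j \<in> mg_components (Gstar d n m)" using Ct j by (auto simp: component_assignments_def)
      have "mg_iso (mg_restrict (Gstar d n m) (Ct j)) (Hf j)" using Ct j by (auto simp: component_assignments_def)
      then have "mg_iso (Hf j) (mg_restrict (Gstar d n m) (Ct j))"
        using mg_iso_sym wfH[OF j] mg_wf_Gstar_component[OF m CtC] by blast
      then show "card (isos (Hf j) (mg_restrict (Gstar d n m) (Ct j))) = mg_aut (Hf j)"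
        using card_isos_eq_mg_aut wfH[OF j] mg_wf_Gstar_component[OF m CtC] by blast
    qed
    finally show ?thesis .
  qed
  have "card (embeddings (mg_union J Hf) d n m) = (\<Sum>Ct\<in>component_assignments J Hf d n m. card (glued_isos J Hf d n m Ct))"
    unfolding embeddings_mg_union_eq
  proof (rule card_UN_disjoint[OF finCT])
    show "\<forall>i\<in>component_assignments J Hf d n m. finite (glued_isos J Hf d n m i)"
    proof
      fix Ct assume "Ct \<in> component_assignments J Hf d n m"
      have "finite (embeddings (mg_union J Hf) d n m)"
        by (rule finite_subset[of _ "placements (mg_union J Hf) d n"])
           (auto simp: embeddings_def intro!: finite_placements finJ mg_wfD[OF wfH])
      then show "finite (glued_isos J Hf d n m Ct)" using embeddings_mg_union_eq \<open>Ct \<in> _\<close>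
        by (metis UN_upper finite_subset)
    qed
    show "\<forall>i\<in>component_assignments J Hf d n m. \<forall>j\<in>component_assignments J Hf d n m. i \<noteq> j \<longrightarrow> glued_isos J Hf d n m i \<inter> glued_isos J Hf d n m j = {}"
      using glued_isos_disjoint by blast
  qed
  also have "\<dots> = card (component_assignments J Hf d n m) * (\<Prod>j\<in>J. mg_aut (Hf j))"
    using cardB by simp
  finally show ?thesis .
qed

end

lemma mg_nk_mg_union:
  assumes "finite J" "\<And>j. j \<in> J \<Longrightarrow> finite (verts (Hf j))"
  shows "mg_nk (mg_union J Hf) k = (\<Sum>j\<in>J. mg_nk (Hf j) k)"
proof -
  have "{x \<in> verts (mg_union J Hf). mg_deg (mg_union J Hf) x = k} = (SIGMA j:J. {u \<in> verts (Hf j). mg_deg (Hf j) u = k})"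
    using mg_deg_mg_union[of _ J Hf] by auto
  then show ?thesis unfolding mg_nk_def using assms by (simp add: card_SigmaI)
qed

lemma mg_v_mg_union:
  assumes "finite J" "\<And>j. j \<in> J \<Longrightarrow> finite (verts (Hf j))"
  shows "mg_v (mg_union J Hf) = (\<Sum>j\<in>J. mg_v (Hf j))"
  unfolding mg_v_def using assms by (simp add: card_SigmaI)

lemma mg_e_mg_union:
  assumes "finite J" "\<And>j. j \<in> J \<Longrightarrow> mg_wf (Hf j)"
  shows "mg_e (mg_union J Hf) = (\<Sum>j\<in>J. mg_e (Hf j))"
proof -
  have "card (halfs (mg_union J Hf)) = (\<Sum>j\<in>J. card (halfs (Hf j)))"
    unfolding mg_union_simps by (rule card_SigmaI) (use assms(1) mg_wfD(2)[OF assms(2)] in auto)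
  also have "\<dots> = 2 * (\<Sum>j\<in>J. mg_e (Hf j))"
    by (simp add: sum_distrib_left card_halfs_eq_2_mg_e[OF assms(2)])
  finally show ?thesis by (simp add: mg_e_def)
qed

lemma prod_deg_mg_union:
  assumes "finite J" "\<And>j. j \<in> J \<Longrightarrow> finite (verts (Hf j))"
  shows "(\<Prod>x\<in>verts (mg_union J Hf). g (mg_deg (mg_union J Hf) x)) = (\<Prod>j\<in>J. \<Prod>u\<in>verts (Hf j). g (mg_deg (Hf j) u))"
proof -
  have "(\<Prod>x\<in>verts (mg_union J Hf). g (mg_deg (mg_union J Hf) x)) = (\<Prod>(j, u)\<in>(SIGMA j:J. verts (Hf j)). g (mg_deg (Hf j) u))"
    by (rule prod.cong) (auto simp: mg_deg_mg_union)
  also have "\<dots> = (\<Prod>j\<in>J. \<Prod>u\<in>verts (Hf j). g (mg_deg (Hf j) u))"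
    by (rule prod.Sigma[symmetric]) (use assms in auto)
  finally show ?thesis .
qed

lemma mg_deg_image_mg_union: "mg_deg (mg_union J Hf) ` verts (mg_union J Hf) = (\<Union>j\<in>J. mg_deg (Hf j) ` verts (Hf j))"
  by (force simp: mg_deg_mg_union)

section \<open>Factorial moments of component counts\<close>

text \<open>The pairs \<open>(i, t) \<in> copy_indices rs\<close> label \<open>rs ! i\<close> copies of the \<open>i\<close>-th graph of a list.\<close>

definition copy_indices :: "nat list \<Rightarrow> (nat \<times> nat) set" where
  "copy_indices rs = {(i, t). i < length rs \<and> t < rs ! i}"

lemma copy_indices_eq_Sigma: "copy_indices rs = (SIGMA i:{..<length rs}. {..<rs ! i})"
  by (auto simp: copy_indices_def)

lemma finite_copy_indices [simp]: "finite (copy_indices rs)"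
  by (simp add: copy_indices_eq_Sigma)

definition component_type :: "('v, 'h) mgraph list \<Rightarrow> (nat \<Rightarrow> nat \<Rightarrow> nat) \<Rightarrow> nat
    \<Rightarrow> ((nat \<times> nat) \<Rightarrow> (nat \<times> nat)) \<Rightarrow> nat set \<Rightarrow> nat" where
  "component_type Hs d n m C = (if \<exists>i<length Hs. mg_iso (mg_restrict (Gstar d n m) C) (Hs ! i)
      then (SOME i. i < length Hs \<and> mg_iso (mg_restrict (Gstar d n m) C) (Hs ! i)) else length Hs)"

context
  fixes Hs :: "('v, 'h) mgraph list" and rs :: "nat list" and d n m
  assumes len: "length rs = length Hs"
    and wfH: "\<And>H. H \<in> set Hs \<Longrightarrow> mg_wf H"
    and connH: "\<And>H. H \<in> set Hs \<Longrightarrow> mg_connected H"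
    and noniso: "\<And>i j. i < length Hs \<Longrightarrow> j < length Hs \<Longrightarrow> i \<noteq> j \<Longrightarrow> \<not> mg_iso (Hs ! i) (Hs ! j)"
    and m: "m \<in> perfect_matchings (half_edges d n)"
begin

lemma component_type_some:
  assumes ex: "\<exists>i<length Hs. mg_iso (mg_restrict (Gstar d n m) C) (Hs ! i)"
  shows "component_type Hs d n m C < length Hs \<and> mg_iso (mg_restrict (Gstar d n m) C) (Hs ! component_type Hs d n m C)"
proof -
  have "component_type Hs d n m C = (SOME i. i < length Hs \<and> mg_iso (mg_restrict (Gstar d n m) C) (Hs ! i))"
    using ex by (simp add: component_type_def)
  then show ?thesis using someI_ex[OF ex] by simp
qed

lemma component_type_eq_iff:
  assumes C: "C \<in> mg_components (Gstar d n m)" and i: "i < length Hs"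
  shows "component_type Hs d n m C = i \<longleftrightarrow> mg_iso (mg_restrict (Gstar d n m) C) (Hs ! i)"
proof -
  have wfC: "mg_wf (mg_restrict (Gstar d n m) C)" by (rule mg_wf_Gstar_component[OF m C])
  have uniq: "i1 = i2" if "i1 < length Hs" "i2 < length Hs" "mg_iso (mg_restrict (Gstar d n m) C) (Hs ! i1)"
    "mg_iso (mg_restrict (Gstar d n m) C) (Hs ! i2)" for i1 i2
  proof (rule ccontr)
    assume ne: "i1 \<noteq> i2"
    have w1: "mg_wf (Hs ! i1)" using wfH that(1) by auto
    have "mg_iso (Hs ! i1) (mg_restrict (Gstar d n m) C)" using mg_iso_sym[OF wfC w1 that(3)] .
    then have "mg_iso (Hs ! i1) (Hs ! i2)" using mg_iso_trans[OF w1 _ that(4)] by blast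
    then show False using noniso[OF that(1,2) ne] by simp
  qed
  show ?thesis
  proof
    assume a: "component_type Hs d n m C = i"
    show "mg_iso (mg_restrict (Gstar d n m) C) (Hs ! i)"
    proof (cases "\<exists>i<length Hs. mg_iso (mg_restrict (Gstar d n m) C) (Hs ! i)")
      case True
      then have "component_type Hs d n m C < length Hs \<and> mg_iso (mg_restrict (Gstar d n m) C) (Hs ! component_type Hs d n m C)"
        by (rule component_type_some)
      then show ?thesis using a by simp
    next
      case False
      have "component_type Hs d n m C = length Hs" unfolding component_type_def by (rule if_not_P[OF False])
      then show ?thesis using a i by simp
    qed
  next
    assume b: "mg_iso (mg_restrict (Gstar d n m) C) (Hs ! i)"
    then have ex: "\<exists>i<length Hs. mg_iso (mg_restrict (Gstar d n m) C) (Hs ! i)" using i by blast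
    then have "component_type Hs d n m C < length Hs \<and> mg_iso (mg_restrict (Gstar d n m) C) (Hs ! component_type Hs d n m C)"
      by (rule component_type_some)
    then show "component_type Hs d n m C = i" using uniq[OF _ i _ b] by blast
  qed
qed

lemma component_assignments_eq_colour_injections:
  "component_assignments (copy_indices rs) (\<lambda>(i, t). Hs ! i) d n m = colour_injections (copy_indices rs) (mg_components (Gstar d n m)) (component_type Hs d n m) fst"
proof -
  have "(\<forall>j\<in>copy_indices rs. mg_iso (mg_restrict (Gstar d n m) (Ct j)) ((\<lambda>(i, t). Hs ! i) j)) \<longleftrightarrow>
        (\<forall>j\<in>copy_indices rs. component_type Hs d n m (Ct j) = fst j)"
    if Ct: "Ct \<in> copy_indices rs \<rightarrow>\<^sub>E mg_components (Gstar d n m)" for Ct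
  proof -
    have "mg_iso (mg_restrict (Gstar d n m) (Ct j)) ((\<lambda>(i, t). Hs ! i) j) \<longleftrightarrow> component_type Hs d n m (Ct j) = fst j"
      if j: "j \<in> copy_indices rs" for j
    proof -
      obtain i t where jt: "j = (i, t)" "i < length Hs" using j len by (auto simp: copy_indices_def)
      have "Ct j \<in> mg_components (Gstar d n m)" using Ct j by auto
      then show ?thesis using component_type_eq_iff[of "Ct j" i] jt by simp
    qed
    then show ?thesis by blast
  qed
  then show ?thesis unfolding component_assignments_def colour_injections_def by blast
qed

lemma card_component_assignments:
  "real (card (component_assignments (copy_indices rs) (\<lambda>(i, t). Hs ! i) d n m)) = (\<Prod>i<length Hs. ffall (real (Ycount (Hs ! i) d n m)) (rs ! i))"
proof -
  have "real (card (component_assignments (copy_indices rs) (\<lambda>(i, t). Hs ! i) d n m))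
      = (\<Prod>k\<in>fst ` copy_indices rs. ffall (real (card {C \<in> mg_components (Gstar d n m). component_type Hs d n m C = k}))
           (card {j\<in>copy_indices rs. fst j = k}))"
    unfolding component_assignments_eq_colour_injections by (rule card_colour_injections) (simp_all add: finite_Gstar_components)
  also have "\<dots> = (\<Prod>k\<in>fst ` copy_indices rs. ffall (real (Ycount (Hs ! k) d n m)) (rs ! k))"
  proof (rule prod.cong[OF refl])
    fix k assume "k \<in> fst ` copy_indices rs"
    then have k: "k < length Hs" using len by (auto simp: copy_indices_def)
    have "{C \<in> mg_components (Gstar d n m). component_type Hs d n m C = k}
        = {C \<in> mg_components (Gstar d n m). mg_iso (mg_restrict (Gstar d n m) C) (Hs ! k)}"
      using component_type_eq_iff[OF _ k] by auto
    moreover have "{j\<in>copy_indices rs. fst j = k} = {k} \<times> {..<rs ! k}" using k len by (auto simp: copy_indices_def)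
    ultimately show "ffall (real (card {C \<in> mg_components (Gstar d n m). component_type Hs d n m C = k})) (card {j\<in>copy_indices rs. fst j = k})
        = ffall (real (Ycount (Hs ! k) d n m)) (rs ! k)"
      by (simp add: Ycount_def)
  qed
  also have "\<dots> = (\<Prod>k<length Hs. ffall (real (Ycount (Hs ! k) d n m)) (rs ! k))"
  proof (rule prod.mono_neutral_left)
    show "fst ` copy_indices rs \<subseteq> {..<length Hs}" using len by (auto simp: copy_indices_def)
    show "\<forall>i\<in>{..<length Hs} - fst ` copy_indices rs. ffall (real (Ycount (Hs ! i) d n m)) (rs ! i) = 1"
    proof
      fix i assume i: "i \<in> {..<length Hs} - fst ` copy_indices rs"
      have "rs ! i = 0"
      proof (rule ccontr)
        assume "rs ! i \<noteq> 0"
        then have "(i, 0) \<in> copy_indices rs" using i len by (auto simp: copy_indices_def)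
        then show False using i by force
      qed
      then show "ffall (real (Ycount (Hs ! i) d n m)) (rs ! i) = 1" by simp
    qed
  qed simp
  finally show ?thesis .
qed

lemma card_embeddings_copies:
  "real (card (embeddings (mg_union (copy_indices rs) (\<lambda>(i, t). Hs ! i)) d n m))
    = (\<Prod>i<length Hs. ffall (real (Ycount (Hs ! i) d n m)) (rs ! i)) * real (\<Prod>j\<in>copy_indices rs. mg_aut (Hs ! fst j))"
proof -
  have wf': "\<And>j. j \<in> copy_indices rs \<Longrightarrow> mg_wf ((\<lambda>(i, t). Hs ! i) j)"
    and conn': "\<And>j. j \<in> copy_indices rs \<Longrightarrow> mg_connected ((\<lambda>(i, t). Hs ! i) j)"
    using wfH connH len by (auto simp: copy_indices_def)
  have "card (embeddings (mg_union (copy_indices rs) (\<lambda>(i, t). Hs ! i)) d n m)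
     = card (component_assignments (copy_indices rs) (\<lambda>(i, t). Hs ! i) d n m) * (\<Prod>j\<in>copy_indices rs. mg_aut ((\<lambda>(i, t). Hs ! i) j))"
    by (rule card_embeddings_mg_union[OF finite_copy_indices wf' conn' m])
  moreover have "(\<Prod>j\<in>copy_indices rs. mg_aut ((\<lambda>(i, t). Hs ! i) j)) = (\<Prod>j\<in>copy_indices rs. mg_aut (Hs ! fst j))"
    by (rule prod.cong) auto
  ultimately show ?thesis using card_component_assignments by simp
qed

end

lemma Exp_factorial_moment_embeddings:
  fixes Hs :: "('v, 'h) mgraph list"
  assumes len: "length rs = length Hs"
    and wfH: "\<And>H. H \<in> set Hs \<Longrightarrow> mg_wf H"
    and connH: "\<And>H. H \<in> set Hs \<Longrightarrow> mg_connected H"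
    and noniso: "\<And>i j. i < length Hs \<Longrightarrow> j < length Hs \<Longrightarrow> i \<noteq> j \<Longrightarrow> \<not> mg_iso (Hs ! i) (Hs ! j)"
    and ev: "even (\<Sum>i<n. d n i)"
  shows "Exp d n (\<lambda>m. \<Prod>i<length Hs. ffall (real (Ycount (Hs ! i) d n m)) (rs ! i))
     = Exp d n (\<lambda>m. real (card (embeddings (mg_union (copy_indices rs) (\<lambda>(i, t). Hs ! i)) d n m)))
       / real (\<Prod>j\<in>copy_indices rs. mg_aut (Hs ! fst j))"
proof -
  let ?A = "real (\<Prod>j\<in>copy_indices rs. mg_aut (Hs ! fst j))"
  have Apos: "?A > 0"
  proof -
    have "\<forall>j\<in>copy_indices rs. mg_aut (Hs ! fst j) > 0"
    proof
      fix j assume "j \<in> copy_indices rs"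
      then have "fst j < length Hs" using len by (auto simp: copy_indices_def)
      then have "Hs ! fst j \<in> set Hs" by (rule nth_mem)
      then show "mg_aut (Hs ! fst j) > 0" by (intro mg_aut_pos wfH)
    qed
    then show ?thesis by (simp add: prod_pos)
  qed
  have pt: "(\<Prod>i<length Hs. ffall (real (Ycount (Hs ! i) d n m)) (rs ! i))
      = real (card (embeddings (mg_union (copy_indices rs) (\<lambda>(i, t). Hs ! i)) d n m)) / ?A" if "m \<in> perfect_matchings (half_edges d n)" for m
  proof -
    have e: "real (card (embeddings (mg_union (copy_indices rs) (\<lambda>(i, t). Hs ! i)) d n m))
      = (\<Prod>i<length Hs. ffall (real (Ycount (Hs ! i) d n m)) (rs ! i)) * ?A"
      by (rule card_embeddings_copies[OF len wfH connH noniso that])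
    have A0: "?A \<noteq> 0" using Apos by linarith
    show ?thesis unfolding e by (rule nonzero_mult_div_cancel_right[OF A0, symmetric])
  qed
  show ?thesis unfolding Exp_eq_average[where d=d and n=n, OF ev]
    by (simp add: pt sum_divide_distrib mult.commute)
qed

definition total_degree :: "(nat \<Rightarrow> nat \<Rightarrow> nat) \<Rightarrow> nat \<Rightarrow> nat" where
  "total_degree d n = (\<Sum>i<n. d n i)"

definition copy_weight :: "(nat \<Rightarrow> nat \<Rightarrow> nat) \<Rightarrow> nat \<Rightarrow> nat set \<Rightarrow> (nat \<Rightarrow> nat) \<Rightarrow> nat \<Rightarrow> real" where
  "copy_weight d n S N e = (\<Prod>k\<in>S. ffall (real (nk d n k)) (N k)) * real (num_pairings (total_degree d n - 2 * e)) / real (num_pairings (total_degree d n))"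

lemma copy_weight_mono_neutral:
  assumes "finite S'" "S \<subseteq> S'" "\<And>k. k \<in> S' - S \<Longrightarrow> N k = 0"
  shows "copy_weight d n S N e = copy_weight d n S' N e"
proof -
  have "(\<Prod>k\<in>S. ffall (real (nk d n k)) (N k)) = (\<Prod>k\<in>S'. ffall (real (nk d n k)) (N k))"
    by (rule prod.mono_neutral_left) (use assms in auto)
  then show ?thesis by (simp add: copy_weight_def)
qed

definition deg_fact_prod :: "('v, 'h) mgraph \<Rightarrow> real" where
  "deg_fact_prod K = (\<Prod>x\<in>verts K. fact (mg_deg K x))"

definition deg_prob_prod :: "(nat \<Rightarrow> real) \<Rightarrow> ('v, 'h) mgraph \<Rightarrow> real" where
  "deg_prob_prod p K = (\<Prod>x\<in>verts K. p (mg_deg K x))"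

lemma Exp_card_embeddings_eq_copy_weight:
  assumes wf: "mg_wf K" and ev: "even (\<Sum>i<n. d n i)"
  shows "Exp d n (\<lambda>m. real (card (embeddings K d n m))) = deg_fact_prod K * copy_weight d n (mg_deg K ` verts K) (mg_nk K) (mg_e K)"
  unfolding Exp_card_embeddings[where d=d and n=n, OF wf ev] card_placements[OF wf, of d n] copy_weight_def deg_fact_prod_def total_degree_def by (simp add: field_simps)

lemma mg_nk_eq_0: "k \<notin> mg_deg K ` verts K \<Longrightarrow> mg_nk K k = 0"
proof -
  assume "k \<notin> mg_deg K ` verts K"
  then have "{u \<in> verts K. mg_deg K u = k} = {}" by blast
  then show ?thesis unfolding mg_nk_def by (metis card.empty)
qed

lemma sum_mg_nk: "finite (verts K) \<Longrightarrow> (\<Sum>k\<in>mg_deg K ` verts K. mg_nk K k) = mg_v K"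
  unfolding mg_nk_def mg_v_def
  using sum.image_gen[of "verts K" "\<lambda>_. 1::nat" "mg_deg K"] by simp

lemma prod_mg_nk: "finite (verts K) \<Longrightarrow> (\<Prod>k\<in>mg_deg K ` verts K. p k ^ mg_nk K k) = deg_prob_prod p K"
  unfolding mg_nk_def deg_prob_prod_def
  using prod.image_gen[of "verts K" "\<lambda>x. p (mg_deg K x)" "mg_deg K"] by simp

lemma sum_mg_nk_superset:
  assumes "finite S" "mg_deg K ` verts K \<subseteq> S" "finite (verts K)"
  shows "(\<Sum>k\<in>S. mg_nk K k) = mg_v K"
proof -
  have "(\<Sum>k\<in>mg_deg K ` verts K. mg_nk K k) = (\<Sum>k\<in>S. mg_nk K k)"
    by (rule sum.mono_neutral_left) (use assms mg_nk_eq_0 in auto)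
  then show ?thesis using sum_mg_nk[OF assms(3)] by simp
qed

lemma prod_mg_nk_superset:
  assumes "finite S" "mg_deg K ` verts K \<subseteq> S" "finite (verts K)"
  shows "(\<Prod>k\<in>S. p k ^ mg_nk K k) = deg_prob_prod p K"
proof -
  have z: "\<forall>i\<in>S - mg_deg K ` verts K. p i ^ mg_nk K i = 1" using mg_nk_eq_0 by (metis DiffD2 power_0)
  have "(\<Prod>k\<in>mg_deg K ` verts K. p k ^ mg_nk K k) = (\<Prod>k\<in>S. p k ^ mg_nk K k)"
    by (rule prod.mono_neutral_left[OF assms(1) assms(2) z])
  then show ?thesis using prod_mg_nk[OF assms(3)] by simp
qed

lemma copy_weight_degree_superset:
  assumes "finite S" "mg_deg K ` verts K \<subseteq> S"
  shows "copy_weight d n (mg_deg K ` verts K) (mg_nk K) e = copy_weight d n S (mg_nk K) e"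
  by (rule copy_weight_mono_neutral) (use assms mg_nk_eq_0 in auto)

lemma mg_union_copies:
  fixes Hs :: "('v, 'h) mgraph list"
  assumes len: "length rs = length Hs" and wfH: "\<forall>H\<in>set Hs. mg_wf H"
  shows "mg_wf (mg_union (copy_indices rs) (\<lambda>(i, t). Hs ! i))"
    and "mg_e (mg_union (copy_indices rs) (\<lambda>(i, t). Hs ! i)) = (\<Sum>j\<in>copy_indices rs. mg_e (Hs ! fst j))"
    and "mg_v (mg_union (copy_indices rs) (\<lambda>(i, t). Hs ! i)) = (\<Sum>j\<in>copy_indices rs. mg_v (Hs ! fst j))"
    and "mg_nk (mg_union (copy_indices rs) (\<lambda>(i, t). Hs ! i)) = (\<lambda>k. \<Sum>j\<in>copy_indices rs. mg_nk (Hs ! fst j) k)"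
    and "deg_fact_prod (mg_union (copy_indices rs) (\<lambda>(i, t). Hs ! i)) = (\<Prod>j\<in>copy_indices rs. deg_fact_prod (Hs ! fst j))"
    and "deg_prob_prod p (mg_union (copy_indices rs) (\<lambda>(i, t). Hs ! i)) = (\<Prod>j\<in>copy_indices rs. deg_prob_prod p (Hs ! fst j))"
    and "mg_deg (mg_union (copy_indices rs) (\<lambda>(i, t). Hs ! i)) ` verts (mg_union (copy_indices rs) (\<lambda>(i, t). Hs ! i)) = (\<Union>j\<in>copy_indices rs. mg_deg (Hs ! fst j) ` verts (Hs ! fst j))"
proof -
  let ?K = "mg_union (copy_indices rs) (\<lambda>(i, t). Hs ! i)"
  have wf: "mg_wf (Hs ! a)" if "(a, b) \<in> copy_indices rs" for a b
    using that len wfH nth_mem by (auto simp: copy_indices_def)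
  show "mg_wf ?K" by (rule mg_wf_mg_union) (auto intro: wf)
  have "mg_e ?K = (\<Sum>j\<in>copy_indices rs. mg_e ((\<lambda>(i, t). Hs ! i) j))"
    by (rule mg_e_mg_union) (auto intro: wf)
  then show "mg_e ?K = (\<Sum>j\<in>copy_indices rs. mg_e (Hs ! fst j))" by (simp add: split_def)
  have "mg_v ?K = (\<Sum>j\<in>copy_indices rs. mg_v ((\<lambda>(i, t). Hs ! i) j))"
    by (rule mg_v_mg_union) (auto intro: mg_wfD(1)[OF wf])
  then show "mg_v ?K = (\<Sum>j\<in>copy_indices rs. mg_v (Hs ! fst j))" by (simp add: split_def)
  have "mg_nk ?K k = (\<Sum>j\<in>copy_indices rs. mg_nk ((\<lambda>(i, t). Hs ! i) j) k)" for k
    by (rule mg_nk_mg_union) (auto intro: mg_wfD(1)[OF wf])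
  then show "mg_nk ?K = (\<lambda>k. \<Sum>j\<in>copy_indices rs. mg_nk (Hs ! fst j) k)" by (simp add: split_def fun_eq_iff)
  have "deg_fact_prod ?K = (\<Prod>j\<in>copy_indices rs. deg_fact_prod ((\<lambda>(i, t). Hs ! i) j))"
    unfolding deg_fact_prod_def by (rule prod_deg_mg_union) (auto intro: mg_wfD(1)[OF wf])
  then show "deg_fact_prod ?K = (\<Prod>j\<in>copy_indices rs. deg_fact_prod (Hs ! fst j))" by (simp add: split_def)
  have "deg_prob_prod p ?K = (\<Prod>j\<in>copy_indices rs. deg_prob_prod p ((\<lambda>(i, t). Hs ! i) j))"
    unfolding deg_prob_prod_def by (rule prod_deg_mg_union) (auto intro: mg_wfD(1)[OF wf])
  then show "deg_prob_prod p ?K = (\<Prod>j\<in>copy_indices rs. deg_prob_prod p (Hs ! fst j))" by (simp add: split_def)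
  show "mg_deg ?K ` verts ?K = (\<Union>j\<in>copy_indices rs. mg_deg (Hs ! fst j) ` verts (Hs ! fst j))"
    unfolding mg_deg_image_mg_union by (simp add: split_def)
qed

lemma Exp_factorial_moment_exact:
  fixes Hs :: "('v, 'h) mgraph list"
  assumes len: "length rs = length Hs"
    and wfH: "\<And>H. H \<in> set Hs \<Longrightarrow> mg_wf H"
    and connH: "\<And>H. H \<in> set Hs \<Longrightarrow> mg_connected H"
    and noniso: "\<And>i j. i < length Hs \<Longrightarrow> j < length Hs \<Longrightarrow> i \<noteq> j \<Longrightarrow> \<not> mg_iso (Hs ! i) (Hs ! j)"
    and ev: "even (\<Sum>i<n. d n i)"
    and S: "finite S" and Ssup: "\<And>H. H \<in> set Hs \<Longrightarrow> mg_deg H ` verts H \<subseteq> S"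
  shows "Exp d n (\<lambda>m. \<Prod>i<length Hs. ffall (real (Ycount (Hs ! i) d n m)) (rs ! i))
    = (\<Prod>j\<in>copy_indices rs. deg_fact_prod (Hs ! fst j)) *
      copy_weight d n S (\<lambda>k. \<Sum>j\<in>copy_indices rs. mg_nk (Hs ! fst j) k) (\<Sum>j\<in>copy_indices rs. mg_e (Hs ! fst j))
      / real (\<Prod>j\<in>copy_indices rs. mg_aut (Hs ! fst j))"
proof -
  let ?K = "mg_union (copy_indices rs) (\<lambda>(i, t). Hs ! i)"
  have "\<forall>H\<in>set Hs. mg_wf H" using wfH by blast
  note K = mg_union_copies[OF len this]
  have "mg_deg (Hs ! fst j) ` verts (Hs ! fst j) \<subseteq> S" if "j \<in> copy_indices rs" for j
    using that len by (intro Ssup nth_mem) (auto simp: copy_indices_def)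
  then have degK: "mg_deg ?K ` verts ?K \<subseteq> S" unfolding K(7) by (rule UN_least)
  have "Exp d n (\<lambda>m. \<Prod>i<length Hs. ffall (real (Ycount (Hs ! i) d n m)) (rs ! i))
     = Exp d n (\<lambda>m. real (card (embeddings ?K d n m))) / real (\<Prod>j\<in>copy_indices rs. mg_aut (Hs ! fst j))"
    by (rule Exp_factorial_moment_embeddings[where d = d and n = n, OF len wfH connH noniso ev])
  also have "Exp d n (\<lambda>m. real (card (embeddings ?K d n m)))
      = deg_fact_prod ?K * copy_weight d n (mg_deg ?K ` verts ?K) (mg_nk ?K) (mg_e ?K)"
    by (rule Exp_card_embeddings_eq_copy_weight[where d = d and n = n, OF K(1) ev])
  also have "copy_weight d n (mg_deg ?K ` verts ?K) (mg_nk ?K) (mg_e ?K) = copy_weight d n S (mg_nk ?K) (mg_e ?K)"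
    by (rule copy_weight_degree_superset[OF S degK])
  finally show ?thesis unfolding K(2,4,5) .
qed

lemma copy_indices_1: "copy_indices [Suc 0] = {(0, 0)}" by (auto simp: copy_indices_def)

lemma copy_indices_1_1: "copy_indices [Suc 0, Suc 0] = {(0, 0), (Suc 0, 0)}" by (auto simp: copy_indices_def less_Suc_eq nth_Cons')

lemma copy_indices_2: "copy_indices [2] = {(0, 0), (0, Suc 0)}" by (auto simp: copy_indices_def less_Suc_eq numeral_2_eq_2)

lemma Exp_Ycount_exact:
  assumes wf: "mg_wf H" and conn: "mg_connected H" and ev: "even (\<Sum>i<n. d n i)"
    and S: "finite S" and Ssup: "mg_deg H ` verts H \<subseteq> S"
  shows "Exp d n (\<lambda>m. real (Ycount H d n m)) = deg_fact_prod H * copy_weight d n S (mg_nk H) (mg_e H) / real (mg_aut H)"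
proof -
  have "Exp d n (\<lambda>m. \<Prod>i<length [H]. ffall (real (Ycount ([H] ! i) d n m)) ([1] ! i))
    = (\<Prod>j\<in>copy_indices [1]. deg_fact_prod ([H] ! fst j)) *
      copy_weight d n S (\<lambda>k. \<Sum>j\<in>copy_indices [1]. mg_nk ([H] ! fst j) k) (\<Sum>j\<in>copy_indices [1]. mg_e ([H] ! fst j))
      / real (\<Prod>j\<in>copy_indices [1]. mg_aut ([H] ! fst j))"
    by (rule Exp_factorial_moment_exact[where d = d and n = n, OF _ _ _ _ ev S]) (use wf conn Ssup in auto)
  then show ?thesis by (simp add: copy_indices_1)
qed

lemma Exp_Ycount_product_exact_same_type:
  fixes H1 H2 :: "('v, 'h) mgraph"
  assumes wf1: "mg_wf H1" and conn1: "mg_connected H1" and wf2: "mg_wf H2" and conn2: "mg_connected H2"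
    and ni: "\<not> mg_iso H1 H2" "\<not> mg_iso H2 H1" and ev: "even (\<Sum>i<n. d n i)"
    and S: "finite S" and Ssup: "mg_deg H1 ` verts H1 \<subseteq> S" "mg_deg H2 ` verts H2 \<subseteq> S"
  shows "Exp d n (\<lambda>m. real (Ycount H1 d n m) * real (Ycount H2 d n m))
     = deg_fact_prod H1 * deg_fact_prod H2 * copy_weight d n S (\<lambda>k. mg_nk H1 k + mg_nk H2 k) (mg_e H1 + mg_e H2) / real (mg_aut H1 * mg_aut H2)"
proof -
  have ni': "\<And>i j. i < length [H1, H2] \<Longrightarrow> j < length [H1, H2] \<Longrightarrow> i \<noteq> j \<Longrightarrow> \<not> mg_iso ([H1, H2] ! i) ([H1, H2] ! j)"
    using ni by (auto simp: less_Suc_eq)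
  have "Exp d n (\<lambda>m. \<Prod>i<length [H1, H2]. ffall (real (Ycount ([H1, H2] ! i) d n m)) ([1, 1] ! i))
    = (\<Prod>j\<in>copy_indices [1, 1]. deg_fact_prod ([H1, H2] ! fst j)) *
      copy_weight d n S (\<lambda>k. \<Sum>j\<in>copy_indices [1, 1]. mg_nk ([H1, H2] ! fst j) k) (\<Sum>j\<in>copy_indices [1, 1]. mg_e ([H1, H2] ! fst j))
      / real (\<Prod>j\<in>copy_indices [1, 1]. mg_aut ([H1, H2] ! fst j))"
    by (rule Exp_factorial_moment_exact[where d = d and n = n, OF _ _ _ ni' ev S]) (use wf1 wf2 conn1 conn2 Ssup in auto)
  then show ?thesis by (simp add: copy_indices_1_1 numeral_2_eq_2 mult_ac)
qed

text \<open>To count pairs of components of two graphs of different types, both are first moved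
into the sum type, where they can be listed together.\<close>

lemma Exp_Ycount_product_exact:
  fixes H1 :: "('c, 'e) mgraph" and H2 :: "('f, 'g) mgraph"
  assumes wf1: "mg_wf H1" and c1: "mg_connected H1" and wf2: "mg_wf H2" and c2: "mg_connected H2"
    and ni: "\<not> mg_iso H1 H2" and ev: "even (\<Sum>i<n. d n i)"
    and S: "finite S" and S1: "mg_deg H1 ` verts H1 \<subseteq> S" and S2: "mg_deg H2 ` verts H2 \<subseteq> S"
  shows "Exp d n (\<lambda>m. real (Ycount H1 d n m) * real (Ycount H2 d n m))
     = deg_fact_prod H1 * deg_fact_prod H2 * copy_weight d n S (\<lambda>k. mg_nk H1 k + mg_nk H2 k) (mg_e H1 + mg_e H2)
       / real (mg_aut H1 * mg_aut H2)"
proof -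
  define H1' :: "('c + 'f, 'e + 'g) mgraph" where "H1' = mg_relabel Inl Inl projl H1"
  define H2' :: "('c + 'f, 'e + 'g) mgraph" where "H2' = mg_relabel Inr Inr projr H2"
  have wf1': "mg_wf H1'" and i1: "(restrict Inl (verts H1), restrict Inl (halfs H1)) \<in> isos H1 H1'"
    unfolding H1'_def by (rule mg_relabel_iso[OF wf1]; simp)+
  have wf2': "mg_wf H2'" and i2: "(restrict Inr (verts H2), restrict Inr (halfs H2)) \<in> isos H2 H2'"
    unfolding H2'_def by (rule mg_relabel_iso[OF wf2]; simp)+
  have iso1: "mg_iso H1 H1'" using i1 mg_iso_iff_isos_ne[OF wf1] by blast
  have iso2: "mg_iso H2 H2'" using i2 mg_iso_iff_isos_ne[OF wf2] by blast
  have ni1: "\<not> mg_iso H1' H2'"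
  proof
    assume "mg_iso H1' H2'"
    then have "mg_iso H1' H2" using mg_iso_trans[OF wf1' _ mg_iso_sym[OF wf2 wf2' iso2]] by blast
    then show False using ni mg_iso_trans[OF wf1 iso1] by blast
  qed
  have "Exp d n (\<lambda>m. real (Ycount H1 d n m) * real (Ycount H2 d n m))
      = Exp d n (\<lambda>m. real (Ycount H1' d n m) * real (Ycount H2' d n m))"
    by (rule Exp_cong[where d = d and n = n, OF ev]) (simp add: Ycount_iso[OF wf1 wf1' iso1] Ycount_iso[OF wf2 wf2' iso2])
  also have "\<dots> = deg_fact_prod H1' * deg_fact_prod H2' * copy_weight d n S (\<lambda>k. mg_nk H1' k + mg_nk H2' k) (mg_e H1' + mg_e H2')
      / real (mg_aut H1' * mg_aut H2')"
    using S1 S2 ni1 mg_iso_sym[OF wf2' wf1'] iso_mg_deg_image[OF wf1 wf1' i1] iso_mg_deg_image[OF wf2 wf2' i2]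
    by (intro Exp_Ycount_product_exact_same_type[where d = d and n = n, OF wf1' _ wf2' _ _ _ ev S])
       (auto intro: iso_mg_connected[OF wf1 wf1' i1 c1] iso_mg_connected[OF wf2 wf2' i2 c2])
  finally have exp_eq: "Exp d n (\<lambda>m. real (Ycount H1 d n m) * real (Ycount H2 d n m))
      = deg_fact_prod H1' * deg_fact_prod H2' * copy_weight d n S (\<lambda>k. mg_nk H1' k + mg_nk H2' k) (mg_e H1' + mg_e H2')
        / real (mg_aut H1' * mg_aut H2')" .
  have "deg_fact_prod H1' = deg_fact_prod H1" "deg_fact_prod H2' = deg_fact_prod H2"
    unfolding deg_fact_prod_def by (rule iso_prod_mg_deg[OF wf1 wf1' i1] iso_prod_mg_deg[OF wf2 wf2' i2])+
  moreover have "mg_nk H1' = mg_nk H1" "mg_nk H2' = mg_nk H2"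
    using iso_mg_nk[OF wf1 wf1' i1] iso_mg_nk[OF wf2 wf2' i2] by auto
  moreover have "mg_aut H1' = mg_aut H1" "mg_aut H2' = mg_aut H2"
    using mg_aut_eq_if_iso[OF wf1 wf1' iso1] mg_aut_eq_if_iso[OF wf2 wf2' iso2] by simp_all
  ultimately show ?thesis
    unfolding exp_eq iso_mg_e[OF wf1 wf1' i1] iso_mg_e[OF wf2 wf2' i2] by simp
qed

lemma Exp_Ycount_ffall_2_exact:
  assumes wf: "mg_wf H" and conn: "mg_connected H" and ev: "even (\<Sum>i<n. d n i)"
    and S: "finite S" and Ssup: "mg_deg H ` verts H \<subseteq> S"
  shows "Exp d n (\<lambda>m. ffall (real (Ycount H d n m)) 2)
     = deg_fact_prod H * deg_fact_prod H * copy_weight d n S (\<lambda>k. mg_nk H k + mg_nk H k) (mg_e H + mg_e H) / real (mg_aut H * mg_aut H)"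
proof -
  have "Exp d n (\<lambda>m. \<Prod>i<length [H]. ffall (real (Ycount ([H] ! i) d n m)) ([2] ! i))
    = (\<Prod>j\<in>copy_indices [2]. deg_fact_prod ([H] ! fst j)) *
      copy_weight d n S (\<lambda>k. \<Sum>j\<in>copy_indices [2]. mg_nk ([H] ! fst j) k) (\<Sum>j\<in>copy_indices [2]. mg_e ([H] ! fst j))
      / real (\<Prod>j\<in>copy_indices [2]. mg_aut ([H] ! fst j))"
    by (rule Exp_factorial_moment_exact[where d = d and n = n, OF _ _ _ _ ev S]) (use wf conn Ssup in auto)
  then show ?thesis by (simp add: copy_indices_2)
qed

lemma Exp_Ycount_product_iso_exact:
  assumes wf1: "mg_wf H1" and c1: "mg_connected H1" and wf2: "mg_wf H2" and iso: "mg_iso H1 H2"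
    and ev: "even (\<Sum>i<n. d n i)" and S: "finite S" and S1: "mg_deg H1 ` verts H1 \<subseteq> S"
  shows "Exp d n (\<lambda>m. real (Ycount H1 d n m) * real (Ycount H2 d n m))
     = deg_fact_prod H1 * deg_fact_prod H1 * copy_weight d n S (\<lambda>k. mg_nk H1 k + mg_nk H1 k) (mg_e H1 + mg_e H1)
       / real (mg_aut H1 * mg_aut H1) + Exp d n (\<lambda>m. real (Ycount H1 d n m))"
proof -
  have "Exp d n (\<lambda>m. real (Ycount H1 d n m) * real (Ycount H2 d n m))
      = Exp d n (\<lambda>m. ffall (real (Ycount H1 d n m)) 2 + real (Ycount H1 d n m))"
    by (rule Exp_cong[where d = d and n = n, OF ev]) (simp add: Ycount_iso[OF wf1 wf2 iso] ffall_2)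
  also have "\<dots> = Exp d n (\<lambda>m. ffall (real (Ycount H1 d n m)) 2) + Exp d n (\<lambda>m. real (Ycount H1 d n m))"
    by (rule Exp_add[where d = d and n = n, OF ev])
  finally show ?thesis
    unfolding Exp_Ycount_ffall_2_exact[where d = d and n = n, OF wf1 c1 ev S S1] .
qed

section \<open>Asymptotics\<close>

lemma smallo_of_tendsto_div:
  assumes "(\<lambda>n. f n / real n) \<longlonglongrightarrow> c"
  shows "(\<lambda>n. f n - real n * c) \<in> o(\<lambda>n. real n)"
proof (rule smalloI_tendsto)
  have "(\<lambda>n. f n / real n - c) \<longlonglongrightarrow> 0"
    using tendsto_diff[OF assms tendsto_const[of c]] by simp
  moreover have "eventually (\<lambda>n. f n / real n - c = (f n - real n * c) / real n) sequentially"
    using eventually_gt_at_top[of 0] by eventually_elim (simp add: field_simps)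
  ultimately show "(\<lambda>n. (f n - real n * c) / real n) \<longlonglongrightarrow> 0"
    by (rule Lim_transform_eventually)
  show "eventually (\<lambda>n. real n \<noteq> 0) sequentially"
    using eventually_gt_at_top[of 0] by eventually_elim simp
qed

lemma prod_lessThan_add: "(\<Prod>i<a + b. h i) = (\<Prod>i<a. h i) * (\<Prod>i<b. h (a + i))"
  for h :: "nat \<Rightarrow> 'a::comm_monoid_mult"
  by (induction b) (simp_all add: prod.lessThan_Suc mult_ac)

lemma sum_lessThan_add: "(\<Sum>i<a + b. h i) = (\<Sum>i<a. h i) + (\<Sum>i<b. h (a + i))"
  for h :: "nat \<Rightarrow> 'a::comm_monoid_add"
  by (induction b) (simp_all add: sum.lessThan_Suc add_ac)

lemma tendsto_scaled_prod_diff: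
  fixes f g :: "'i \<Rightarrow> nat \<Rightarrow> real"
  assumes "finite I"
    and "\<And>i. i \<in> I \<Longrightarrow> f i \<longlonglongrightarrow> L i" "\<And>i. i \<in> I \<Longrightarrow> g i \<longlonglongrightarrow> L i"
    and "\<And>i. i \<in> I \<Longrightarrow> (\<lambda>n. real n * (f i n - g i n)) \<longlonglongrightarrow> D i"
  shows "(\<lambda>n. real n * ((\<Prod>i\<in>I. f i n) - (\<Prod>i\<in>I. g i n))) \<longlonglongrightarrow> (\<Sum>i\<in>I. D i * (\<Prod>j\<in>I - {i}. L j))"
  using assms
proof (induction I rule: finite_induct)
  case empty then show ?case by simp
next
  case (insert a I)
  have eq: "real n * ((\<Prod>i\<in>insert a I. f i n) - (\<Prod>i\<in>insert a I. g i n))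
     = (real n * (f a n - g a n)) * (\<Prod>i\<in>I. f i n) + g a n * (real n * ((\<Prod>i\<in>I. f i n) - (\<Prod>i\<in>I. g i n)))" for n
    using insert.hyps by (simp add: algebra_simps)
  have lim: "(\<lambda>n. (real n * (f a n - g a n)) * (\<Prod>i\<in>I. f i n) + g a n * (real n * ((\<Prod>i\<in>I. f i n) - (\<Prod>i\<in>I. g i n))))
      \<longlonglongrightarrow> D a * (\<Prod>i\<in>I. L i) + L a * (\<Sum>i\<in>I. D i * (\<Prod>j\<in>I - {i}. L j))"
    by (intro tendsto_intros insert.IH insert.prems) auto
  have "(\<Sum>i\<in>insert a I. D i * (\<Prod>j\<in>insert a I - {i}. L j))
      = D a * (\<Prod>i\<in>I. L i) + (\<Sum>i\<in>I. D i * (\<Prod>j\<in>insert a I - {i}. L j))"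
    using insert.hyps by (simp add: sum.insert)
  also have "(\<Sum>i\<in>I. D i * (\<Prod>j\<in>insert a I - {i}. L j)) = L a * (\<Sum>i\<in>I. D i * (\<Prod>j\<in>I - {i}. L j))"
  proof -
    have "(\<Prod>j\<in>insert a I - {i}. L j) = L a * (\<Prod>j\<in>I - {i}. L j)" if "i \<in> I" for i
    proof -
      have "insert a I - {i} = insert a (I - {i})" using that insert.hyps by auto
      then show ?thesis using insert.hyps by simp
    qed
    then show ?thesis by (simp add: sum_distrib_left mult_ac)
  qed
  finally show ?case unfolding eq using lim by simp
qed

definition vertex_factor :: "(nat \<Rightarrow> nat \<Rightarrow> nat) \<Rightarrow> nat \<Rightarrow> nat set \<Rightarrow> (nat \<Rightarrow> nat) \<Rightarrow> real" where
  "vertex_factor d n S N = (\<Prod>k\<in>S. \<Prod>i<N k. real (nk d n k) / real n - real i / real n)"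

definition edge_factor :: "(nat \<Rightarrow> nat \<Rightarrow> nat) \<Rightarrow> nat \<Rightarrow> nat \<Rightarrow> real" where
  "edge_factor d n e = (\<Prod>i<e. 1 / (real (total_degree d n) / real n - (1 + 2 * real i) / real n))"

lemma copy_weight_eq_factors:
  assumes S: "finite S" and n: "n > 0" and ev: "even (total_degree d n)" and Me: "2 * e < total_degree d n"
  shows "copy_weight d n S N e * real n ^ e / real n ^ (\<Sum>k\<in>S. N k) = vertex_factor d n S N * edge_factor d n e"
proof -
  let ?M = "total_degree d n"
  have FFpos: "real (num_pairings (?M - 2 * e)) > 0" using num_pairings_even_pos[of "?M - 2 * e"] ev Me by simp
  have st: "real (num_pairings ?M) = real (num_pairings (?M - 2 * e)) * (\<Prod>i<e. real ?M - 1 - 2 * real i)"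
    using num_pairings_unfold[OF ev] Me by simp
  have pos: "real ?M - 1 - 2 * real i > 0" if "i < e" for i using that Me by linarith
  have "real (num_pairings (?M - 2 * e)) / real (num_pairings ?M) * real n ^ e = (\<Prod>i<e. real n / (real ?M - 1 - 2 * real i))"
    using FFpos pos by (simp add: st prod_dividef)
  also have "\<dots> = edge_factor d n e"
    unfolding edge_factor_def using n by (intro prod.cong refl) (simp add: field_simps)
  finally have E: "real (num_pairings (?M - 2 * e)) / real (num_pairings ?M) * real n ^ e = edge_factor d n e" .
  have "(\<Prod>k\<in>S. ffall (real (nk d n k)) (N k)) / real n ^ (\<Sum>k\<in>S. N k)
      = (\<Prod>k\<in>S. ffall (real (nk d n k)) (N k) / real n ^ N k)"
    by (simp add: power_sum prod_dividef)
  also have "\<dots> = vertex_factor d n S N"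
    unfolding vertex_factor_def ffall_def
  proof (intro prod.cong refl)
    fix k
    have "(\<Prod>i<N k. (real (nk d n k) - real i) / real n) = (\<Prod>i<N k. real (nk d n k) - real i) / real n ^ N k"
      by (simp add: prod_dividef)
    then show "(\<Prod>i<N k. real (nk d n k) - real i) / real n ^ N k =
        (\<Prod>i<N k. real (nk d n k) / real n - real i / real n)"
      by (simp add: diff_divide_distrib)
  qed
  finally have V: "(\<Prod>k\<in>S. ffall (real (nk d n k)) (N k)) / real n ^ (\<Sum>k\<in>S. N k) = vertex_factor d n S N" .
  have "copy_weight d n S N e * real n ^ e / real n ^ (\<Sum>k\<in>S. N k)
     = ((\<Prod>k\<in>S. ffall (real (nk d n k)) (N k)) / real n ^ (\<Sum>k\<in>S. N k)) *
       (real (num_pairings (?M - 2 * e)) / real (num_pairings ?M) * real n ^ e)"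
    unfolding copy_weight_def by (simp add: mult_ac divide_inverse)
  then show ?thesis unfolding V E by simp
qed

lemma index_shift_weight_sum_fibre:
  fixes N1 N2 :: "nat \<Rightarrow> nat" and p :: "nat \<Rightarrow> real"
  assumes S: "finite S" and k: "k \<in> S"
  defines "I \<equiv> SIGMA k:S. {..<N1 k + N2 k}"
    and "D \<equiv> \<lambda>(k, i). real (if i < N1 k then i else i - N1 k) - real i"
  shows "(\<Sum>i<N1 k + N2 k. D (k, i) * (\<Prod>(k', i')\<in>I - {(k, i)}. p k'))
      = - (real (N1 k) * real (N2 k)) * (\<Prod>(k', i')\<in>I. p k') / p k"
proof -
  have fI: "finite I" unfolding I_def using S by auto
  have sumD: "(\<Sum>i<N1 k + N2 k. D (k, i)) = - (real (N1 k) * real (N2 k))"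
    by (simp add: sum_lessThan_add D_def)
  show ?thesis
  proof (cases "p k = 0")
    case False
    have "(\<Prod>(k', i')\<in>I - {(k, i)}. p k') = (\<Prod>(k', i')\<in>I. p k') / p k" if i: "i < N1 k + N2 k" for i
    proof -
      have "(k, i) \<in> I" using k i by (simp add: I_def)
      then show ?thesis using False by (simp add: prod.remove[OF fI])
    qed
    then have "(\<Sum>i<N1 k + N2 k. D (k, i) * (\<Prod>(k', i')\<in>I - {(k, i)}. p k'))
        = (\<Sum>i<N1 k + N2 k. D (k, i) * ((\<Prod>(k', i')\<in>I. p k') / p k))"
      by (intro sum.cong) auto
    also have "\<dots> = (\<Sum>i<N1 k + N2 k. D (k, i)) * ((\<Prod>(k', i')\<in>I. p k') / p k)"
      by (rule sum_distrib_right[symmetric])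
    finally show ?thesis using sumD by simp
  next
    case True
    \<comment> \<open>Either \<open>D\<close> vanishes on the fibre, or the fibre has a second point, whose factor
      \<open>p k = 0\<close> survives in every product.\<close>
    have "D (k, i) * (\<Prod>(k', i')\<in>I - {(k, i)}. p k') = 0" if i: "i < N1 k + N2 k" for i
    proof (cases "N1 k = 0 \<or> N2 k = 0")
      case True
      then show ?thesis using i by (auto simp: D_def)
    next
      case False
      then obtain i' where i': "i' < N1 k + N2 k" "i' \<noteq> i"
        by (metis add_gr_0 bot_nat_0.not_eq_extremum less_add_same_cancel1 less_numeral_extra(1) not_less_iff_gr_or_eq)
      then have "(k, i') \<in> I - {(k, i)}" using k by (simp add: I_def)
      then have "(\<Prod>(k', i')\<in>I - {(k, i)}. p k') = 0" using fI \<open>p k = 0\<close> by (intro prod_zero) force+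
      then show ?thesis by simp
    qed
    then have "(\<Sum>i<N1 k + N2 k. D (k, i) * (\<Prod>(k', i')\<in>I - {(k, i)}. p k')) = 0"
      by (intro sum.neutral) auto
    then show ?thesis using True by simp
  qed
qed

lemma index_shift_weight_sum:
  fixes N1 N2 :: "nat \<Rightarrow> nat" and p :: "nat \<Rightarrow> real"
  assumes S: "finite S"
  defines "I \<equiv> SIGMA k:S. {..<N1 k + N2 k}"
  shows "(\<Sum>x\<in>I. (\<lambda>(k, i). real (if i < N1 k then i else i - N1 k) - real i) x * (\<Prod>y\<in>I - {x}. (\<lambda>(k, i). p k) y))
      = - (\<Prod>k\<in>S. p k ^ (N1 k + N2 k)) * (\<Sum>k\<in>S. real (N1 k) * real (N2 k) / p k)"
proof -
  have "(\<Prod>(k', i')\<in>I. p k') = (\<Prod>k\<in>S. \<Prod>i<N1 k + N2 k. p k)"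
    unfolding I_def by (rule prod.Sigma[symmetric]) (use S in auto)
  then have prod_I: "(\<Prod>(k', i')\<in>I. p k') = (\<Prod>k\<in>S. p k ^ (N1 k + N2 k))" by simp
  have "(\<Sum>x\<in>I. (\<lambda>(k, i). real (if i < N1 k then i else i - N1 k) - real i) x * (\<Prod>y\<in>I - {x}. (\<lambda>(k, i). p k) y))
      = (\<Sum>(k, i)\<in>I. (real (if i < N1 k then i else i - N1 k) - real i) * (\<Prod>(k', i')\<in>I - {(k, i)}. p k'))"
    by (rule sum.cong) (auto simp: split_def)
  also have "\<dots> = (\<Sum>k\<in>S. \<Sum>i<N1 k + N2 k. (real (if i < N1 k then i else i - N1 k) - real i) *
           (\<Prod>(k', i')\<in>I - {(k, i)}. p k'))"
    unfolding I_def by (rule sum.Sigma[symmetric]) (use S in auto)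
  also have "\<dots> = (\<Sum>k\<in>S. - (real (N1 k) * real (N2 k)) * (\<Prod>(k', i')\<in>I. p k') / p k)"
  proof (rule sum.cong[OF refl])
    fix k assume "k \<in> S"
    from index_shift_weight_sum_fibre[OF S this]
    show "(\<Sum>i<N1 k + N2 k. (real (if i < N1 k then i else i - N1 k) - real i) * (\<Prod>(k', i')\<in>I - {(k, i)}. p k'))
        = - (real (N1 k) * real (N2 k)) * (\<Prod>(k', i')\<in>I. p k') / p k"
      unfolding I_def by simp
  qed
  finally show ?thesis
    unfolding prod_I by (simp add: sum_distrib_left sum_negf field_simps)
qed

locale degree_asymptotics =
  fixes d :: "nat \<Rightarrow> nat \<Rightarrow> nat" and p :: "nat \<Rightarrow> real" and \<mu> :: real
  assumes even_sum: "\<And>n. n \<ge> 1 \<Longrightarrow> even (\<Sum>i<n. d n i)"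
    and A1_lim: "\<And>k. (\<lambda>n. real (nk d n k) / real n) \<longlonglongrightarrow> p k"
    and mu_pos: "\<mu> > 0"
    and A2: "(\<lambda>n. (\<Sum>i<n. real (d n i)) / real n) \<longlonglongrightarrow> \<mu>"
begin

lemma total_degree_tendsto: "(\<lambda>n. real (total_degree d n) / real n) \<longlonglongrightarrow> \<mu>"
  using A2 by (simp add: total_degree_def)

lemma eventually_total_degree_large: "eventually (\<lambda>n. n > 0 \<and> even (total_degree d n) \<and> 2 * e < total_degree d n) sequentially"
proof -
  have "eventually (\<lambda>n. real (total_degree d n) / real n > \<mu> / 2) sequentially"
    using total_degree_tendsto mu_pos by (intro order_tendstoD(1)) auto
  moreover have "eventually (\<lambda>n. real n > 2 * (2 * real e + 1) / \<mu>) sequentially"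
    by (rule filterlim_real_sequentially[THEN filterlim_at_top_dense[THEN iffD1], rule_format])
  moreover have "eventually (\<lambda>n. n \<ge> 1) sequentially" by (rule eventually_ge_at_top)
  ultimately show ?thesis
  proof eventually_elim
    case (elim n)
    have n0: "real n > 0" using elim(3) by simp
    have "real (total_degree d n) > \<mu> / 2 * real n" using elim(1) n0 by (simp add: field_simps)
    moreover have "\<mu> / 2 * real n > 2 * real e + 1"
      using elim(2) mu_pos by (simp add: field_simps)
    ultimately have "real (2 * e) < real (total_degree d n)" by simp
    then have "2 * e < total_degree d n" by (simp only: of_nat_less_iff)
    then show ?case using elim(3) even_sum[OF elim(3)] by (simp add: total_degree_def)
  qed
qed

lemma tendsto_const_over_n: "(\<lambda>n. c / real n) \<longlonglongrightarrow> 0"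
  by (rule tendsto_divide_0[OF tendsto_const filterlim_real_sequentially[THEN filterlim_at_top_imp_at_infinity]])

lemma vertex_factor_tendsto: "finite S \<Longrightarrow> (\<lambda>n. vertex_factor d n S N) \<longlonglongrightarrow> (\<Prod>k\<in>S. p k ^ N k)"
  unfolding vertex_factor_def
proof -
  assume "finite S"
  have "(\<lambda>n. \<Prod>k\<in>S. \<Prod>i<N k. real (nk d n k) / real n - real i / real n) \<longlonglongrightarrow> (\<Prod>k\<in>S. \<Prod>i<N k. p k - 0)"
    by (intro tendsto_prod tendsto_diff A1_lim tendsto_const_over_n)
  then show "(\<lambda>n. \<Prod>k\<in>S. \<Prod>i<N k. real (nk d n k) / real n - real i / real n) \<longlonglongrightarrow> (\<Prod>k\<in>S. p k ^ N k)"
    by simp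
qed

lemma edge_factor_term_tendsto: "(\<lambda>n. 1 / (real (total_degree d n) / real n - c / real n)) \<longlonglongrightarrow> 1 / \<mu>"
proof -
  have "(\<lambda>n. 1 / (real (total_degree d n) / real n - c / real n)) \<longlonglongrightarrow> 1 / (\<mu> - 0)"
    using mu_pos by (intro tendsto_intros total_degree_tendsto tendsto_const_over_n) auto
  then show ?thesis by simp
qed

lemma edge_factor_tendsto: "(\<lambda>n. edge_factor d n e) \<longlonglongrightarrow> (1 / \<mu>) ^ e"
proof -
  have "(\<lambda>n. edge_factor d n e) \<longlonglongrightarrow> (\<Prod>i<e. 1 / \<mu>)"
    unfolding edge_factor_def by (intro tendsto_prod edge_factor_term_tendsto)
  then show ?thesis by simp
qed

lemma copy_weight_tendsto:
  assumes S: "finite S"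
  shows "(\<lambda>n. copy_weight d n S N e * real n ^ e / real n ^ (\<Sum>k\<in>S. N k)) \<longlonglongrightarrow> (\<Prod>k\<in>S. p k ^ N k) * (1 / \<mu>) ^ e"
proof -
  have "(\<lambda>n. vertex_factor d n S N * edge_factor d n e) \<longlonglongrightarrow> (\<Prod>k\<in>S. p k ^ N k) * (1 / \<mu>) ^ e"
    by (intro tendsto_mult vertex_factor_tendsto edge_factor_tendsto S)
  moreover have "eventually (\<lambda>n. vertex_factor d n S N * edge_factor d n e = copy_weight d n S N e * real n ^ e / real n ^ (\<Sum>k\<in>S. N k)) sequentially"
    using eventually_total_degree_large[of e] by eventually_elim (use copy_weight_eq_factors[OF S] in auto)
  ultimately show ?thesis by (rule Lim_transform_eventually)
qed

lemma vertex_factor_second_order: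
  fixes N1 N2 :: "nat \<Rightarrow> nat"
  assumes S: "finite S"
  shows "(\<lambda>n. real n * (vertex_factor d n S (\<lambda>k. N1 k + N2 k) - vertex_factor d n S N1 * vertex_factor d n S N2))
     \<longlonglongrightarrow> - (\<Prod>k\<in>S. p k ^ (N1 k + N2 k)) * (\<Sum>k\<in>S. real (N1 k) * real (N2 k) / p k)"
proof -
  define I where "I = (SIGMA k:S. {..<N1 k + N2 k})"
  define f where "f = (\<lambda>(k, i) n. real (nk d n k) / real n - real i / real n)"
  define g where "g = (\<lambda>(k, i) n. real (nk d n k) / real n - real (if i < N1 k then i else i - N1 k) / real n)"
  have fI: "finite I" unfolding I_def using S by auto
  have a1: "vertex_factor d n S (\<lambda>k. N1 k + N2 k) = (\<Prod>x\<in>I. f x n)" for n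
  proof -
    have "(\<Prod>x\<in>I. f x n) = (\<Prod>(k, i)\<in>I. real (nk d n k) / real n - real i / real n)"
      by (rule prod.cong) (auto simp: f_def)
    also have "\<dots> = vertex_factor d n S (\<lambda>k. N1 k + N2 k)"
      unfolding vertex_factor_def I_def by (rule prod.Sigma[symmetric]) (use S in auto)
    finally show ?thesis by simp
  qed
  have b1: "vertex_factor d n S N1 * vertex_factor d n S N2 = (\<Prod>x\<in>I. g x n)" for n
  proof -
    have "(\<Prod>x\<in>I. g x n) = (\<Prod>(k, i)\<in>I. g (k, i) n)"
      by (rule prod.cong) auto
    also have "\<dots> = (\<Prod>k\<in>S. \<Prod>i<N1 k + N2 k. g (k, i) n)"
      unfolding I_def by (rule prod.Sigma[symmetric]) (use S in auto)
    also have "\<dots> = (\<Prod>k\<in>S. (\<Prod>i<N1 k. real (nk d n k) / real n - real i / real n) *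
                              (\<Prod>i<N2 k. real (nk d n k) / real n - real i / real n))"
      by (intro prod.cong refl) (simp add: prod_lessThan_add g_def)
    finally show ?thesis unfolding vertex_factor_def by (simp add: prod.distrib)
  qed
  have limf: "f x \<longlonglongrightarrow> (\<lambda>(k, i). p k) x" and limg: "g x \<longlonglongrightarrow> (\<lambda>(k, i). p k) x" for x
    unfolding f_def g_def using tendsto_diff[OF A1_lim tendsto_const_over_n] by (auto split: prod.splits)
  have limD: "(\<lambda>n. real n * (f x n - g x n)) \<longlonglongrightarrow> (\<lambda>(k, i). real (if i < N1 k then i else i - N1 k) - real i) x" for x
  proof -
    have "eventually (\<lambda>n. (\<lambda>(k, i). real (if i < N1 k then i else i - N1 k) - real i) x = real n * (f x n - g x n)) sequentially"
      using eventually_gt_at_top[of 0]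
      by eventually_elim (simp add: f_def g_def field_simps split: prod.splits)
    then show ?thesis by (rule Lim_transform_eventually[OF tendsto_const])
  qed
  have "(\<lambda>n. real n * ((\<Prod>x\<in>I. f x n) - (\<Prod>x\<in>I. g x n))) \<longlonglongrightarrow>
      (\<Sum>x\<in>I. (\<lambda>(k, i). real (if i < N1 k then i else i - N1 k) - real i) x * (\<Prod>y\<in>I - {x}. (\<lambda>(k, i). p k) y))"
    by (rule tendsto_scaled_prod_diff[OF fI limf limg limD])
  then show ?thesis
    unfolding a1 b1 I_def index_shift_weight_sum[OF S] .
qed

lemma edge_factor_term_diff_tendsto:
  "(\<lambda>n. real n * (1 / (real (total_degree d n) / real n - c1 / real n)
                   - 1 / (real (total_degree d n) / real n - c2 / real n)))
     \<longlonglongrightarrow> (c1 - c2) / \<mu>\<^sup>2"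
proof -
  let ?den = "\<lambda>c n. real (total_degree d n) / real n - c / real n"
  have lim: "(\<lambda>n. (c1 - c2) / (?den c1 n * ?den c2 n)) \<longlonglongrightarrow> (c1 - c2) / ((\<mu> - 0) * (\<mu> - 0))"
    using mu_pos by (intro tendsto_intros total_degree_tendsto tendsto_const_over_n) auto
  have pos: "eventually (\<lambda>n. ?den c n > 0) sequentially" for c
    using mu_pos by (intro order_tendstoD(1)[of _ "\<mu> - 0"] tendsto_intros total_degree_tendsto tendsto_const_over_n) auto
  have "eventually (\<lambda>n. (c1 - c2) / (?den c1 n * ?den c2 n) = real n * (1 / ?den c1 n - 1 / ?den c2 n)) sequentially"
    using pos[of c1] pos[of c2] eventually_gt_at_top[of 0] by eventually_elim (simp add: field_simps)
  from Lim_transform_eventually[OF lim this] show ?thesis by (simp add: power2_eq_square)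
qed

lemma edge_factor_second_order:
  "(\<lambda>n. real n * (edge_factor d n (e1 + e2) - edge_factor d n e1 * edge_factor d n e2))
     \<longlonglongrightarrow> 2 * real e1 * real e2 / \<mu> * (1 / \<mu>) ^ (e1 + e2)"
proof -
  define t where "t = (\<lambda>i. if i < e1 then i else i - e1)"
  define r where "r = (\<lambda>c n. 1 / (real (total_degree d n) / real n - c / real n))"
  define D where "D = (\<lambda>i. 2 * (real i - real (t i)) / \<mu>\<^sup>2)"
  have a2: "edge_factor d n (e1 + e2) = (\<Prod>i<e1 + e2. r (1 + 2 * real i) n)" for n
    unfolding edge_factor_def r_def by simp
  have b2: "edge_factor d n e1 * edge_factor d n e2 = (\<Prod>i<e1 + e2. r (1 + 2 * real (t i)) n)" for n
    unfolding edge_factor_def r_def t_def by (simp add: prod_lessThan_add)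
  have limD: "(\<lambda>n. real n * (r (1 + 2 * real i) n - r (1 + 2 * real (t i)) n)) \<longlonglongrightarrow> D i" for i
    using edge_factor_term_diff_tendsto[of "1 + 2 * real i" "1 + 2 * real (t i)"]
    unfolding r_def D_def by (simp add: algebra_simps)
  have "(\<lambda>n. real n * ((\<Prod>i<e1 + e2. r (1 + 2 * real i) n) - (\<Prod>i<e1 + e2. r (1 + 2 * real (t i)) n)))
      \<longlonglongrightarrow> (\<Sum>i<e1 + e2. D i * (\<Prod>j\<in>{..<e1 + e2} - {i}. 1 / \<mu>))"
    by (rule tendsto_scaled_prod_diff) (auto simp: r_def intro: edge_factor_term_tendsto limD[unfolded r_def])
  moreover have "(\<Sum>i<e1 + e2. D i * (\<Prod>j\<in>{..<e1 + e2} - {i}. 1 / \<mu>)) = 2 * real e1 * real e2 / \<mu> * (1 / \<mu>) ^ (e1 + e2)"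
  proof (cases "e1 + e2 = 0")
    case False
    have "(\<Sum>i<e1 + e2. D i * (\<Prod>j\<in>{..<e1 + e2} - {i}. 1 / \<mu>)) = (\<Sum>i<e1 + e2. D i) * (1 / \<mu>) ^ (e1 + e2 - 1)"
      by (simp add: sum_distrib_right)
    also have "(\<Sum>i<e1 + e2. D i) = 2 * real e1 * real e2 / \<mu>\<^sup>2"
      by (simp add: sum_lessThan_add D_def t_def sum_divide_distrib[symmetric])
    also have "(1 / \<mu>) ^ (e1 + e2 - 1) = \<mu> * (1 / \<mu>) ^ (e1 + e2)"
      using False mu_pos by (cases "e1 + e2") simp_all
    finally show ?thesis by (simp add: power2_eq_square)
  qed simp
  ultimately show ?thesis unfolding a2 b2 by simp
qed

lemma copy_weight_second_order:
  assumes S: "finite S"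
  shows "(\<lambda>n. real n * (copy_weight d n S (\<lambda>k. N1 k + N2 k) (e1 + e2) - copy_weight d n S N1 e1 * copy_weight d n S N2 e2)
            * real n ^ (e1 + e2) / real n ^ ((\<Sum>k\<in>S. N1 k) + (\<Sum>k\<in>S. N2 k)))
     \<longlonglongrightarrow> (\<Prod>k\<in>S. p k ^ (N1 k + N2 k)) * (1 / \<mu>) ^ (e1 + e2) *
         (2 * real e1 * real e2 / \<mu> - (\<Sum>k\<in>S. real (N1 k) * real (N2 k) / p k))"
proof -
  let ?a1 = "\<lambda>n. vertex_factor d n S (\<lambda>k. N1 k + N2 k)" and ?b1 = "\<lambda>n. vertex_factor d n S N1 * vertex_factor d n S N2"
  let ?a2 = "\<lambda>n. edge_factor d n (e1 + e2)" and ?b2 = "\<lambda>n. edge_factor d n e1 * edge_factor d n e2"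
  have lim: "(\<lambda>n. (real n * (?a1 n - ?b1 n)) * ?a2 n + ?b1 n * (real n * (?a2 n - ?b2 n)))
     \<longlonglongrightarrow> (- (\<Prod>k\<in>S. p k ^ (N1 k + N2 k)) * (\<Sum>k\<in>S. real (N1 k) * real (N2 k) / p k)) * (1 / \<mu>) ^ (e1 + e2)
        + ((\<Prod>k\<in>S. p k ^ N1 k) * (\<Prod>k\<in>S. p k ^ N2 k)) * (2 * real e1 * real e2 / \<mu> * (1 / \<mu>) ^ (e1 + e2))"
    by (intro tendsto_intros vertex_factor_second_order edge_factor_second_order edge_factor_tendsto vertex_factor_tendsto S)
  have ev: "eventually (\<lambda>n. (real n * (?a1 n - ?b1 n)) * ?a2 n + ?b1 n * (real n * (?a2 n - ?b2 n))
     = real n * (copy_weight d n S (\<lambda>k. N1 k + N2 k) (e1 + e2) - copy_weight d n S N1 e1 * copy_weight d n S N2 e2)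
            * real n ^ (e1 + e2) / real n ^ ((\<Sum>k\<in>S. N1 k) + (\<Sum>k\<in>S. N2 k))) sequentially"
    using eventually_total_degree_large[of "e1 + e2"]
  proof eventually_elim
    case (elim n)
    have n0: "real n \<noteq> 0" using elim by simp
    have h1: "copy_weight d n S (\<lambda>k. N1 k + N2 k) (e1 + e2) * real n ^ (e1 + e2) / real n ^ ((\<Sum>k\<in>S. N1 k) + (\<Sum>k\<in>S. N2 k))
        = ?a1 n * ?a2 n"
      using copy_weight_eq_factors[OF S, of n d "e1 + e2" "\<lambda>k. N1 k + N2 k"] elim by (simp add: sum.distrib)
    have h2: "copy_weight d n S N1 e1 * real n ^ e1 / real n ^ (\<Sum>k\<in>S. N1 k) = vertex_factor d n S N1 * edge_factor d n e1"
      using copy_weight_eq_factors[OF S, of n d e1 N1] elim by simp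
    have h3: "copy_weight d n S N2 e2 * real n ^ e2 / real n ^ (\<Sum>k\<in>S. N2 k) = vertex_factor d n S N2 * edge_factor d n e2"
      using copy_weight_eq_factors[OF S, of n d e2 N2] elim by simp
    have "real n * (copy_weight d n S (\<lambda>k. N1 k + N2 k) (e1 + e2) - copy_weight d n S N1 e1 * copy_weight d n S N2 e2)
            * real n ^ (e1 + e2) / real n ^ ((\<Sum>k\<in>S. N1 k) + (\<Sum>k\<in>S. N2 k))
       = real n * (copy_weight d n S (\<lambda>k. N1 k + N2 k) (e1 + e2) * real n ^ (e1 + e2) / real n ^ ((\<Sum>k\<in>S. N1 k) + (\<Sum>k\<in>S. N2 k))
           - (copy_weight d n S N1 e1 * real n ^ e1 / real n ^ (\<Sum>k\<in>S. N1 k)) * (copy_weight d n S N2 e2 * real n ^ e2 / real n ^ (\<Sum>k\<in>S. N2 k)))"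
      using n0 by (simp add: field_simps power_add)
    also have "\<dots> = real n * (?a1 n * ?a2 n - (vertex_factor d n S N1 * edge_factor d n e1) * (vertex_factor d n S N2 * edge_factor d n e2))"
      unfolding h1 h2 h3 ..
    finally show ?case by (simp add: algebra_simps)
  qed
  have "(- (\<Prod>k\<in>S. p k ^ (N1 k + N2 k)) * (\<Sum>k\<in>S. real (N1 k) * real (N2 k) / p k)) * (1 / \<mu>) ^ (e1 + e2)
        + ((\<Prod>k\<in>S. p k ^ N1 k) * (\<Prod>k\<in>S. p k ^ N2 k)) * (2 * real e1 * real e2 / \<mu> * (1 / \<mu>) ^ (e1 + e2))
      = (\<Prod>k\<in>S. p k ^ (N1 k + N2 k)) * (1 / \<mu>) ^ (e1 + e2) *
         (2 * real e1 * real e2 / \<mu> - (\<Sum>k\<in>S. real (N1 k) * real (N2 k) / p k))"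
    by (simp add: power_add prod.distrib algebra_simps)
  then show ?thesis using Lim_transform_eventually[OF lim ev] by simp
qed

section \<open>Limits of component counts\<close>

lemma Exp_card_embeddings_tendsto:
  assumes wf: "mg_wf K"
  shows "(\<lambda>n. Exp d n (\<lambda>m. real (card (embeddings K d n m))) * real n ^ mg_e K / real n ^ mg_v K)
     \<longlonglongrightarrow> deg_fact_prod K * deg_prob_prod p K * (1 / \<mu>) ^ mg_e K"
proof -
  let ?S = "mg_deg K ` verts K"
  have fV: "finite (verts K)" using mg_wfD[OF wf] by simp
  have lim: "(\<lambda>n. deg_fact_prod K * (copy_weight d n ?S (mg_nk K) (mg_e K) * real n ^ mg_e K / real n ^ (\<Sum>k\<in>?S. mg_nk K k)))
      \<longlonglongrightarrow> deg_fact_prod K * ((\<Prod>k\<in>?S. p k ^ mg_nk K k) * (1 / \<mu>) ^ mg_e K)"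
    using fV by (intro tendsto_mult tendsto_const copy_weight_tendsto) auto
  have ev: "eventually (\<lambda>n. deg_fact_prod K * (copy_weight d n ?S (mg_nk K) (mg_e K) * real n ^ mg_e K / real n ^ (\<Sum>k\<in>?S. mg_nk K k))
      = Exp d n (\<lambda>m. real (card (embeddings K d n m))) * real n ^ mg_e K / real n ^ mg_v K) sequentially"
    using eventually_ge_at_top[of 1]
    by eventually_elim (simp add: Exp_card_embeddings_eq_copy_weight[OF wf even_sum] sum_mg_nk[OF fV])
  show ?thesis using Lim_transform_eventually[OF lim ev] prod_mg_nk[OF fV] by (simp add: mult_ac)
qed

lemma lam_eq: "lam p \<mu> H = deg_fact_prod H * deg_prob_prod p H * (1 / \<mu>) ^ mg_e H / real (mg_aut H)"
  unfolding lam_def deg_fact_prod_def deg_prob_prod_def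
  by (simp add: power_int_minus power_one_over prod.distrib field_simps)

lemma Exp_factorial_moment_scaled_tendsto:
  fixes Hs :: "('v, 'h) mgraph list"
  assumes len: "length rs = length Hs"
    and wfH: "\<And>H. H \<in> set Hs \<Longrightarrow> mg_wf H"
    and connH: "\<And>H. H \<in> set Hs \<Longrightarrow> mg_connected H"
    and noniso: "\<And>i j. i < length Hs \<Longrightarrow> j < length Hs \<Longrightarrow> i \<noteq> j \<Longrightarrow> \<not> mg_iso (Hs ! i) (Hs ! j)"
  defines "eK \<equiv> (\<Sum>j\<in>copy_indices rs. mg_e (Hs ! fst j))" and "vK \<equiv> (\<Sum>j\<in>copy_indices rs. mg_v (Hs ! fst j))"
  shows "(\<lambda>n. Exp d n (\<lambda>m. \<Prod>i<length Hs. ffall (real (Ycount (Hs ! i) d n m)) (rs ! i)) * real n ^ eK / real n ^ vK)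
     \<longlonglongrightarrow> (\<Prod>i<length Hs. lam p \<mu> (Hs ! i) ^ (rs ! i))"
proof -
  let ?K = "mg_union (copy_indices rs) (\<lambda>(i, t). Hs ! i)"
  let ?A = "real (\<Prod>j\<in>copy_indices rs. mg_aut (Hs ! fst j))"
  have "\<forall>H\<in>set Hs. mg_wf H" using wfH by blast
  note K = mg_union_copies[OF len this]
  have "?A > 0"
    using len wfH nth_mem by (auto intro!: prod_pos mg_aut_pos simp: copy_indices_def)
  then have A0: "?A \<noteq> 0" by linarith
  have lim: "(\<lambda>n. Exp d n (\<lambda>m. real (card (embeddings ?K d n m))) * real n ^ eK / real n ^ vK / ?A)
     \<longlonglongrightarrow> deg_fact_prod ?K * deg_prob_prod p ?K * (1 / \<mu>) ^ eK / ?A"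
    unfolding eK_def vK_def
    by (rule tendsto_divide[OF Exp_card_embeddings_tendsto[OF K(1), unfolded K(2,3)] tendsto_const A0])
  have ev: "eventually (\<lambda>n. Exp d n (\<lambda>m. real (card (embeddings ?K d n m))) * real n ^ eK / real n ^ vK / ?A
      = Exp d n (\<lambda>m. \<Prod>i<length Hs. ffall (real (Ycount (Hs ! i) d n m)) (rs ! i)) * real n ^ eK / real n ^ vK) sequentially"
    using eventually_ge_at_top[of 1]
    by eventually_elim (simp add: Exp_factorial_moment_embeddings[OF len wfH connH noniso even_sum])
  have "deg_fact_prod ?K * deg_prob_prod p ?K * (1 / \<mu>) ^ eK / ?A = (\<Prod>j\<in>copy_indices rs. lam p \<mu> (Hs ! fst j))"
    unfolding K(5,6) eK_def by (simp add: lam_eq power_sum prod.distrib prod_dividef)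
  also have "\<dots> = (\<Prod>i<length Hs. \<Prod>t<rs ! i. lam p \<mu> (Hs ! i))"
    unfolding copy_indices_def using len by (subst prod.Sigma) (auto intro: prod.cong)
  finally show ?thesis using Lim_transform_eventually[OF lim ev] by simp
qed

lemma Exp_Ycount_scaled_tendsto:
  assumes wf: "mg_wf H" and conn: "mg_connected H"
  shows "(\<lambda>n. Exp d n (\<lambda>m. real (Ycount H d n m)) * real n ^ mg_e H / real n ^ mg_v H) \<longlonglongrightarrow> lam p \<mu> H"
  using Exp_factorial_moment_scaled_tendsto[of "[1]" "[H]"] wf conn by (simp add: copy_indices_1)

lemma Exp_Ycount_tree_tendsto:
  assumes tr: "mg_tree H"
  shows "(\<lambda>n. Exp d n (\<lambda>m. real (Ycount H d n m)) / real n) \<longlonglongrightarrow> lam p \<mu> H"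
proof -
  have wf: "mg_wf H" and conn: "mg_connected H" and ev: "mg_v H = mg_e H + 1"
    using tr by (auto simp: mg_tree_def)
  have "eventually (\<lambda>n. Exp d n (\<lambda>m. real (Ycount H d n m)) * real n ^ mg_e H / real n ^ mg_v H
      = Exp d n (\<lambda>m. real (Ycount H d n m)) / real n) sequentially"
    using eventually_gt_at_top[of 0] by eventually_elim (simp add: ev)
  from Lim_transform_eventually[OF Exp_Ycount_scaled_tendsto[OF wf conn] this] show ?thesis .
qed

lemma Exp_Ycount_tree:
  assumes "mg_tree H"
  shows "(\<lambda>n. Exp d n (\<lambda>m. real (Ycount H d n m)) - real n * lam p \<mu> H) \<in> o(\<lambda>n. real n)"
  using Exp_Ycount_tree_tendsto[OF assms] by (rule smallo_of_tendsto_div)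

lemma Exp_Ycount_unicyclic_tendsto:
  assumes u: "mg_unicyclic H"
  shows "(\<lambda>n. Exp d n (\<lambda>m. real (Ycount H d n m))) \<longlonglongrightarrow> lam p \<mu> H"
proof -
  have wf: "mg_wf H" and conn: "mg_connected H" and ev: "mg_e H = mg_v H"
    using u by (auto simp: mg_unicyclic_def)
  have "eventually (\<lambda>n. Exp d n (\<lambda>m. real (Ycount H d n m)) * real n ^ mg_e H / real n ^ mg_v H
      = Exp d n (\<lambda>m. real (Ycount H d n m))) sequentially"
    using eventually_gt_at_top[of 0] by eventually_elim (simp add: ev)
  from Lim_transform_eventually[OF Exp_Ycount_scaled_tendsto[OF wf conn] this] show ?thesis .
qed

lemma Exp_factorial_moments_unicyclic_tendsto:
  fixes Hs :: "('v, 'h) mgraph list"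
  assumes len: "length rs = length Hs" and u: "\<forall>H\<in>set Hs. mg_unicyclic H"
    and ni: "\<forall>i<length Hs. \<forall>j<length Hs. i \<noteq> j \<longrightarrow> \<not> mg_iso (Hs ! i) (Hs ! j)"
  shows "(\<lambda>n. Exp d n (\<lambda>m. \<Prod>i<length Hs. ffall (real (Ycount (Hs ! i) d n m)) (rs ! i)))
         \<longlonglongrightarrow> (\<Prod>i<length Hs. lam p \<mu> (Hs ! i) ^ (rs ! i))"
proof -
  have wfH: "\<And>H. H \<in> set Hs \<Longrightarrow> mg_wf H" and connH: "\<And>H. H \<in> set Hs \<Longrightarrow> mg_connected H"
    using u by (auto simp: mg_unicyclic_def)
  have eq: "(\<Sum>j\<in>copy_indices rs. mg_e (Hs ! fst j)) = (\<Sum>j\<in>copy_indices rs. mg_v (Hs ! fst j))"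
  proof (rule sum.cong[OF refl])
    fix j assume "j \<in> copy_indices rs"
    then have "fst j < length Hs" using len by (auto simp: copy_indices_def)
    then have "Hs ! fst j \<in> set Hs" by (rule nth_mem)
    then show "mg_e (Hs ! fst j) = mg_v (Hs ! fst j)" using u by (auto simp: mg_unicyclic_def)
  qed
  have L: "(\<lambda>n. Exp d n (\<lambda>m. \<Prod>i<length Hs. ffall (real (Ycount (Hs ! i) d n m)) (rs ! i))
      * real n ^ (\<Sum>j\<in>copy_indices rs. mg_e (Hs ! fst j)) / real n ^ (\<Sum>j\<in>copy_indices rs. mg_v (Hs ! fst j)))
      \<longlonglongrightarrow> (\<Prod>i<length Hs. lam p \<mu> (Hs ! i) ^ (rs ! i))"
    by (rule Exp_factorial_moment_scaled_tendsto[OF len wfH connH]) (use ni in auto)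
  have "eventually (\<lambda>n. Exp d n (\<lambda>m. \<Prod>i<length Hs. ffall (real (Ycount (Hs ! i) d n m)) (rs ! i))
      * real n ^ (\<Sum>j\<in>copy_indices rs. mg_e (Hs ! fst j)) / real n ^ (\<Sum>j\<in>copy_indices rs. mg_v (Hs ! fst j))
      = Exp d n (\<lambda>m. \<Prod>i<length Hs. ffall (real (Ycount (Hs ! i) d n m)) (rs ! i))) sequentially"
    using eventually_gt_at_top[of 0] by eventually_elim (simp add: eq)
  from Lim_transform_eventually[OF L this] show ?thesis .
qed

lemma Exp_Ycount_tendsto_0:
  assumes wf: "mg_wf H" and conn: "mg_connected H" and gt: "mg_e H > mg_v H"
  shows "(\<lambda>n. Exp d n (\<lambda>m. real (Ycount H d n m))) \<longlonglongrightarrow> 0"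
proof -
  have "(\<lambda>n. (Exp d n (\<lambda>m. real (Ycount H d n m)) * real n ^ mg_e H / real n ^ mg_v H) * (1 / real n) ^ (mg_e H - mg_v H))
      \<longlonglongrightarrow> lam p \<mu> H * 0 ^ (mg_e H - mg_v H)"
    by (intro tendsto_mult Exp_Ycount_scaled_tendsto[OF wf conn] tendsto_power tendsto_const_over_n)
  moreover have "lam p \<mu> H * 0 ^ (mg_e H - mg_v H) = 0" using gt by simp
  moreover have "eventually (\<lambda>n. (Exp d n (\<lambda>m. real (Ycount H d n m)) * real n ^ mg_e H / real n ^ mg_v H) * (1 / real n) ^ (mg_e H - mg_v H)
      = Exp d n (\<lambda>m. real (Ycount H d n m))) sequentially"
    using eventually_gt_at_top[of 0]
  proof eventually_elim
    case (elim n)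
    have "real n ^ mg_e H = real n ^ mg_v H * real n ^ (mg_e H - mg_v H)"
      using gt by (simp flip: power_add)
    then show ?case using elim by (simp add: power_one_over field_simps)
  qed
  ultimately show ?thesis using Lim_transform_eventually by fastforce
qed

lemma Cov_core_tendsto:
  fixes H1 :: "('c, 'e) mgraph" and H2 :: "('f, 'g) mgraph"
  assumes t1: "mg_tree H1" and t2: "mg_tree H2"
    and S: "finite S" and S1: "mg_deg H1 ` verts H1 \<subseteq> S" and S2: "mg_deg H2 ` verts H2 \<subseteq> S"
  defines "X \<equiv> \<lambda>n. copy_weight d n S (\<lambda>k. mg_nk H1 k + mg_nk H2 k) (mg_e H1 + mg_e H2)
                  - copy_weight d n S (mg_nk H1) (mg_e H1) * copy_weight d n S (mg_nk H2) (mg_e H2)"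
  shows "(\<lambda>n. deg_fact_prod H1 * deg_fact_prod H2 / real (mg_aut H1 * mg_aut H2) * X n / real n)
     \<longlonglongrightarrow> lam p \<mu> H1 * lam p \<mu> H2 * (2 * real (mg_e H1) * real (mg_e H2) / \<mu>
          - (\<Sum>k\<in>mg_deg H1 ` verts H1. real (mg_nk H1 k) * real (mg_nk H2 k) / p k))"
proof -
  have wf1: "mg_wf H1" and v1: "mg_v H1 = mg_e H1 + 1" using t1 by (auto simp: mg_tree_def)
  have wf2: "mg_wf H2" and v2: "mg_v H2 = mg_e H2 + 1" using t2 by (auto simp: mg_tree_def)
  have fV1: "finite (verts H1)" and fV2: "finite (verts H2)" using mg_wfD(1)[OF wf1] mg_wfD(1)[OF wf2] .
  have V1: "(\<Sum>k\<in>S. mg_nk H1 k) = mg_e H1 + 1" using sum_mg_nk_superset[OF S S1 fV1] v1 by simp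
  have V2: "(\<Sum>k\<in>S. mg_nk H2 k) = mg_e H2 + 1" using sum_mg_nk_superset[OF S S2 fV2] v2 by simp
  define Lim where "Lim = (\<Prod>k\<in>S. p k ^ (mg_nk H1 k + mg_nk H2 k)) * (1 / \<mu>) ^ (mg_e H1 + mg_e H2) *
         (2 * real (mg_e H1) * real (mg_e H2) / \<mu> - (\<Sum>k\<in>S. real (mg_nk H1 k) * real (mg_nk H2 k) / p k))"
  have D: "(\<lambda>n. real n * X n * real n ^ (mg_e H1 + mg_e H2) / real n ^ ((\<Sum>k\<in>S. mg_nk H1 k) + (\<Sum>k\<in>S. mg_nk H2 k))) \<longlonglongrightarrow> Lim"
    unfolding X_def Lim_def by (rule copy_weight_second_order[OF S])
  have "eventually (\<lambda>n. real n * X n * real n ^ (mg_e H1 + mg_e H2) / real n ^ ((\<Sum>k\<in>S. mg_nk H1 k) + (\<Sum>k\<in>S. mg_nk H2 k))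
       = X n / real n) sequentially"
    using eventually_gt_at_top[of 0]
  proof eventually_elim
    case (elim n)
    have "real n ^ ((\<Sum>k\<in>S. mg_nk H1 k) + (\<Sum>k\<in>S. mg_nk H2 k)) = real n ^ (mg_e H1 + mg_e H2) * (real n * real n)"
      unfolding V1 V2 by (simp add: power_add)
    then show ?case using elim by (simp add: field_simps)
  qed
  from Lim_transform_eventually[OF D this]
  have XL: "(\<lambda>n. X n / real n) \<longlonglongrightarrow> Lim" .
  have L: "(\<lambda>n. deg_fact_prod H1 * deg_fact_prod H2 / real (mg_aut H1 * mg_aut H2) * X n / real n)
      \<longlonglongrightarrow> deg_fact_prod H1 * deg_fact_prod H2 / real (mg_aut H1 * mg_aut H2) * Lim"
    using tendsto_mult[OF tendsto_const XL, of "deg_fact_prod H1 * deg_fact_prod H2 / real (mg_aut H1 * mg_aut H2)"] by simp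
  have PP1: "deg_prob_prod p H1 = (\<Prod>k\<in>S. p k ^ mg_nk H1 k)" using prod_mg_nk_superset[OF S S1 fV1] by simp
  have PP2: "deg_prob_prod p H2 = (\<Prod>k\<in>S. p k ^ mg_nk H2 k)" using prod_mg_nk_superset[OF S S2 fV2] by simp
  have sumeq: "(\<Sum>k\<in>mg_deg H1 ` verts H1. real (mg_nk H1 k) * real (mg_nk H2 k) / p k)
      = (\<Sum>k\<in>S. real (mg_nk H1 k) * real (mg_nk H2 k) / p k)"
  proof (rule sum.mono_neutral_left[OF S S1])
    show "\<forall>i\<in>S - mg_deg H1 ` verts H1. real (mg_nk H1 i) * real (mg_nk H2 i) / p i = 0"
      using mg_nk_eq_0[of _ H1] by auto
  qed
  have "deg_fact_prod H1 * deg_fact_prod H2 / real (mg_aut H1 * mg_aut H2) * Lim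
      = lam p \<mu> H1 * lam p \<mu> H2 * (2 * real (mg_e H1) * real (mg_e H2) / \<mu>
          - (\<Sum>k\<in>mg_deg H1 ` verts H1. real (mg_nk H1 k) * real (mg_nk H2 k) / p k))"
    unfolding lam_eq Lim_def sumeq PP1 PP2
    by (simp add: power_add prod.distrib field_simps)
  then show ?thesis using L by simp
qed

lemma Cov_Ycount_trees_noniso_tendsto:
  fixes H1 :: "('c, 'e) mgraph" and H2 :: "('f, 'g) mgraph"
  assumes t1: "mg_tree H1" and t2: "mg_tree H2" and ni: "\<not> mg_iso H1 H2"
  shows "(\<lambda>n. Cov d n (\<lambda>m. real (Ycount H1 d n m)) (\<lambda>m. real (Ycount H2 d n m)) / real n)
     \<longlonglongrightarrow> sigma p \<mu> H1 H2"
proof -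
  have wf1: "mg_wf H1" and c1: "mg_connected H1" using t1 by (auto simp: mg_tree_def)
  have wf2: "mg_wf H2" and c2: "mg_connected H2" using t2 by (auto simp: mg_tree_def)
  define S where "S = mg_deg H1 ` verts H1 \<union> mg_deg H2 ` verts H2"
  have S: "finite S" using mg_wfD(1)[OF wf1] mg_wfD(1)[OF wf2] by (simp add: S_def)
  have S1: "mg_deg H1 ` verts H1 \<subseteq> S" and S2: "mg_deg H2 ` verts H2 \<subseteq> S" by (auto simp: S_def)
  define X where "X \<equiv> \<lambda>n. copy_weight d n S (\<lambda>k. mg_nk H1 k + mg_nk H2 k) (mg_e H1 + mg_e H2)
                  - copy_weight d n S (mg_nk H1) (mg_e H1) * copy_weight d n S (mg_nk H2) (mg_e H2)"
  have CovX: "Cov d n (\<lambda>m. real (Ycount H1 d n m)) (\<lambda>m. real (Ycount H2 d n m))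
      = deg_fact_prod H1 * deg_fact_prod H2 / real (mg_aut H1 * mg_aut H2) * X n" if n: "n \<ge> 1" for n
  proof -
    have ev: "even (\<Sum>i<n. d n i)" by (rule even_sum[OF n])
    have "real (mg_aut H1) > 0" "real (mg_aut H2) > 0" using mg_aut_pos[OF wf1] mg_aut_pos[OF wf2] by simp_all
    then show ?thesis
      unfolding Cov_def X_def Exp_Ycount_exact[where d = d and n = n, OF wf1 c1 ev S S1]
        Exp_Ycount_exact[where d = d and n = n, OF wf2 c2 ev S S2]
        Exp_Ycount_product_exact[where d = d and n = n, OF wf1 c1 wf2 c2 ni ev S S1 S2]
      by (simp add: field_simps)
  qed
  have core: "(\<lambda>n. deg_fact_prod H1 * deg_fact_prod H2 / real (mg_aut H1 * mg_aut H2) * X n / real n)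
     \<longlonglongrightarrow> lam p \<mu> H1 * lam p \<mu> H2 * (2 * real (mg_e H1) * real (mg_e H2) / \<mu>
          - (\<Sum>k\<in>mg_deg H1 ` verts H1. real (mg_nk H1 k) * real (mg_nk H2 k) / p k))"
    unfolding X_def by (rule Cov_core_tendsto[OF t1 t2 S S1 S2])
  have sig: "sigma p \<mu> H1 H2 = lam p \<mu> H1 * lam p \<mu> H2 * (2 * real (mg_e H1) * real (mg_e H2) / \<mu>
          - (\<Sum>k\<in>mg_deg H1 ` verts H1. real (mg_nk H1 k) * real (mg_nk H2 k) / p k))"
    using ni by (simp add: sigma_def)
  have "eventually (\<lambda>n. deg_fact_prod H1 * deg_fact_prod H2 / real (mg_aut H1 * mg_aut H2) * X n / real n
      = Cov d n (\<lambda>m. real (Ycount H1 d n m)) (\<lambda>m. real (Ycount H2 d n m)) / real n) sequentially"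
    using eventually_ge_at_top[of 1] by eventually_elim (simp add: CovX)
  with core show ?thesis unfolding sig by (rule Lim_transform_eventually)
qed

lemma Cov_Ycount_trees_iso_tendsto:
  fixes H1 :: "('c, 'e) mgraph" and H2 :: "('f, 'g) mgraph"
  assumes t1: "mg_tree H1" and t2: "mg_tree H2" and iso12: "mg_iso H1 H2"
  shows "(\<lambda>n. Cov d n (\<lambda>m. real (Ycount H1 d n m)) (\<lambda>m. real (Ycount H2 d n m)) / real n)
     \<longlonglongrightarrow> sigma p \<mu> H1 H2"
proof -
  have wf1: "mg_wf H1" and c1: "mg_connected H1" using t1 by (auto simp: mg_tree_def)
  have wf2: "mg_wf H2" using t2 by (auto simp: mg_tree_def)
  obtain \<psi> \<tau> where i: "(\<psi>, \<tau>) \<in> isos H1 H2" using mg_isoE[OF wf1 iso12] by blast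
  have e2: "mg_e H2 = mg_e H1" by (rule iso_mg_e[OF wf1 wf2 i])
  have nk2: "mg_nk H2 = mg_nk H1" using iso_mg_nk[OF wf1 wf2 i] by (simp add: fun_eq_iff)
  have lam2: "lam p \<mu> H2 = lam p \<mu> H1" by (rule iso_lam[OF wf1 wf2 i])
  define S where "S = mg_deg H1 ` verts H1"
  have S: "finite S" using mg_wfD(1)[OF wf1] by (simp add: S_def)
  have S1: "mg_deg H1 ` verts H1 \<subseteq> S" by (simp add: S_def)
  define X where "X \<equiv> \<lambda>n. copy_weight d n S (\<lambda>k. mg_nk H1 k + mg_nk H1 k) (mg_e H1 + mg_e H1)
                  - copy_weight d n S (mg_nk H1) (mg_e H1) * copy_weight d n S (mg_nk H1) (mg_e H1)"
  have CovX: "Cov d n (\<lambda>m. real (Ycount H1 d n m)) (\<lambda>m. real (Ycount H2 d n m))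
      = deg_fact_prod H1 * deg_fact_prod H1 / real (mg_aut H1 * mg_aut H1) * X n + Exp d n (\<lambda>m. real (Ycount H1 d n m))"
    if n: "n \<ge> 1" for n
  proof -
    have ev: "even (\<Sum>i<n. d n i)" by (rule even_sum[OF n])
    have "Exp d n (\<lambda>m. real (Ycount H2 d n m)) = Exp d n (\<lambda>m. real (Ycount H1 d n m))"
      by (rule Exp_cong[where d = d and n = n, OF ev]) (simp add: Ycount_iso[OF wf1 wf2 iso12])
    moreover have "real (mg_aut H1) > 0" using mg_aut_pos[OF wf1] by simp
    ultimately show ?thesis
      unfolding Cov_def X_def Exp_Ycount_product_iso_exact[where d = d and n = n, OF wf1 c1 wf2 iso12 ev S S1]
      by (simp add: Exp_Ycount_exact[where d = d and n = n, OF wf1 c1 ev S S1] field_simps)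
  qed
  have core: "(\<lambda>n. deg_fact_prod H1 * deg_fact_prod H1 / real (mg_aut H1 * mg_aut H1) * X n / real n)
     \<longlonglongrightarrow> lam p \<mu> H1 * lam p \<mu> H1 * (2 * real (mg_e H1) * real (mg_e H1) / \<mu>
          - (\<Sum>k\<in>mg_deg H1 ` verts H1. real (mg_nk H1 k) * real (mg_nk H1 k) / p k))"
    unfolding X_def by (rule Cov_core_tendsto[OF t1 t1 S S1 S1])
  have sig: "sigma p \<mu> H1 H2 = lam p \<mu> H1 + lam p \<mu> H1 * lam p \<mu> H1 * (2 * real (mg_e H1) * real (mg_e H1) / \<mu>
          - (\<Sum>k\<in>mg_deg H1 ` verts H1. real (mg_nk H1 k) * real (mg_nk H1 k) / p k))"
    using iso12 by (simp add: sigma_def lam2 e2 nk2)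
  have "(\<lambda>n. deg_fact_prod H1 * deg_fact_prod H1 / real (mg_aut H1 * mg_aut H1) * X n / real n
      + Exp d n (\<lambda>m. real (Ycount H1 d n m)) / real n) \<longlonglongrightarrow> sigma p \<mu> H1 H2"
    using tendsto_add[OF core Exp_Ycount_tree_tendsto[OF t1]] unfolding sig by (simp add: add.commute)
  moreover have "eventually (\<lambda>n. deg_fact_prod H1 * deg_fact_prod H1 / real (mg_aut H1 * mg_aut H1) * X n / real n
      + Exp d n (\<lambda>m. real (Ycount H1 d n m)) / real n
      = Cov d n (\<lambda>m. real (Ycount H1 d n m)) (\<lambda>m. real (Ycount H2 d n m)) / real n) sequentially"
    using eventually_ge_at_top[of 1] by eventually_elim (simp add: CovX add_divide_distrib)
  ultimately show ?thesis by (rule Lim_transform_eventually)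
qed

lemma Cov_Ycount_trees:
  assumes "mg_tree H1" "mg_tree H2"
  shows "(\<lambda>n. Cov d n (\<lambda>m. real (Ycount H1 d n m)) (\<lambda>m. real (Ycount H2 d n m)) - real n * sigma p \<mu> H1 H2)
     \<in> o(\<lambda>n. real n)"
proof (cases "mg_iso H1 H2")
  case True
  show ?thesis by (rule smallo_of_tendsto_div[OF Cov_Ycount_trees_iso_tendsto[OF assms True]])
next
  case False
  show ?thesis by (rule smallo_of_tendsto_div[OF Cov_Ycount_trees_noniso_tendsto[OF assms False]])
qed

end

theorem lemma7p1:
  fixes d :: "nat \<Rightarrow> nat \<Rightarrow> nat" and p :: "nat \<Rightarrow> real" and \<mu> :: real
  assumes even_sum: "\<And>n. n \<ge> 1 \<Longrightarrow> even (\<Sum>i<n. d n i)"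
    and p_nonneg: "\<And>k. p k \<ge> 0"
    and p_sum: "p sums 1"
    and A1_lim: "\<And>k. (\<lambda>n. real (nk d n k) / real n) \<longlonglongrightarrow> p k"
    and mu_summable: "summable (\<lambda>k. real k * p k)"
    and mu_def: "\<mu> = (\<Sum>k. real k * p k)"
    and mu_pos: "\<mu> > 0"
    and A2: "(\<lambda>n. (\<Sum>i<n. real (d n i)) / real n) \<longlonglongrightarrow> \<mu>"
  shows
   "(\<forall>H :: ('a, 'b) mgraph. mg_tree H \<longrightarrow>
       (\<lambda>n. Exp d n (\<lambda>m. real (Ycount H d n m)) - real n * lam p \<mu> H) \<in> o(\<lambda>n. real n))
  \<and> (\<forall>(H1 :: ('c, 'e) mgraph) (H2 :: ('f, 'g) mgraph). mg_tree H1 \<and> mg_tree H2 \<longrightarrow>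
       (\<lambda>n. Cov d n (\<lambda>m. real (Ycount H1 d n m)) (\<lambda>m. real (Ycount H2 d n m))
             - real n * sigma p \<mu> H1 H2) \<in> o(\<lambda>n. real n))
  \<and> (\<forall>H :: ('i, 'j) mgraph. mg_unicyclic H \<longrightarrow>
       (\<lambda>n. Exp d n (\<lambda>m. real (Ycount H d n m))) \<longlonglongrightarrow> lam p \<mu> H)
  \<and> (\<forall>(Hs :: ('k, 'l) mgraph list) (rs :: nat list).
       length rs = length Hs \<and> (\<forall>H\<in>set Hs. mg_unicyclic H) \<and>
       (\<forall>i<length Hs. \<forall>j<length Hs. i \<noteq> j \<longrightarrow> \<not> mg_iso (Hs ! i) (Hs ! j)) \<longrightarrow>
       (\<lambda>n. Exp d n (\<lambda>m. \<Prod>i<length Hs. ffall (real (Ycount (Hs ! i) d n m)) (rs ! i)))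
         \<longlonglongrightarrow> (\<Prod>i<length Hs. lam p \<mu> (Hs ! i) ^ (rs ! i)))
  \<and> (\<forall>H :: ('q, 'r) mgraph. mg_wf H \<and> mg_connected H \<and> mg_e H > mg_v H \<longrightarrow>
       (\<lambda>n. Exp d n (\<lambda>m. real (Ycount H d n m))) \<longlonglongrightarrow> 0)"
proof -
  interpret degree_asymptotics d p \<mu>
    by unfold_locales (use even_sum A1_lim mu_pos A2 in auto)
  show ?thesis
    using Exp_Ycount_tree Cov_Ycount_trees Exp_Ycount_unicyclic_tendsto
      Exp_factorial_moments_unicyclic_tendsto Exp_Ycount_tendsto_0
    by blast
qed

end
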